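(* Let $L/K$ be a nontrivial finite extension inside $\bar K$, $G={\rm Gal}(\tilde L/K)$, $H={\rm Gal}(\tilde L/L)$, and $H^G$ the normal closure of $H$ in $G$. (1) $F=\tilde L^{H^G}$ is the unique intermediate field $K\subseteq F\subseteq L$ such that $F/K$ is Galois of maximum possible degree (among subfields of $L$ Galois over $K$). (2) Define the ascending index $t_K(L)=[F:K]$ and $u_K(L)=[L:F]$. Then $t_K(L)\,u_K(L)=[L:K]$, $t_K(L)=[G:H^G]$, $u_K(L)=[H^G:H]$, and $r_K(L)\mid t_K(L)\,r_F(L)$. (3) There is a unique strictly ascending chain of fields $K=F_0\subsetneq F_1\subsetneq\cdots\subsetneq F_k$ inside $L$ such that for all $i\ge1$, $F_i/F_{i-1}$ is Galois of maximum possible degree among subfields of $L$ Galois over $F_{i-1}$, the chain terminating at $F_k$ with $t_{F_k}(L)=1$. It corresponds (via $F_i=\tilde L^{G_i}$) to the unique strictly descending chain of subgroups $G=G_0\supsetneq G_1\supsetneq\cdots\supsetneq G_k$ with $G_i=H^{G_{i-1}}$ (the normal closure of $H$ in $G_{i-1}$) and $H^{G_k}=G_k$; moreover $t_{F_i}(L)=[G_i:G_{i+1}]$ and $u_{F_i}(L)=[G_{i+1}:H]$. (4) $F_k=L$ iff $L/F_{k-1}$ is Galois. (5) $t_K(L)=1$ iff $H^G=G$ iff the chain in (3) is the singleton $K$. (6) $L/K$ is Galois iff $H^G=1$ iff $H^G=H$ iff the chain in (3) is $K\subsetneq L$. (7) $H$ is a proper normal subgroup of $H^G$ iff ($H^G\ne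 G$, $H^G\neq H$ and $H\trianglelefteq H^G$) iff the chain in (3) is $K\subsetneq F\subsetneq L$.
   Context: $K$ is a perfect field with a fixed algebraic closure $\bar K$; all extensions are finite and contained in $\bar K$. For a finite extension $L/K$, $\tilde L$ denotes its Galois closure in $\bar K$. Writing $L=K(\alpha)$ with $f$ the minimal polynomial of $\alpha$ over $K$, the cluster size $r_K(L)$ is the number of roots of $f$ lying in $L$ (independent of $\alpha$; it equals $|{\rm Aut}(L/K)|$); for an intermediate field $E$, $r_E(L)$ and $t_E(L)$ are defined in the same way with base field $E$. For a subgroup $H$ of a group $G$, $H^G$ is the intersection of all normal subgroups of $G$ containing $H$. *)

theory Defs
  imports "HOL-Algebra.Coset" "HOL-Computational_Algebra.Polynomial"
begin

section \<open>Fields inside an ambient field (playing the role of the algebraic closure)\<close>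

definition is_subfield :: "'a::field set \<Rightarrow> bool" where
  "is_subfield S \<longleftrightarrow> 0 \<in> S \<and> 1 \<in> S \<and>
     (\<forall>x\<in>S. \<forall>y\<in>S. x + y \<in> S \<and> x - y \<in> S \<and> x * y \<in> S) \<and>
     (\<forall>x\<in>S. x \<noteq> 0 \<longrightarrow> inverse x \<in> S)"

definition poly_over :: "'a::field set \<Rightarrow> 'a poly \<Rightarrow> bool" where
  "poly_over E p \<longleftrightarrow> (\<forall>i. coeff p i \<in> E)"

definition irred_over :: "'a::field set \<Rightarrow> 'a poly \<Rightarrow> bool" where
  "irred_over E p \<longleftrightarrow> poly_over E p \<and> degree p \<ge> 1 \<and>
     \<not> (\<exists>q s. poly_over E q \<and> poly_over E s \<and> degree q \<ge> 1 \<and> degree s \<ge> 1 \<and> p = q * s)"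

definition minpoly :: "'a::field set \<Rightarrow> 'a \<Rightarrow> 'a poly" where
  "minpoly E x = (THE p. lead_coeff p = 1 \<and> irred_over E p \<and> poly p x = 0)"

definition algebraic_over :: "'a::field set \<Rightarrow> 'a \<Rightarrow> bool" where
  "algebraic_over E x \<longleftrightarrow> (\<exists>p. poly_over E p \<and> p \<noteq> 0 \<and> poly p x = 0)"

definition alg_closed_type :: "'a::field itself \<Rightarrow> bool" where
  "alg_closed_type _ \<longleftrightarrow> (\<forall>p::'a poly. degree p \<ge> 1 \<longrightarrow> (\<exists>z. poly p z = 0))"

definition is_alg_closure_of :: "'a::field set \<Rightarrow> bool" where
  "is_alg_closure_of K \<longleftrightarrow> alg_closed_type TYPE('a) \<and> (\<forall>x::'a. algebraic_over K x)"

definition perfect_subfield :: "'a::field set \<Rightarrow> bool" where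
  "perfect_subfield K \<longleftrightarrow> is_subfield K \<and>
     (CHAR('a) = 0 \<or> (\<forall>x\<in>K. \<exists>y\<in>K. y ^ CHAR('a) = x))"

definition span_over :: "'a::field set \<Rightarrow> 'a set \<Rightarrow> 'a set" where
  "span_over E B = {x. \<exists>c. (\<forall>b\<in>B. c b \<in> E) \<and> x = (\<Sum>b\<in>B. c b * b)}"

definition indep_over :: "'a::field set \<Rightarrow> 'a set \<Rightarrow> bool" where
  "indep_over E B \<longleftrightarrow> (\<forall>c. (\<forall>b\<in>B. c b \<in> E) \<and> (\<Sum>b\<in>B. c b * b) = 0 \<longrightarrow> (\<forall>b\<in>B. c b = 0))"

definition basis_over :: "'a::field set \<Rightarrow> 'a set \<Rightarrow> 'a set \<Rightarrow> bool" where
  "basis_over E M B \<longleftrightarrow> finite B \<and> B \<subseteq> M \<and> indep_over E B \<and> span_over E B = M"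

definition finite_ext :: "'a::field set \<Rightarrow> 'a set \<Rightarrow> bool" where
  "finite_ext E M \<longleftrightarrow> is_subfield E \<and> is_subfield M \<and> E \<subseteq> M \<and> (\<exists>B. basis_over E M B)"

definition ext_degree :: "'a::field set \<Rightarrow> 'a set \<Rightarrow> nat" where
  "ext_degree E M = (if finite_ext E M then card (SOME B. basis_over E M B) else 0)"

definition normal_ext :: "'a::field set \<Rightarrow> 'a set \<Rightarrow> bool" where
  "normal_ext E M \<longleftrightarrow> (\<forall>x\<in>M. \<forall>y. poly (minpoly E x) y = 0 \<longrightarrow> y \<in> M)"

definition separable_ext :: "'a::field set \<Rightarrow> 'a set \<Rightarrow> bool" where
  "separable_ext E M \<longleftrightarrow> (\<forall>x\<in>M. rsquarefree (minpoly E x))"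

definition galois_ext :: "'a::field set \<Rightarrow> 'a set \<Rightarrow> bool" where
  "galois_ext E M \<longleftrightarrow> finite_ext E M \<and> normal_ext E M \<and> separable_ext E M"

definition gal_closure :: "'a::field set \<Rightarrow> 'a set \<Rightarrow> 'a set" where
  "gal_closure E L = \<Inter> {M. L \<subseteq> M \<and> galois_ext E M}"

definition adjoin :: "'a::field set \<Rightarrow> 'a \<Rightarrow> 'a set" where
  "adjoin E a = \<Inter> {M. is_subfield M \<and> E \<subseteq> M \<and> a \<in> M}"

text \<open>Cluster size r_E(L): number of roots in L of the minimal polynomial over E of a
  primitive element of L/E.\<close>
definition cluster_size :: "'a::field set \<Rightarrow> 'a set \<Rightarrow> nat" where
  "cluster_size E L = (let a = (SOME a. a \<in> L \<and> adjoin E a = L)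
                        in card {y \<in> L. poly (minpoly E a) y = 0})"

definition aut :: "'a::field set \<Rightarrow> 'a set \<Rightarrow> ('a \<Rightarrow> 'a) set" where
  "aut M E = {\<sigma>. bij_betw \<sigma> M M \<and>
     (\<forall>x\<in>M. \<forall>y\<in>M. \<sigma> (x + y) = \<sigma> x + \<sigma> y \<and> \<sigma> (x * y) = \<sigma> x * \<sigma> y) \<and>
     (\<forall>x\<in>E. \<sigma> x = x) \<and> (\<forall>x. x \<notin> M \<longrightarrow> \<sigma> x = x)}"

definition galgrp :: "'a::field set \<Rightarrow> 'a set \<Rightarrow> ('a \<Rightarrow> 'a) monoid" where
  "galgrp M E = \<lparr>carrier = aut M E, monoid.mult = (\<lambda>f g. f \<circ> g), one = id\<rparr>"

definition fix_field :: "'a::field set \<Rightarrow> ('a \<Rightarrow> 'a) set \<Rightarrow> 'a set" where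
  "fix_field M S = {x \<in> M. \<forall>\<sigma>\<in>S. \<sigma> x = x}"

definition ncl :: "('g, 'b) monoid_scheme \<Rightarrow> 'g set \<Rightarrow> 'g set" where
  "ncl G H = \<Inter> {N. N \<lhd> G \<and> H \<subseteq> N}"

definition idx :: "('g, 'b) monoid_scheme \<Rightarrow> 'g set \<Rightarrow> nat" where
  "idx G H = card (rcosets\<^bsub>G\<^esub> H)"

definition asc_field :: "'a::field set \<Rightarrow> 'a set \<Rightarrow> 'a set" where
  "asc_field E L = (let M = gal_closure E L
                    in fix_field M (ncl (galgrp M E) (aut M L)))"

definition t_idx :: "'a::field set \<Rightarrow> 'a set \<Rightarrow> nat" where
  "t_idx E L = ext_degree E (asc_field E L)"

definition u_idx :: "'a::field set \<Rightarrow> 'a set \<Rightarrow> nat" where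
  "u_idx E L = ext_degree (asc_field E L) L"

definition asc_chain :: "'a::field set \<Rightarrow> 'a set \<Rightarrow> 'a set list \<Rightarrow> bool" where
  "asc_chain K L cs \<longleftrightarrow> cs \<noteq> [] \<and> cs ! 0 = K \<and>
     (\<forall>i. Suc i < length cs \<longrightarrow>
        cs ! i \<subset> cs ! Suc i \<and> cs ! Suc i \<subseteq> L \<and> galois_ext (cs ! i) (cs ! Suc i) \<and>
        (\<forall>E. cs ! i \<subseteq> E \<and> E \<subseteq> L \<and> galois_ext (cs ! i) E \<longrightarrow>
              ext_degree (cs ! i) E \<le> ext_degree (cs ! i) (cs ! Suc i))) \<and>
     t_idx (last cs) L = 1"

definition desc_chain :: "('g, 'b) monoid_scheme \<Rightarrow> 'g set \<Rightarrow> 'g set list \<Rightarrow> bool" where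
  "desc_chain G H gs \<longleftrightarrow> gs \<noteq> [] \<and> gs ! 0 = carrier G \<and>
     (\<forall>i. Suc i < length gs \<longrightarrow>
        gs ! Suc i = ncl (G\<lparr>carrier := gs ! i\<rparr>) H \<and> gs ! Suc i \<subset> gs ! i) \<and>
     ncl (G\<lparr>carrier := last gs\<rparr>) H = last gs"

end

(* Over a perfect field every finite extension is separable and has a primitive element, so
   the Galois correspondence holds for the Galois closure Lt of L (which follows from
   Artin's theorem on fixed fields).  A subfield of L is Galois over K exactly when its fixing
   group is a normal subgroup of G = Gal(Lt/K) containing H = Gal(Lt/L), so the largest such
   subfield F is the fixed field of the smallest such subgroup, the normal closure H^G, and
   degrees become indices by Lagrange's theorem.  Repeating this over F, whose Galois group
   over Lt is H^G, gives the descending chain G_(i+1) = H^(G_i); it becomes stationary because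
   G is finite, its fixed fields form the ascending chain, and the maximality of every step
   makes both chains unique.  Finally, restricting Aut(L/K) to the Galois extension F/K is a
   homomorphism into Gal(F/K) with kernel Aut(L/F), which gives r_K(L) | t_K(L) r_F(L). *)

theory Submission
  imports Defs "HOL-Computational_Algebra.Primes" "HOL-Algebra.Embedded_Algebras"
    "HOL-Algebra.Multiplicative_Group"
begin

hide_const (open) UnivPoly.monom UnivPoly.coeff Module.smult

lemma is_subfield_zero: "is_subfield S \<Longrightarrow> 0 \<in> S" by (simp add: is_subfield_def)
lemma is_subfield_one: "is_subfield S \<Longrightarrow> 1 \<in> S" by (simp add: is_subfield_def)
lemma is_subfield_add: "is_subfield S \<Longrightarrow> x \<in> S \<Longrightarrow> y \<in> S \<Longrightarrow> x + y \<in> S" by (simp add: is_subfield_def)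
lemma is_subfield_diff: "is_subfield S \<Longrightarrow> x \<in> S \<Longrightarrow> y \<in> S \<Longrightarrow> x - y \<in> S" by (simp add: is_subfield_def)
lemma is_subfield_mult: "is_subfield S \<Longrightarrow> x \<in> S \<Longrightarrow> y \<in> S \<Longrightarrow> x * y \<in> S" by (simp add: is_subfield_def)
lemma is_subfield_uminus: "is_subfield S \<Longrightarrow> x \<in> S \<Longrightarrow> - x \<in> S"
  using is_subfield_diff[of S 0 x] is_subfield_zero[of S] by simp
lemma is_subfield_inverse: "is_subfield S \<Longrightarrow> x \<in> S \<Longrightarrow> inverse x \<in> S"
  by (cases "x = 0") (auto simp: is_subfield_def)
lemma is_subfield_divide: "is_subfield S \<Longrightarrow> x \<in> S \<Longrightarrow> y \<in> S \<Longrightarrow> x / y \<in> S"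
  by (simp add: divide_inverse is_subfield_mult is_subfield_inverse)
lemma is_subfield_power: "is_subfield S \<Longrightarrow> x \<in> S \<Longrightarrow> x ^ n \<in> S"
  by (induction n) (auto simp: is_subfield_one is_subfield_mult)
lemma is_subfield_sum: "is_subfield S \<Longrightarrow> (\<And>i. i \<in> A \<Longrightarrow> f i \<in> S) \<Longrightarrow> sum f A \<in> S"
  by (induction A rule: infinite_finite_induct) (auto simp: is_subfield_zero is_subfield_add)
lemma is_subfield_of_nat: "is_subfield S \<Longrightarrow> of_nat n \<in> S"
  by (induction n) (auto simp: is_subfield_zero is_subfield_one is_subfield_add)
lemma is_subfield_Inter: "(\<And>M. M \<in> \<M> \<Longrightarrow> is_subfield M) \<Longrightarrow> is_subfield (\<Inter>\<M>)"
  unfolding is_subfield_def by blast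

lemma adjoin_is_subfield: "is_subfield (adjoin E a)"
  unfolding adjoin_def by (rule is_subfield_Inter) auto
lemma adjoin_base: "E \<subseteq> adjoin E a"
  unfolding adjoin_def by auto
lemma adjoin_gen: "a \<in> adjoin E a"
  unfolding adjoin_def by auto
lemma adjoin_least: "is_subfield M \<Longrightarrow> E \<subseteq> M \<Longrightarrow> a \<in> M \<Longrightarrow> adjoin E a \<subseteq> M"
  unfolding adjoin_def by auto

lemma poly_over_coeff: "poly_over E p \<Longrightarrow> coeff p i \<in> E"
  by (simp add: poly_over_def)
lemma poly_over_mono: "poly_over E p \<Longrightarrow> E \<subseteq> E' \<Longrightarrow> poly_over E' p"
  by (auto simp: poly_over_def)
lemma poly_over_0: "is_subfield E \<Longrightarrow> poly_over E 0"
  by (simp add: poly_over_def is_subfield_zero)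
lemma poly_over_const: "is_subfield E \<Longrightarrow> c \<in> E \<Longrightarrow> poly_over E [:c:]"
  by (simp add: poly_over_def is_subfield_zero coeff_pCons split: nat.splits)
lemma poly_over_1: "is_subfield E \<Longrightarrow> poly_over E 1"
  by (simp add: one_pCons poly_over_const is_subfield_one)
lemma poly_over_pCons: "is_subfield E \<Longrightarrow> poly_over E (pCons a p) \<longleftrightarrow> a \<in> E \<and> poly_over E p"
  unfolding poly_over_def
  by (auto simp: coeff_pCons split: nat.splits)
lemma poly_over_add: "is_subfield E \<Longrightarrow> poly_over E p \<Longrightarrow> poly_over E q \<Longrightarrow> poly_over E (p + q)"
  by (simp add: poly_over_def is_subfield_add)
lemma poly_over_diff: "is_subfield E \<Longrightarrow> poly_over E p \<Longrightarrow> poly_over E q \<Longrightarrow> poly_over E (p - q)"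
  by (simp add: poly_over_def is_subfield_diff)
lemma poly_over_smult: "is_subfield E \<Longrightarrow> c \<in> E \<Longrightarrow> poly_over E p \<Longrightarrow> poly_over E (smult c p)"
  by (simp add: poly_over_def is_subfield_mult)
lemma poly_over_mult: "is_subfield E \<Longrightarrow> poly_over E p \<Longrightarrow> poly_over E q \<Longrightarrow> poly_over E (p * q)"
  unfolding poly_over_def coeff_mult by (auto intro!: is_subfield_sum is_subfield_mult)
lemma poly_over_power: "is_subfield E \<Longrightarrow> poly_over E p \<Longrightarrow> poly_over E (p ^ n)"
  by (induction n) (auto simp: poly_over_1 poly_over_mult)
lemma poly_over_monom: "is_subfield E \<Longrightarrow> c \<in> E \<Longrightarrow> poly_over E (monom c n)"
  by (simp add: poly_over_def coeff_monom is_subfield_zero)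
lemma poly_over_linear: "is_subfield E \<Longrightarrow> poly_over E [:a, 1:] \<longleftrightarrow> a \<in> E"
  by (simp add: poly_over_pCons poly_over_const is_subfield_one poly_over_0)
lemma poly_over_prod: "is_subfield E \<Longrightarrow> (\<And>i. i \<in> A \<Longrightarrow> poly_over E (f i)) \<Longrightarrow> poly_over E (prod f A)"
  by (induction A rule: infinite_finite_induct) (auto simp: poly_over_1 poly_over_mult)
lemma poly_over_sum: "is_subfield E \<Longrightarrow> (\<And>i. i \<in> A \<Longrightarrow> poly_over E (f i)) \<Longrightarrow> poly_over E (sum f A)"
  by (induction A rule: infinite_finite_induct) (auto simp: poly_over_0 poly_over_add)
lemma poly_over_pcompose: "is_subfield E \<Longrightarrow> poly_over E p \<Longrightarrow> poly_over E q \<Longrightarrow> poly_over E (pcompose p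
  q)"
  by (induction p)
    (auto simp: pcompose_pCons poly_over_pCons poly_over_add poly_over_mult poly_over_const
      poly_over_0)
lemma poly_over_pderiv: "is_subfield E \<Longrightarrow> poly_over E p \<Longrightarrow> poly_over E (pderiv p)"
  by (auto simp add: poly_over_def coeff_pderiv intro!: is_subfield_mult is_subfield_add
    is_subfield_one is_subfield_of_nat)
lemma poly_over_poly_mem: "is_subfield E \<Longrightarrow> poly_over E p \<Longrightarrow> x \<in> E \<Longrightarrow> poly p x \<in> E"
  by (induction p) (auto simp: poly_over_pCons is_subfield_add is_subfield_mult is_subfield_zero)
lemma poly_over_lead_coeff: "poly_over E p \<Longrightarrow> lead_coeff p \<in> E"
  by (simp add: poly_over_coeff)

lemma degree_cancel_leading:
  fixes p m :: "'a::field poly"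
  assumes "m \<noteq> 0" "degree m \<le> degree p" "p \<noteq> 0"
  defines "c \<equiv> lead_coeff p / lead_coeff m"
  defines "d \<equiv> degree p - degree m"
  shows "p - monom c d * m = 0 \<or> degree (p - monom c d * m) < degree p"
proof -
  let ?q = "p - monom c d * m"
  have lm: "lead_coeff m \<noteq> 0" using assms by simp
  have dm: "degree (monom c d * m) \<le> degree p"
    by (metis add.commute assms(2) d_def degree_monom_le degree_mult_le dual_order.trans
        le_add_diff_inverse2 add_le_mono1 order_refl)
  have dq: "degree ?q \<le> degree p"
    using dm by (simp add: degree_diff_le)
  have "coeff (monom c d * m) (degree p) = c * lead_coeff m"
    using assms(2) by (simp add: coeff_monom_mult d_def)
  then have cq: "coeff ?q (degree p) = 0"
    using lm by (simp add: c_def)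
  show ?thesis
  proof (cases "?q = 0")
    case False
    then have "degree ?q \<noteq> degree p" using cq by (metis leading_coeff_0_iff)
    then show ?thesis using dq by simp
  qed simp
qed

lemma poly_over_divmod:
  fixes p m :: "'a::field poly"
  assumes E: "is_subfield E" and p: "poly_over E p" and m: "poly_over E m"
  shows "poly_over E (p div m) \<and> poly_over E (p mod m)"
  using p
proof (induction "degree p" arbitrary: p rule: less_induct)
  case less
  show ?case
  proof (cases "m = 0 \<or> p = 0 \<or> degree p < degree m")
    case True
    then show ?thesis
      using less.prems E by (auto simp: div_poly_less mod_poly_less poly_over_0)
  next
    case False
    then have m0: "m \<noteq> 0" and p0: "p \<noteq> 0" and dd: "degree m \<le> degree p" by auto
    define c where "c = lead_coeff p / lead_coeff m"
    define d where "d = degree p - degree m"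
    define q where "q = p - monom c d * m"
    have cE: "c \<in> E" unfolding c_def using less.prems m E
      by (simp add: poly_over_coeff is_subfield_divide)
    have qE: "poly_over E q" unfolding q_def
      by (intro poly_over_diff poly_over_mult poly_over_monom E less.prems m cE)
    have pq: "p = q + monom c d * m" by (simp add: q_def)
    have div: "p div m = q div m + monom c d"
      using pq m0 by (metis div_mult_self1 add.commute mult.commute)
    have md: "p mod m = q mod m"
      using pq m0 by (metis mod_mult_self2 mult.commute)
    from degree_cancel_leading[OF m0 dd p0]
    have "q = 0 \<or> degree q < degree p" unfolding q_def c_def d_def .
    then show ?thesis
    proof
      assume "q = 0" then show ?thesis
        using div md E cE by (simp add: poly_over_monom poly_over_0)
    next
      assume "degree q < degree p"
      from less.hyps[OF this qE] show ?thesis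
        using div md E cE by (simp add: poly_over_add poly_over_monom)
    qed
  qed
qed

lemma poly_over_div: "is_subfield E \<Longrightarrow> poly_over E p \<Longrightarrow> poly_over E m \<Longrightarrow> poly_over E (p div m)"
  using poly_over_divmod by blast
lemma poly_over_mod: "is_subfield E \<Longrightarrow> poly_over E p \<Longrightarrow> poly_over E m \<Longrightarrow> poly_over E (p mod m)"
  using poly_over_divmod by blast

definition is_minpoly :: "'a::field set \<Rightarrow> 'a \<Rightarrow> 'a poly \<Rightarrow> bool" where
  "is_minpoly E x m \<longleftrightarrow> poly_over E m \<and> lead_coeff m = 1 \<and> poly m x = 0 \<and>
     (\<forall>q. poly_over E q \<and> q \<noteq> 0 \<and> poly q x = 0 \<longrightarrow> degree m \<le> degree q)"

lemma is_minpoly_exists: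
  assumes E: "is_subfield E" and alg: "algebraic_over E x"
  shows "\<exists>m. is_minpoly E x m"
proof -
  let ?S = "{q. poly_over E q \<and> q \<noteq> 0 \<and> poly q x = 0}"
  have ex: "\<exists>n. \<exists>q\<in>?S. degree q = n" using alg by (auto simp: algebraic_over_def)
  define n where "n = (LEAST n. \<exists>q\<in>?S. degree q = n)"
  obtain q where q: "q \<in> ?S" "degree q = n" using LeastI_ex[OF ex] unfolding n_def by blast
  have min: "n \<le> degree q'" if "q' \<in> ?S" for q'
    unfolding n_def using that by (auto intro: Least_le)
  define m where "m = smult (inverse (lead_coeff q)) q"
  have "q \<noteq> 0" using q(1) by simp
  then have lc: "lead_coeff q \<noteq> 0" by simp
  have "poly_over E m" unfolding m_def
    using q E by (intro poly_over_smult is_subfield_inverse poly_over_lead_coeff) auto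
  moreover have "lead_coeff m = 1" unfolding m_def using lc by simp
  moreover have "poly m x = 0" unfolding m_def using q by simp
  moreover have "degree m = n" unfolding m_def using q lc by simp
  ultimately show ?thesis using min unfolding is_minpoly_def by auto
qed

lemma is_minpoly_nonzero: "is_minpoly E x m \<Longrightarrow> m \<noteq> 0"
  unfolding is_minpoly_def by auto

lemma is_minpoly_div_mult_eq:
  assumes m: "is_minpoly E x m" and E: "is_subfield E" and q: "poly_over E q" "poly q x = 0"
  shows "q = (q div m) * m"
proof -
  have m0: "m \<noteq> 0" using is_minpoly_nonzero[OF m] .
  have mE: "poly_over E m" using m unfolding is_minpoly_def by auto
  have rE: "poly_over E (q mod m)" using poly_over_mod[OF E q(1) mE] .
  have "poly (q mod m) x = 0"
  proof -
    have "q = q div m * m + q mod m" by simp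
    then have "poly q x = poly (q div m) x * poly m x + poly (q mod m) x"
      by (metis poly_add poly_mult)
    then show ?thesis using q m unfolding is_minpoly_def by simp
  qed
  then have "q mod m = 0"
    using m rE degree_mod_less[OF m0, of q] unfolding is_minpoly_def by force
  then show ?thesis by (metis add_0_right div_mult_mod_eq)
qed

lemma is_minpoly_degree: "is_minpoly E x m \<Longrightarrow> degree m \<ge> 1"
proof (rule ccontr)
  assume m: "is_minpoly E x m" and "\<not> degree m \<ge> 1"
  then have "degree m = 0" by simp
  then have "m = [:lead_coeff m:]" by (metis degree_0_id)
  then have "m = 1" using m unfolding is_minpoly_def by (simp add: one_pCons)
  then show False using m unfolding is_minpoly_def by simp
qed

lemma is_minpoly_irred:
  assumes m: "is_minpoly E x m" and E: "is_subfield E"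
  shows "irred_over E m"
proof -
  have m0: "m \<noteq> 0" using is_minpoly_nonzero[OF m] .
  have "\<not> (\<exists>q s. poly_over E q \<and> poly_over E s \<and> degree q \<ge> 1 \<and> degree s \<ge> 1 \<and> m = q * s)"
  proof
    assume "\<exists>q s. poly_over E q \<and> poly_over E s \<and> degree q \<ge> 1 \<and> degree s \<ge> 1 \<and> m = q * s"
    then obtain q s where qs: "poly_over E q" "poly_over E s" "degree q \<ge> 1" "degree s \<ge> 1"
      "m = q * s"
      by blast
    have q0: "q \<noteq> 0" and s0: "s \<noteq> 0" using qs m0 by auto
    have dm: "degree m = degree q + degree s" using qs q0 s0 by (simp add: degree_mult_eq)
    have "poly q x * poly s x = 0" using m qs unfolding is_minpoly_def by (metis poly_mult)
    then have "poly q x = 0 \<or> poly s x = 0" by simp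
    then show False
    proof
      assume "poly q x = 0"
      then have "degree m \<le> degree q" using m qs q0 unfolding is_minpoly_def by blast
      then show False using dm qs by simp
    next
      assume "poly s x = 0"
      then have "degree m \<le> degree s" using m qs s0 unfolding is_minpoly_def by blast
      then show False using dm qs by simp
    qed
  qed
  then show ?thesis using m is_minpoly_degree[OF m] unfolding irred_over_def is_minpoly_def by blast
qed

lemma irred_monic_eq_is_minpoly:
  assumes m: "is_minpoly E x m" and E: "is_subfield E"
    and p: "lead_coeff p = 1" "irred_over E p" "poly p x = 0"
  shows "p = m"
proof -
  have pE: "poly_over E p" using p unfolding irred_over_def by auto
  have mE: "poly_over E m" using m unfolding is_minpoly_def by auto
  have eq: "p = (p div m) * m" using is_minpoly_div_mult_eq[OF m E pE p(3)] .
  have dE: "poly_over E (p div m)" using poly_over_div[OF E pE mE] .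
  have "\<not> degree (p div m) \<ge> 1"
    using p(2) dE mE is_minpoly_degree[OF m] eq unfolding irred_over_def by blast
  then have "degree (p div m) = 0" by simp
  then obtain c where c: "p div m = [:c:]" by (metis degree_0_id)
  have "lead_coeff p = c * lead_coeff m" using eq c by (simp add: lead_coeff_mult)
  then have "c = 1" using p m unfolding is_minpoly_def by simp
  then show ?thesis using eq c by (simp add: one_pCons)
qed

lemma minpoly_eqI:
  assumes m: "is_minpoly E x m" and E: "is_subfield E"
  shows "minpoly E x = m"
  unfolding minpoly_def
proof (rule the_equality)
  show "lead_coeff m = 1 \<and> irred_over E m \<and> poly m x = 0"
    using m is_minpoly_irred[OF m E] unfolding is_minpoly_def by auto
next
  fix p assume "lead_coeff p = 1 \<and> irred_over E p \<and> poly p x = 0"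
  then show "p = m" using irred_monic_eq_is_minpoly[OF m E] by blast
qed

lemma minpoly_is_minpoly:
  assumes E: "is_subfield E" and alg: "algebraic_over E x"
  shows "is_minpoly E x (minpoly E x)"
  using is_minpoly_exists[OF E alg] minpoly_eqI[OF _ E] by metis

lemma minpoly_over: "is_subfield E \<Longrightarrow> algebraic_over E x \<Longrightarrow> poly_over E (minpoly E x)"
  using minpoly_is_minpoly unfolding is_minpoly_def by blast
lemma minpoly_monic: "is_subfield E \<Longrightarrow> algebraic_over E x \<Longrightarrow> lead_coeff (minpoly E x) = 1"
  using minpoly_is_minpoly unfolding is_minpoly_def by blast
lemma minpoly_root: "is_subfield E \<Longrightarrow> algebraic_over E x \<Longrightarrow> poly (minpoly E x) x = 0"
  using minpoly_is_minpoly unfolding is_minpoly_def by blast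
lemma minpoly_nonzero: "is_subfield E \<Longrightarrow> algebraic_over E x \<Longrightarrow> minpoly E x \<noteq> 0"
  using minpoly_is_minpoly is_minpoly_nonzero by blast
lemma minpoly_degree: "is_subfield E \<Longrightarrow> algebraic_over E x \<Longrightarrow> degree (minpoly E x) \<ge> 1"
  using minpoly_is_minpoly is_minpoly_degree by blast
lemma minpoly_degree_le: "is_subfield E \<Longrightarrow> algebraic_over E x \<Longrightarrow> poly_over E q \<Longrightarrow> q \<noteq> 0 \<Longrightarrow> poly q x = 0
   \<Longrightarrow> degree (minpoly E x) \<le> degree q"
  using minpoly_is_minpoly unfolding is_minpoly_def by blast
lemma minpoly_irred: "is_subfield E \<Longrightarrow> algebraic_over E x \<Longrightarrow> irred_over E (minpoly E x)"
  using minpoly_is_minpoly is_minpoly_irred by blast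
lemma minpoly_div_mult_eq: "is_subfield E \<Longrightarrow> algebraic_over E x \<Longrightarrow> poly_over E q \<Longrightarrow> poly q x = 0
   \<Longrightarrow> q = (q div minpoly E x) * minpoly E x"
  using minpoly_is_minpoly is_minpoly_div_mult_eq by blast
lemma minpoly_dvd: "is_subfield E \<Longrightarrow> algebraic_over E x \<Longrightarrow> poly_over E q \<Longrightarrow> poly q x = 0
   \<Longrightarrow> minpoly E x dvd q"
  by (metis dvd_triv_right minpoly_div_mult_eq)

lemma minpoly_unique:
  assumes E: "is_subfield E" and p: "lead_coeff p = 1" "irred_over E p" "poly p x = 0"
  shows "minpoly E x = p"
proof -
  have "algebraic_over E x" using p unfolding algebraic_over_def irred_over_def by force
  from irred_monic_eq_is_minpoly[OF minpoly_is_minpoly[OF E this] E p] show ?thesis by simp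
qed

lemma minpoly_root_eq:
  assumes E: "is_subfield E" "algebraic_over E x" and y: "poly (minpoly E x) y = 0"
  shows "minpoly E y = minpoly E x"
  using minpoly_unique[OF E(1) minpoly_monic[OF E] minpoly_irred[OF E] y] .

lemma minpoly_mono_dvd:
  assumes E: "is_subfield E" "is_subfield E'" "E \<subseteq> E'" and alg: "algebraic_over E x"
  shows "minpoly E' x dvd minpoly E x"
proof -
  have alg': "algebraic_over E' x" using alg E unfolding algebraic_over_def
    by (auto intro: poly_over_mono)
  show ?thesis
    by (rule minpoly_dvd[OF E(2) alg' poly_over_mono[OF minpoly_over[OF E(1) alg] E(3)]
      minpoly_root[OF E(1) alg]])
qed

lemma poly_root_dvd:
  fixes p q :: "'a::comm_semiring_1 poly"
  shows "p dvd q \<Longrightarrow> poly p x = 0 \<Longrightarrow> poly q x = 0"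
  by (auto elim!: dvdE)

lemma order_ge_2_imp_pderiv_root:
  fixes p :: "'a::field poly"
  assumes "order a p \<ge> 2" "p \<noteq> 0"
  shows "poly (pderiv p) a = 0"
proof -
  have "[:-a,1:]^2 dvd p" using assms order_divides by blast
  then obtain r0 where "p = [:-a,1:]^2 * r0" by (elim dvdE)
  then have r: "p = [:-a,1:] * ([:-a,1:] * r0)" by (simp only: power2_eq_square mult.assoc)
  show ?thesis unfolding r pderiv_mult by (simp add: poly_mult)
qed

lemma rsquarefree_dvd:
  fixes p q :: "'a::field poly"
  assumes "rsquarefree q" "p dvd q"
  shows "rsquarefree p"
proof -
  have q0: "q \<noteq> 0" using assms unfolding rsquarefree_def by auto
  then have p0: "p \<noteq> 0" using assms by auto
  have "order a p \<le> order a q" for a using dvd_imp_order_le[OF q0 assms(2)] .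
  then show ?thesis using assms p0 unfolding rsquarefree_def
    by (metis le_0_eq le_Suc_eq One_nat_def)
qed

lemma degree_pderiv_less:
  fixes p :: "'a::field poly"
  assumes "degree p \<ge> 1"
  shows "degree (pderiv p) < degree p"
proof -
  have "degree (pderiv p) \<le> degree p - 1"
    by (rule degree_le) (auto simp: coeff_pderiv coeff_eq_0)
  then show ?thesis using assms by simp
qed

lemma pderiv_zero_eq_sum_monoms:
  fixes m :: "'a::field poly"
  assumes c: "CHAR('a) = c" "c > 0" and dm: "pderiv m = 0"
  shows "m = (\<Sum>j\<le>degree m. monom (coeff m (c * j)) (j * c))"
proof (rule poly_eqI)
  fix n
  have "coeff (\<Sum>j\<le>degree m. monom (coeff m (c * j)) (j * c)) n =
        (\<Sum>j\<le>degree m. if j * c = n then coeff m (c * j) else 0)"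
    by (simp add: coeff_sum coeff_monom)
  also have "\<dots> = coeff m n"
  proof (cases "c dvd n")
    case True
    then obtain k where k: "n = c * k" by (auto elim: dvdE)
    have "(\<Sum>j\<le>degree m. if j * c = n then coeff m (c * j) else 0) =
          (\<Sum>j\<le>degree m. if j = k then coeff m (c * j) else 0)"
      using c(2) k by (intro sum.cong) (auto simp: mult.commute)
    also have "\<dots> = (if k \<le> degree m then coeff m (c * k) else 0)"
      by (simp add: sum.delta')
    also have "\<dots> = coeff m n"
    proof (cases "k \<le> degree m")
      case False
      then have "n > degree m" using k c(2)
        by (metis dual_order.strict_trans1 mult_le_mono1 mult_1 not_le less_one
            linorder_not_less mult_0 Suc_leI)
      then show ?thesis using False by (simp add: coeff_eq_0)
    qed (simp add: k)
    finally show ?thesis .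
  next
    case False
    then have "n \<noteq> 0" by (metis dvd_0_right)
    then obtain i where i: "n = Suc i" by (cases n) auto
    have "of_nat (Suc i) * coeff m (Suc i) = coeff (pderiv m) i" by (simp only: coeff_pderiv)
    then have "of_nat n * coeff m n = 0" using dm i by (simp del: of_nat_Suc)
    moreover have "of_nat n \<noteq> (0::'a)" using False c by (simp add: of_nat_eq_0_iff_char_dvd)
    ultimately have "coeff m n = 0" by simp
    moreover have "(\<Sum>j\<le>degree m. if j * c = n then coeff m (c * j) else 0) = 0"
      using False by (intro sum.neutral) auto
    ultimately show ?thesis by simp
  qed
  finally show "coeff m n = coeff (\<Sum>j\<le>degree m. monom (coeff m (c * j)) (j * c)) n" ..
qed

lemma pderiv_zero_imp_char_power:
  fixes m :: "'a::field poly"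
  assumes K: "is_subfield K" and c: "CHAR('a) = c" "c > 0"
    and perf: "\<forall>y\<in>K. \<exists>z\<in>K. z ^ c = y"
    and mK: "poly_over K m" and dm: "pderiv m = 0"
  shows "\<exists>q. poly_over K q \<and> m = q ^ c"
proof -
  have pc: "prime c" using c prime_CHAR_semidom[where 'a='a] by simp
  define b where "b j = (SOME z. z \<in> K \<and> z ^ c = coeff m (c * j))" for j
  have b: "b j \<in> K \<and> b j ^ c = coeff m (c * j)" for j
  proof -
    have "\<exists>z. z \<in> K \<and> z ^ c = coeff m (c * j)" using perf poly_over_coeff[OF mK] by blast
    then show ?thesis unfolding b_def by (rule someI_ex)
  qed
  define q where "q = (\<Sum>j\<le>degree m. monom (b j) j)"
  have qK: "poly_over K q" unfolding q_def using b K by (intro poly_over_sum poly_over_monom) auto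
  have "q ^ c = (\<Sum>j\<le>degree m. monom (b j) j ^ c)"
    unfolding q_def by (rule freshmans_dream_sum) (use pc c in auto)
  also have "\<dots> = (\<Sum>j\<le>degree m. monom (coeff m (c * j)) (j * c))"
    by (simp add: monom_power b)
  also have "\<dots> = m" using pderiv_zero_eq_sum_monoms[OF c dm] by simp
  finally show ?thesis using qK by auto
qed

section \<open>Separability over a perfect base field\<close>

locale perfect_base_field =
  fixes K :: "'a::field set"
  assumes perf: "perfect_subfield K" and clos: "is_alg_closure_of K"
begin

lemma K_subfield: "is_subfield K"
  using perf unfolding perfect_subfield_def by auto

lemma has_root: "degree (p::'a poly) \<ge> 1 \<Longrightarrow> \<exists>z. poly p z = 0"
  using clos unfolding is_alg_closure_of_def alg_closed_type_def by auto

lemma algebraic_K: "algebraic_over K x"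
  using clos unfolding is_alg_closure_of_def by auto

lemma algebraic_over_ext: "is_subfield E \<Longrightarrow> K \<subseteq> E \<Longrightarrow> algebraic_over E x"
  using algebraic_K[of x] unfolding algebraic_over_def by (meson poly_over_mono)

lemma pderiv_minpoly_K_nonzero: "pderiv (minpoly K x) \<noteq> 0"
proof
  let ?m = "minpoly K x"
  assume pd0: "pderiv ?m = 0"
  have m0: "?m \<noteq> 0" using minpoly_nonzero[OF K_subfield algebraic_K] .
  have mK: "poly_over K ?m" using minpoly_over[OF K_subfield algebraic_K] .
  have dg: "degree ?m \<ge> 1" using minpoly_degree[OF K_subfield algebraic_K] .
  show False
  proof (cases "CHAR('a) = 0")
    case True
    have "coeff (pderiv ?m) (degree ?m - 1) = of_nat (degree ?m) * lead_coeff ?m"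
      using dg by (simp add: coeff_pderiv)
    also have "\<dots> \<noteq> 0" using True dg m0 by (simp add: of_nat_eq_0_iff_char_dvd)
    finally show False using pd0 by simp
  next
    case False
    then have cpos: "CHAR('a) > 0" by simp
    have pf: "\<forall>y\<in>K. \<exists>z\<in>K. z ^ CHAR('a) = y" using perf False unfolding perfect_subfield_def by auto
    obtain q where q: "poly_over K q" "?m = q ^ CHAR('a)"
      using pderiv_zero_imp_char_power[OF K_subfield refl cpos pf mK pd0] by blast
    have c2: "CHAR('a) \<ge> 2" using cpos prime_CHAR_semidom[where 'a='a] by (simp add: prime_ge_2_nat)
    have q0: "q \<noteq> 0" using q m0 cpos by auto
    have "degree ?m = CHAR('a) * degree q" using q by (simp add: degree_power_eq q0)
    then have dq1: "degree q \<ge> 1" using dg by (cases "degree q") auto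
    have "?m = q * q ^ (CHAR('a) - 1)" using q c2
      by (metis One_nat_def Suc_diff_Suc less_le_trans numeral_2_eq_2 power_Suc pos2 diff_zero)
    moreover have "degree (q ^ (CHAR('a) - 1)) \<ge> 1"
      using dq1 c2 by (simp add: degree_power_eq q0)
    moreover have "poly_over K (q ^ (CHAR('a) - 1))" using poly_over_power[OF K_subfield q(1)] .
    ultimately show False
      using minpoly_irred[OF K_subfield algebraic_K] q(1) dq1 unfolding irred_over_def by blast
  qed
qed

lemma rsquarefree_minpoly_K: "rsquarefree (minpoly K x)"
proof (rule ccontr)
  let ?m = "minpoly K x"
  assume ns: "\<not> rsquarefree ?m"
  have m0: "?m \<noteq> 0" using minpoly_nonzero[OF K_subfield algebraic_K] .
  then obtain a where "order a ?m \<noteq> 0" "order a ?m \<noteq> 1" using ns unfolding rsquarefree_def by auto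
  then have o2: "order a ?m \<ge> 2" by simp
  have ra: "poly ?m a = 0" using o2 m0 order_root by fastforce
  have da: "poly (pderiv ?m) a = 0" using order_ge_2_imp_pderiv_root[OF o2 m0] .
  have mina: "minpoly K a = ?m" using minpoly_root_eq[OF K_subfield algebraic_K ra] .
  have mK: "poly_over K ?m" using minpoly_over[OF K_subfield algebraic_K] .
  have "degree (minpoly K a) \<le> degree (pderiv ?m)"
    using minpoly_degree_le[OF K_subfield algebraic_K poly_over_pderiv[OF K_subfield mK]]
      pderiv_minpoly_K_nonzero da by blast
  then show False
    using degree_pderiv_less[OF minpoly_degree[OF K_subfield algebraic_K[of x]]] mina by simp
qed

lemma rsquarefree_minpoly: "is_subfield E \<Longrightarrow> K \<subseteq> E \<Longrightarrow> rsquarefree (minpoly E x)"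
  using rsquarefree_dvd[OF rsquarefree_minpoly_K minpoly_mono_dvd[OF K_subfield _ _ algebraic_K]]
    by blast

lemma card_roots_rsquarefree:
  fixes p :: "'a poly"
  assumes "rsquarefree p"
  shows "card {x. poly p x = 0} = degree p"
  using assms
proof (induction "degree p" arbitrary: p rule: less_induct)
  case less
  have p0: "p \<noteq> 0" using less.prems unfolding rsquarefree_def by auto
  show ?case
  proof (cases "degree p = 0")
    case True
    then obtain c where "p = [:c:]" by (metis degree_0_id)
    then show ?thesis using p0 True by simp
  next
    case False
    then obtain r where r: "poly p r = 0" using has_root by force
    then obtain q where q: "p = [:-r,1:] * q" using poly_eq_0_iff_dvd by (metis dvdE)
    have q0: "q \<noteq> 0" using p0 q by auto
    have "q dvd p" using q dvd_triv_right by metis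
    then have rq: "rsquarefree q" using rsquarefree_dvd[OF less.prems] by blast
    have "order r p = order r [:-r,1:] + order r q" using q p0 order_mult by metis
    moreover have "order r [:-r,1:] = 1" using order_power_n_n[of r 1] by simp
    moreover have "order r p \<le> 1" using less.prems unfolding rsquarefree_def
      by (metis le_refl zero_le)
    ultimately have "order r q = 0" by simp
    then have nr: "poly q r \<noteq> 0" using q0 order_root by blast
    have roots: "{x. poly p x = 0} = insert r {x. poly q x = 0}" using q by auto
    have "degree p = degree [:-r,1:] + degree q" using q q0 degree_mult_eq[of "[:-r,1:]" q]
      by (simp del: mult_pCons_left)
    then have dq: "degree p = Suc (degree q)" by simp
    have "card {x. poly q x = 0} = degree q" using less.hyps[of q] dq rq by simp
    then show ?thesis using roots nr poly_roots_finite[OF q0] dq by simp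
  qed
qed

end

section \<open>Degrees of extensions\<close>

text \<open>Degrees are computed with the dimension theory of HOL-Algebra (\<open>Embedded_Algebras\<close>),
  applied to the ambient field viewed as a ring.\<close>

definition ambient_ring :: "'a::field ring" where
  "ambient_ring =
    \<lparr>carrier = UNIV, monoid.mult = (\<lambda>x y. x * y), one = 1, zero = 0, add = (\<lambda>x y. x + y)\<rparr>"

lemma ambient_ring_field: "field (ambient_ring :: 'a::field ring)"
proof -
  have "\<exists>y. x + y = 0" for x :: 'a
    using add.right_inverse by blast
  moreover have "x \<noteq> 0 \<Longrightarrow> \<exists>y. x * y = 1" for x :: 'a
    by (rule exI[of _ "inverse x"]) auto
  ultimately show ?thesis
    unfolding ambient_ring_def using add.right_inverse
    by unfold_locales (auto simp:algebra_simps Units_def)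
qed

lemma ambient_ring_carrier[simp]: "carrier ambient_ring = UNIV" by (simp add: ambient_ring_def)
lemma ambient_ring_mult[simp]: "x \<otimes>\<^bsub>ambient_ring\<^esub> y = x * y" by (simp add: ambient_ring_def)
lemma ambient_ring_add[simp]: "x \<oplus>\<^bsub>ambient_ring\<^esub> y = x + y" by (simp add: ambient_ring_def)
lemma ambient_ring_one[simp]: "\<one>\<^bsub>ambient_ring\<^esub> = 1" by (simp add: ambient_ring_def)
lemma ambient_ring_zero[simp]: "\<zero>\<^bsub>ambient_ring\<^esub> = 0" by (simp add: ambient_ring_def)

interpretation R: field "ambient_ring :: 'a::field ring" by (rule ambient_ring_field)

declare R.Span.simps[simp del]

lemma ambient_ring_a_inv[simp]: "\<ominus>\<^bsub>ambient_ring\<^esub> x = - (x::'a::field)"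
  by (rule R.minus_equality) auto

lemma ambient_ring_inv[simp]: "(x::'a::field) \<noteq> 0 \<Longrightarrow> inv\<^bsub>ambient_ring\<^esub> x = inverse x"
  by (rule R.comm_inv_char) auto

lemma is_subfield_imp_subfield: "is_subfield (E::'a::field set) \<Longrightarrow> subfield E ambient_ring"
  by (rule R.subfieldI'[OF R.subringI])
    (auto simp: is_subfield_one is_subfield_uminus is_subfield_mult is_subfield_add
      is_subfield_inverse)

lemma is_subfield_imp_subalgebra:
  "is_subfield (N::'a::field set) \<Longrightarrow> E \<subseteq> N \<Longrightarrow> subalgebra E N ambient_ring"
proof -
  assume N: "is_subfield N" and EN: "E \<subseteq> N"
  have "subgroup N (add_monoid ambient_ring)"
    by (rule R.add.subgroupI)
      (use N is_subfield_zero[OF N] in \<open>auto simp: is_subfield_uminus is_subfield_add\<close>)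
  then show ?thesis
    unfolding subalgebra_def subalgebra_axioms_def using N EN by (auto simp: is_subfield_mult)
qed

lemma combine_eq_sum:
  "length Ks = length us \<Longrightarrow> R.combine Ks us = (\<Sum>i<length us. Ks ! i * us ! i)"
proof (induction us arbitrary: Ks)
  case Nil then show ?case by simp
next
  case (Cons u us)
  then obtain k Ks' where Ks: "Ks = k # Ks'" by (cases Ks) auto
  then show ?case using Cons by (simp add: sum.lessThan_Suc_shift del: sum.lessThan_Suc)
qed

lemma sum_set_eq_sum_nth:
  assumes "distinct us"
  shows "(\<Sum>b\<in>set us. f b) = (\<Sum>i<length us. f (us ! i))"
proof -
  have "inj_on (nth us) {..<length us}" using assms by (simp add: inj_on_def nth_eq_iff_index_eq)
  moreover have "set us = nth us ` {..<length us}" by (auto simp: set_conv_nth)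
  ultimately show ?thesis by (simp add: sum.reindex)
qed

definition list_index :: "'a list \<Rightarrow> 'a \<Rightarrow> nat" where
  "list_index us b = (THE i. i < length us \<and> us ! i = b)"

lemma list_index_nth: "distinct us \<Longrightarrow> i < length us \<Longrightarrow> list_index us (us ! i) = i"
  unfolding list_index_def by (rule the_equality) (auto simp: nth_eq_iff_index_eq)

lemma Span_eq_span_over:
  assumes E: "is_subfield E" and d: "distinct us"
  shows "R.Span E us = span_over E (set us)"
proof
  note sfE = is_subfield_imp_subfield[OF E]
  show "R.Span E us \<subseteq> span_over E (set us)"
  proof
    fix a assume "a \<in> R.Span E us"
    then obtain Ks where Ks: "set Ks \<subseteq> E" "length Ks = length us" "a = R.combine Ks us"
      using R.Span_mem_iff_length_version[OF sfE] by auto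
    define c where "c b = Ks ! list_index us b" for b
    have cn: "c (us ! i) = Ks ! i" if "i < length us" for i
      using list_index_nth[OF d that] unfolding c_def by simp
    have "\<forall>b\<in>set us. c b \<in> E"
      using Ks cn by (auto simp: set_conv_nth)
    moreover have "a = (\<Sum>b\<in>set us. c b * b)"
      unfolding sum_set_eq_sum_nth[OF d] Ks(3) combine_eq_sum[OF Ks(2)] using cn by simp
    ultimately show "a \<in> span_over E (set us)" unfolding span_over_def by blast
  qed
  show "span_over E (set us) \<subseteq> R.Span E us"
  proof
    fix a assume "a \<in> span_over E (set us)"
    then obtain c where c: "\<forall>b\<in>set us. c b \<in> E" "a = (\<Sum>b\<in>set us. c b * b)"
      unfolding span_over_def by blast
    have "a = R.combine (map c us) us"
      unfolding c(2) sum_set_eq_sum_nth[OF d] by (subst combine_eq_sum) auto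
    moreover have "set (map c us) \<subseteq> E" using c by auto
    ultimately have "\<exists>Ks. set Ks \<subseteq> E \<and> length Ks = length us \<and> a = R.combine Ks us"
      by (intro exI[of _ "map c us"]) auto
    then show "a \<in> R.Span E us"
      using R.Span_mem_iff_length_version[OF sfE, of us a] by simp
  qed
qed

lemma independent_imp_indep_over:
  assumes E: "is_subfield E" and d: "distinct us" and ind: "R.independent E us"
  shows "indep_over E (set us)"
  unfolding indep_over_def
proof (intro allI impI)
  fix c assume c: "(\<forall>b\<in>set us. c b \<in> E) \<and> (\<Sum>b\<in>set us. c b * b) = 0"
  have "R.combine (map c us) us = 0"
    using c unfolding sum_set_eq_sum_nth[OF d] by (subst combine_eq_sum) auto
  then have "set (take (length us) (map c us)) \<subseteq> {0}"
    using R.independent_imp_trivial_combine[OF is_subfield_imp_subfield[OF E] ind, of "map c us"] c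
    by auto
  then show "\<forall>b\<in>set us. c b = 0" by auto
qed

lemma indep_over_imp_independent:
  assumes E: "is_subfield E" and d: "distinct us" and ind: "indep_over E (set us)"
  shows "R.independent E us"
proof (rule R.trivial_combine_imp_independent[OF is_subfield_imp_subfield[OF E]])
  show "set us \<subseteq> carrier ambient_ring" by simp
  fix Ks assume Ks: "set Ks \<subseteq> E" "R.combine Ks us = \<zero>\<^bsub>ambient_ring\<^esub>"
  define Ks' where "Ks' = take (length us) Ks @ replicate (length us - length Ks) 0"
  have lK: "length Ks' = length us" unfolding Ks'_def by simp
  have "R.combine Ks' us = R.combine (take (length us) Ks) us"
    unfolding Ks'_def using R.combine_append_replicate[of us "take (length us) Ks"] by simp
  also have "\<dots> = 0" using R.combine_take[of us Ks] Ks(2) by simp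
  finally have c0: "R.combine Ks' us = 0" .
  have sK': "set Ks' \<subseteq> E" unfolding Ks'_def using Ks E
    by (auto simp: is_subfield_zero dest: in_set_takeD)
  define c where "c b = Ks' ! list_index us b" for b
  have cn: "c (us ! i) = Ks' ! i" if "i < length us" for i
    using list_index_nth[OF d that] unfolding c_def by simp
  have cE: "\<forall>b\<in>set us. c b \<in> E"
    using sK' cn lK by (auto simp: set_conv_nth)
  have "(\<Sum>b\<in>set us. c b * b) = 0"
    unfolding sum_set_eq_sum_nth[OF d] using c0 combine_eq_sum[OF lK] cn by simp
  then have z: "\<forall>b\<in>set us. c b = 0" using ind cE unfolding indep_over_def by blast
  have "Ks' ! i = 0" if "i < length us" for i
    using z cn[OF that] that by (metis nth_mem)
  then have "set Ks' \<subseteq> {0}" using lK by (auto simp: set_conv_nth)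
  moreover have "set (take (length us) Ks) \<subseteq> set Ks'"
    unfolding Ks'_def by simp
  ultimately show "set (take (length us) Ks) \<subseteq> {\<zero>\<^bsub>ambient_ring\<^esub>}"
    by auto
qed

lemma independent_iff_indep_over:
  "is_subfield E \<Longrightarrow> distinct us \<Longrightarrow> R.independent E us \<longleftrightarrow> indep_over E (set us)"
  using independent_imp_indep_over indep_over_imp_independent by blast

lemma basis_over_dimension:
  assumes E: "is_subfield E" and B: "basis_over E M B"
  shows "R.dimension (card B) E M"
proof -
  obtain us where us: "distinct us" "set us = B"
    using B finite_distinct_list unfolding basis_over_def by blast
  have "R.independent E us" using independent_iff_indep_over[OF E us(1)] B us
    unfolding basis_over_def by simp
  moreover have "R.Span E us = M" using Span_eq_span_over[OF E us(1)] B us unfolding basis_over_def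
    by simp
  ultimately have "R.dimension (length us) E M"
    using R.dimensionI[OF is_subfield_imp_subfield[OF E]] by blast
  then show ?thesis using us distinct_card by metis
qed

lemma dimension_imp_basis_over:
  assumes E: "is_subfield E" and d: "R.dimension n E M"
  shows "\<exists>B. basis_over E M B \<and> card B = n"
proof -
  obtain Vs where Vs: "R.independent E Vs" "length Vs = n" "R.Span E Vs = M"
    using R.exists_base[OF is_subfield_imp_subfield[OF E] d] by blast
  have dV: "distinct Vs" using R.independent_distinct[OF is_subfield_imp_subfield[OF E] Vs(1)] .
  have "set Vs \<subseteq> M" using R.Span_base_incl[OF is_subfield_imp_subfield[OF E], of Vs] Vs by simp
  then have "basis_over E M (set Vs)"
    unfolding basis_over_def using independent_iff_indep_over[OF E dV] Span_eq_span_over[OF E dV] Vs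
      by auto
  then show ?thesis using dV Vs(2) distinct_card by blast
qed

lemma finite_ext_dimension:
  assumes "finite_ext E M"
  shows "R.dimension (ext_degree E M) E M"
proof -
  have ex: "\<exists>B. basis_over E M B" using assms unfolding finite_ext_def by blast
  have "basis_over E M (SOME B. basis_over E M B)" using someI_ex[OF ex] .
  then show ?thesis using basis_over_dimension assms unfolding finite_ext_def ext_degree_def by auto
qed

lemma dimension_imp_finite_ext:
  assumes E: "is_subfield E" and M: "is_subfield M" and EM: "E \<subseteq> M" and d: "R.dimension n E M"
  shows "finite_ext E M \<and> ext_degree E M = n"
proof -
  obtain B where "basis_over E M B" using dimension_imp_basis_over[OF E d] by blast
  then have fe: "finite_ext E M" using E M EM unfolding finite_ext_def by blast
  then have "R.dimension (ext_degree E M) E M" by (rule finite_ext_dimension)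
  then have "ext_degree E M = n" using R.dimension_is_inj[OF is_subfield_imp_subfield[OF E] _ d]
    by blast
  then show ?thesis using fe by simp
qed

lemma ext_degree_tower:
  assumes "finite_ext E F" "finite_ext F M"
  shows "finite_ext E M \<and> ext_degree E M = ext_degree E F * ext_degree F M"
proof -
  have d: "R.dimension (ext_degree E F * ext_degree F M) E M"
    using R.telescopic_base[OF is_subfield_imp_subfield is_subfield_imp_subfield
      finite_ext_dimension[OF assms(1)] finite_ext_dimension[OF assms(2)]]
      assms unfolding finite_ext_def by auto
  show ?thesis using dimension_imp_finite_ext[OF _ _ _ d] assms unfolding finite_ext_def by auto
qed

lemma finite_ext_intermediate:
  assumes fe: "finite_ext E M" and N: "is_subfield N" "E \<subseteq> N" "N \<subseteq> M"
  shows "finite_ext E N \<and> finite_ext N M"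
proof -
  have E: "is_subfield E" and M: "is_subfield M" using fe unfolding finite_ext_def by auto
  note sfE = is_subfield_imp_subfield[OF E]
  have fdM: "R.finite_dimension E M" using finite_ext_dimension[OF fe] R.finite_dimensionI by blast
  have "R.finite_dimension E N"
    using R.subalbegra_incl_imp_finite_dimension[OF sfE fdM is_subfield_imp_subalgebra[OF N(1,2)]
      N(3)] .
  then obtain n where "R.dimension n E N" by (auto simp: R.finite_dimension_def)
  then have fEN: "finite_ext E N" using dimension_imp_finite_ext[OF E N(1,2)] by blast
  obtain Vs where Vs: "R.Span E Vs = M"
    using R.exists_base[OF sfE finite_ext_dimension[OF fe]] by blast
  have "set Vs \<subseteq> M" using R.Span_base_incl[OF sfE, of Vs] Vs by simp
  have "R.Span N Vs \<subseteq> M"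
    using R.subalgebra_Span_incl[OF is_subfield_imp_subfield[OF N(1)]
        is_subfield_imp_subalgebra[OF M N(3)] \<open>set Vs \<subseteq> M\<close>] .
  moreover have "M \<subseteq> R.Span N Vs"
  proof
    fix a assume "a \<in> M"
    then obtain Ks where "set Ks \<subseteq> E" "length Ks = length Vs" "a = R.combine Ks Vs"
      using R.Span_mem_iff_length_version[OF sfE, of Vs a] Vs by auto
    then show "a \<in> R.Span N Vs"
      using R.Span_mem_iff_length_version[OF is_subfield_imp_subfield[OF N(1)], of Vs a] N(2)
        by auto
  qed
  ultimately have "R.Span N Vs = M" by blast
  then have "R.finite_dimension N M"
    using R.Span_finite_dimension[OF is_subfield_imp_subfield[OF N(1)], of Vs] by simp
  then obtain m where "R.dimension m N M" by (auto simp: R.finite_dimension_def)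
  then have "finite_ext N M" using dimension_imp_finite_ext[OF N(1) M N(3)] by blast
  then show ?thesis using fEN by blast
qed

lemma ext_degree_pos: "finite_ext E M \<Longrightarrow> ext_degree E M \<ge> 1"
proof (rule ccontr)
  assume fe: "finite_ext E M" and "\<not> ext_degree E M \<ge> 1"
  then have "ext_degree E M = 0" by simp
  then have "R.dimension 0 E M" using finite_ext_dimension[OF fe] by metis
  then have "M = {0}" using R.dimension_zero[OF is_subfield_imp_subfield] fe
    unfolding finite_ext_def by force
  then show False using fe is_subfield_one unfolding finite_ext_def by force
qed

lemma ext_degree_self: "is_subfield E \<Longrightarrow> finite_ext E E \<and> ext_degree E E = 1"
  using dimension_imp_finite_ext[OF _ _ _ R.dimension_one[OF is_subfield_imp_subfield]] by auto

lemma ext_degree_eq_1: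
  assumes fe: "finite_ext E M" and d1: "ext_degree E M = 1"
  shows "M = E"
proof -
  have E: "is_subfield E" and M: "is_subfield M" and EM: "E \<subseteq> M" using fe unfolding finite_ext_def
    by auto
  have d: "R.dimension 1 E M" using finite_ext_dimension[OF fe] d1 by simp
  then have "R.dimension 1 E E" using R.dimension_one[OF is_subfield_imp_subfield[OF E]] by simp
  obtain B where "basis_over E M B" "card B = 1" using dimension_imp_basis_over[OF E d] by blast
  obtain B' where "basis_over E E B'" "card B' = 1"
    using dimension_imp_basis_over[OF E R.dimension_one[OF is_subfield_imp_subfield[OF E]]] by blast
  have fM: "finite_ext E M" by (rule fe)
  show ?thesis
  proof (rule ccontr)
    assume "M \<noteq> E"
    then obtain v where v: "v \<in> M" "v \<notin> E" using EM by blast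
    have "R.independent E [v, 1]"
    proof (intro R.independent.li_Cons)
      show "R.independent E []" by simp
      show "1 \<notin> R.Span E []" by (simp add: R.Span.simps)
      have "R.Span E [1] = E"
        using Span_eq_span_over[OF E, of "[1]"] unfolding span_over_def
          by (auto intro: exI[of _ "\<lambda>_. x" for x])
      then show "v \<notin> R.Span E [1]" using v by simp
    qed auto
    then have "length [v, 1::'a] \<le> 1"
      using R.independent_length_le_dimension[OF is_subfield_imp_subfield[OF E] d
          \<open>R.independent E [v, 1]\<close>] v is_subfield_one[OF M] by auto
    then show False by simp
  qed
qed

lemma ext_degree_eq_imp_eq:
  assumes fe: "finite_ext E M" and N: "is_subfield N" "E \<subseteq> N" "N \<subseteq> M"
    and eq: "ext_degree E N = ext_degree E M"
  shows "N = M"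
proof -
  have i: "finite_ext E N" "finite_ext N M" using finite_ext_intermediate[OF fe N] by auto
  have "ext_degree E M = ext_degree E N * ext_degree N M" using ext_degree_tower[OF i] by simp
  then have "ext_degree N M = 1" using eq ext_degree_pos[OF i(1)] by simp
  then show ?thesis using ext_degree_eq_1[OF i(2)] by simp
qed

lemma ext_degree_mono:
  assumes fe: "finite_ext E M" and N: "is_subfield N" "E \<subseteq> N" "N \<subseteq> M"
  shows "ext_degree E N \<le> ext_degree E M" "ext_degree E N dvd ext_degree E M"
proof -
  have i: "finite_ext E N" "finite_ext N M" using finite_ext_intermediate[OF fe N] by auto
  have "ext_degree E M = ext_degree E N * ext_degree N M" using ext_degree_tower[OF i] by simp
  then show "ext_degree E N \<le> ext_degree E M" "ext_degree E N dvd ext_degree E M"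
    using ext_degree_pos[OF i(2)] by auto
qed

lemma finite_ext_finite:
  assumes fe: "finite_ext E M" and fin: "finite E"
  shows "finite M"
proof -
  obtain B where B: "basis_over E M B" using fe unfolding finite_ext_def by blast
  have "M = (\<lambda>c. \<Sum>b\<in>B. c b * b) ` (PiE B (\<lambda>_. E))"
  proof
    show "M \<subseteq> (\<lambda>c. \<Sum>b\<in>B. c b * b) ` (PiE B (\<lambda>_. E))"
    proof
      fix x assume "x \<in> M"
      then obtain c where c: "\<forall>b\<in>B. c b \<in> E" "x = (\<Sum>b\<in>B. c b * b)"
        using B unfolding basis_over_def span_over_def by blast
      have "restrict c B \<in> PiE B (\<lambda>_. E)" using c by auto
      moreover have "x = (\<Sum>b\<in>B. restrict c B b * b)" using c by simp
      ultimately show "x \<in> (\<lambda>c. \<Sum>b\<in>B. c b * b) ` (PiE B (\<lambda>_. E))" by blast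
    qed
    show "(\<lambda>c. \<Sum>b\<in>B. c b * b) ` (PiE B (\<lambda>_. E)) \<subseteq> M"
      using B unfolding basis_over_def span_over_def by (auto simp: PiE_def)
  qed
  moreover have "finite (PiE B (\<lambda>_. E))" using B fin unfolding basis_over_def
    by (simp add: finite_PiE)
  ultimately show ?thesis by simp
qed

lemma ext_degree_basis:
  assumes fe: "finite_ext E M" and B: "basis_over E M B"
  shows "ext_degree E M = card B"
proof -
  have E: "is_subfield E" using fe unfolding finite_ext_def by auto
  show ?thesis
    using R.dimension_is_inj[OF is_subfield_imp_subfield[OF E] finite_ext_dimension[OF fe]
        basis_over_dimension[OF E B]] .
qed

definition poly_values :: "'a::field set \<Rightarrow> 'a \<Rightarrow> 'a set" where
  "poly_values E a = {poly f a | f. poly_over E f}"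

lemma poly_values_subset: "is_subfield M \<Longrightarrow> E \<subseteq> M \<Longrightarrow> a \<in> M \<Longrightarrow> poly_values E a \<subseteq> M"
  unfolding poly_values_def by (auto intro: poly_over_poly_mem poly_over_mono)

lemma poly_values_base: "is_subfield E \<Longrightarrow> c \<in> E \<Longrightarrow> c \<in> poly_values E a"
  unfolding poly_values_def by (rule CollectI, rule exI[of _ "[:c:]"]) (auto simp: poly_over_const)

lemma poly_values_gen: "is_subfield E \<Longrightarrow> a \<in> poly_values E a"
  unfolding poly_values_def
    by (rule CollectI, rule exI[of _ "[:0,1:]"]) (auto simp: poly_over_linear is_subfield_zero)

context perfect_base_field
begin

lemma poly_values_inverse:
  assumes E: "is_subfield E" "K \<subseteq> E" and x: "x \<in> poly_values E a"
  shows "inverse x \<in> poly_values E a"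
proof (cases "x = 0")
  case True
  then show ?thesis using x by simp
next
  case False
  obtain f where f: "poly_over E f" "x = poly f a" using x unfolding poly_values_def by blast
  have alg: "algebraic_over E x" using algebraic_over_ext[OF E] .
  let ?m = "minpoly E x"
  obtain c0 m' where m: "?m = pCons c0 m'" by (cases "?m") auto
  have mE: "poly_over E ?m" using minpoly_over[OF E(1) alg] .
  then have c0: "c0 \<in> E" and m'E: "poly_over E m'" using m poly_over_pCons[OF E(1)] by auto
  have root: "c0 + x * poly m' x = 0" using minpoly_root[OF E(1) alg] m by simp
  have "c0 \<noteq> 0"
  proof
    assume c00: "c0 = 0"
    then have "poly m' x = 0" using root False by simp
    moreover have m'0: "m' \<noteq> 0" using minpoly_nonzero[OF E(1) alg] m c00 by auto
    ultimately have "degree ?m \<le> degree m'" using minpoly_degree_le[OF E(1) alg m'E] by blast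
    moreover have "degree ?m = Suc (degree m')" using m m'0 by simp
    ultimately show False by simp
  qed
  have "x * ((- 1 / c0) * poly m' x) = 1"
  proof -
    have "x * poly m' x = - c0" using root by (simp add: eq_neg_iff_add_eq_0 add.commute)
    then have "x * ((- 1 / c0) * poly m' x) = (- 1 / c0) * (- c0)" by (metis mult.left_commute)
    then show ?thesis using \<open>c0 \<noteq> 0\<close> by simp
  qed
  then have "inverse x = (- 1 / c0) * poly m' x" by (rule inverse_unique)
  also have "\<dots> = poly (smult (- 1 / c0) (pcompose m' f)) a"
    using f(2) by (simp add: poly_pcompose)
  finally have inv: "inverse x = poly (smult (- 1 / c0) (pcompose m' f)) a" .
  have "poly_over E (smult (- 1 / c0) (pcompose m' f))"
    using E c0 m'E f
      by (intro poly_over_smult poly_over_pcompose is_subfield_divide is_subfield_uminus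
        is_subfield_one) auto
  then show ?thesis using inv unfolding poly_values_def by blast
qed

lemma poly_values_subfield:
  assumes E: "is_subfield E" "K \<subseteq> E"
  shows "is_subfield (poly_values E a)"
proof -
  have add: "x + y \<in> poly_values E a" "x - y \<in> poly_values E a" "x * y \<in> poly_values E a"
    if xy: "x \<in> poly_values E a" "y \<in> poly_values E a" for x y
  proof -
    obtain f g where fg: "poly_over E f" "x = poly f a" "poly_over E g" "y = poly g a"
      using xy unfolding poly_values_def by blast
    have "x + y = poly (f + g) a" "x - y = poly (f - g) a" "x * y = poly (f * g) a"
      using fg by auto
    then show "x + y \<in> poly_values E a" "x - y \<in> poly_values E a" "x * y \<in> poly_values E a"
      unfolding poly_values_def
        using poly_over_add[OF E(1) fg(1) fg(3)] poly_over_diff[OF E(1) fg(1) fg(3)]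
        poly_over_mult[OF E(1) fg(1) fg(3)] by blast+
  qed
  have i: "inverse x \<in> poly_values E a" if "x \<in> poly_values E a" for x
    using poly_values_inverse[OF E that] .
  have z: "0 \<in> poly_values E a" "1 \<in> poly_values E a"
    using poly_values_base[OF E(1) is_subfield_zero[OF E(1)]]
      poly_values_base[OF E(1) is_subfield_one[OF E(1)]] by auto
  show ?thesis unfolding is_subfield_def
    using add i z by simp
qed

lemma adjoin_eq_poly_values:
  assumes E: "is_subfield E" "K \<subseteq> E"
  shows "adjoin E a = poly_values E a"
proof
  show "adjoin E a \<subseteq> poly_values E a"
    using adjoin_least[OF poly_values_subfield[OF E]] poly_values_base[OF E(1)]
      poly_values_gen[OF E(1)] by blast
  show "poly_values E a \<subseteq> adjoin E a"
    using poly_values_subset[OF adjoin_is_subfield adjoin_base adjoin_gen] .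
qed

lemma adjoin_iff_poly:
  assumes E: "is_subfield E" "K \<subseteq> E"
  shows "x \<in> adjoin E a \<longleftrightarrow> (\<exists>f. poly_over E f \<and> x = poly f a)"
  using adjoin_eq_poly_values[OF E] unfolding poly_values_def by blast

lemma inj_on_powers:
  assumes E: "is_subfield E" "K \<subseteq> E"
  shows "inj_on (\<lambda>i. a ^ i) {..<degree (minpoly E a)}"
proof (rule inj_onI, rule ccontr)
  let ?n = "degree (minpoly E a)"
  have alg: "algebraic_over E a" using algebraic_over_ext[OF E] .
  fix i j assume ij: "i \<in> {..<?n}" "j \<in> {..<?n}" "a ^ i = a ^ j" "i \<noteq> j"
  let ?q = "monom (1::'a) i - monom 1 j"
  have "coeff ?q i = 1" using ij by (simp add: coeff_monom)
  then have q0: "?q \<noteq> 0" by (metis coeff_0 one_neq_zero)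
  have "degree ?q \<le> max i j"
    by (metis degree_diff_le degree_monom_le le_max_iff_disj)
  then have dq: "degree ?q < ?n" using ij by auto
  have "poly ?q a = 0" using ij by (simp add: poly_monom)
  moreover have "poly_over E ?q" using E
    by (intro poly_over_diff poly_over_monom is_subfield_one) auto
  ultimately have "?n \<le> degree ?q" using minpoly_degree_le[OF E(1) alg _ q0] by blast
  then show False using dq by simp
qed

lemma powers_indep_over:
  assumes E: "is_subfield E" "K \<subseteq> E"
  shows "indep_over E ((\<lambda>i. a ^ i) ` {..<degree (minpoly E a)})"
  unfolding indep_over_def
proof (intro allI impI)
  let ?n = "degree (minpoly E a)"
  have alg: "algebraic_over E a" using algebraic_over_ext[OF E] .
  fix c assume c: "(\<forall>b\<in>(\<lambda>i. a ^ i) ` {..<?n}. c b \<in> E) \<and> (\<Sum>b\<in>(\<lambda>i. a ^ i) ` {..<?n}. c b * b) = 0"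
  define f where "f = (\<Sum>i<?n. monom (c (a ^ i)) i)"
  have fE: "poly_over E f" unfolding f_def using c E by (intro poly_over_sum poly_over_monom) auto
  have "poly f a = 0"
    using c inj_on_powers[OF E] unfolding f_def by (simp add: poly_sum poly_monom sum.reindex)
  have cf: "coeff f k = (if k < ?n then c (a ^ k) else 0)" for k
    unfolding f_def by (simp add: coeff_sum coeff_monom)
  have "f = 0"
  proof (rule ccontr)
    assume f0: "f \<noteq> 0"
    have "degree f \<le> ?n - 1" by (rule degree_le) (auto simp: cf)
    moreover have "?n \<le> degree f" using minpoly_degree_le[OF E(1) alg fE f0 \<open>poly f a = 0\<close>] .
    ultimately show False using minpoly_degree[OF E(1) alg] by simp
  qed
  then show "\<forall>b\<in>(\<lambda>i. a ^ i) ` {..<?n}. c b = 0"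
    using cf by (metis (no_types, lifting) coeff_0 imageE lessThan_iff)
qed

lemma powers_span_adjoin:
  assumes E: "is_subfield E" "K \<subseteq> E"
  shows "span_over E ((\<lambda>i. a ^ i) ` {..<degree (minpoly E a)}) = adjoin E a"
proof
  let ?m = "minpoly E a"
  let ?n = "degree ?m"
  let ?B = "(\<lambda>i. a ^ i) ` {..<?n}"
  have alg: "algebraic_over E a" using algebraic_over_ext[OF E] .
  have inj: "inj_on (\<lambda>i. a ^ i) {..<?n}" using inj_on_powers[OF E] .
  have n1: "?n \<ge> 1" using minpoly_degree[OF E(1) alg] .
  show "span_over E ?B \<subseteq> adjoin E a"
    unfolding span_over_def using adjoin_base[of E a]
    by (auto intro!: is_subfield_sum[OF adjoin_is_subfield] is_subfield_mult[OF adjoin_is_subfield]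
        is_subfield_power[OF adjoin_is_subfield adjoin_gen])
  show "adjoin E a \<subseteq> span_over E ?B"
  proof
    fix x assume "x \<in> adjoin E a"
    then obtain g where g: "poly_over E g" "x = poly g a" using adjoin_iff_poly[OF E] by blast
    define r where "r = g mod ?m"
    have rE: "poly_over E r" unfolding r_def
      using poly_over_mod[OF E(1) g(1) minpoly_over[OF E(1) alg]] .
    have "g = g div ?m * ?m + r" unfolding r_def by (rule div_mult_mod_eq[symmetric])
    then have "poly g a = poly r a"
      using minpoly_root[OF E(1) alg] by (metis add_0 mult_zero_right poly_add poly_mult)
    have "r = 0 \<or> degree r < ?n" unfolding r_def
      using degree_mod_less[OF minpoly_nonzero[OF E(1) alg]] by blast
    then have dr: "degree r \<le> ?n - 1" using n1 by auto
    have "r = (\<Sum>i\<le>?n - 1. monom (coeff r i) i)" using poly_as_sum_of_monoms'[OF dr] by simp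
    also have "{..?n - 1} = {..<?n}" using n1 by auto
    finally have "poly r a = (\<Sum>i<?n. coeff r i * a ^ i)"
      by (metis (no_types, lifting) poly_monom poly_sum sum.cong)
    define c where "c b = coeff r (inv_into {..<?n} (\<lambda>i. a ^ i) b)" for b
    have ci: "c (a ^ i) = coeff r i" if "i < ?n" for i
      unfolding c_def using inv_into_f_f[OF inj] that by simp
    have "x = (\<Sum>b\<in>?B. c b * b)"
      using inj ci g \<open>poly g a = poly r a\<close> \<open>poly r a = _\<close> by (simp add: sum.reindex)
    moreover have "\<forall>b\<in>?B. c b \<in> E" using ci rE poly_over_coeff by fastforce
    ultimately show "x \<in> span_over E ?B" unfolding span_over_def by blast
  qed
qed

lemma simple_ext_degree:
  assumes E: "is_subfield E" "K \<subseteq> E"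
  shows "finite_ext E (adjoin E a) \<and> ext_degree E (adjoin E a) = degree (minpoly E a)"
proof -
  let ?B = "(\<lambda>i. a ^ i) ` {..<degree (minpoly E a)}"
  have basis: "basis_over E (adjoin E a) ?B"
    unfolding basis_over_def using powers_indep_over[OF E] powers_span_adjoin[OF E]
      adjoin_is_subfield adjoin_gen is_subfield_power by blast
  have fe: "finite_ext E (adjoin E a)"
    unfolding finite_ext_def using basis E adjoin_is_subfield adjoin_base by blast
  have "card ?B = degree (minpoly E a)" using inj_on_powers[OF E] by (simp add: card_image)
  then show ?thesis using ext_degree_basis[OF fe basis] fe by simp
qed

section \<open>Primitive element theorem\<close>

lemma monic_single_root_eq:
  fixes p :: "'a poly"
  assumes rsq: "rsquarefree p" and monic: "lead_coeff p = 1" and roots: "{x. poly p x = 0} = {b}"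
  shows "p = [:-b, 1:]"
proof -
  have "degree p = 1" using card_roots_rsquarefree[OF rsq] roots by simp
  then obtain c0 where p: "p = [:c0, 1:]" using monic
    by (metis One_nat_def degree_pCons_eq_if nat.distinct(1) pCons_cases degree_0_id
        lead_coeff_pCons(1) coeff_pCons_0 diff_Suc_1 zero_neq_one)
  have "poly p b = 0" using roots by auto
  then have "b + c0 = 0" using p by (simp add: add.commute)
  then have "c0 = - b" by (simp add: eq_neg_iff_add_eq_0 add.commute)
  then show ?thesis using p by simp
qed

lemma second_generator_mem_adjoin:
  assumes E: "is_subfield E" "K \<subseteq> E" and c: "c \<in> E"
    and c_good: "\<And>\<alpha> \<beta>. poly (minpoly E a) \<alpha> = 0 \<Longrightarrow> poly (minpoly E b) \<beta> = 0 \<Longrightarrow> \<beta> \<noteq> b \<Longrightarrow>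
      c \<noteq> (\<alpha> - a) / (b - \<beta>)"
  shows "b \<in> adjoin E (a + c * b)"
proof -
  have algA: "algebraic_over E a" and algB: "algebraic_over E b" using algebraic_over_ext[OF E]
    by auto
  define \<theta> where "\<theta> = a + c * b"
  define F where "F = adjoin E \<theta>"
  have F: "is_subfield F" "E \<subseteq> F" "\<theta> \<in> F"
    unfolding F_def using adjoin_is_subfield[of E \<theta>] adjoin_base[of E \<theta>] adjoin_gen[of \<theta> E] by auto
  have KF: "K \<subseteq> F" using F E by auto
  have algBF: "algebraic_over F b" using algebraic_over_ext[OF F(1) KF] .
  let ?\<mu> = "minpoly F b"
  txt \<open>\<open>b\<close> is the only common root of \<open>minpoly E b\<close> and \<open>minpoly E a (\<theta> - c X)\<close>.\<close>
  define h where "h = pcompose (minpoly E a) [:\<theta>, -c:]"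
  have hF: "poly_over F h" unfolding h_def
    using F c E by (intro poly_over_pcompose poly_over_mono[OF minpoly_over[OF E(1) algA]])
      (auto simp: poly_over_pCons poly_over_const is_subfield_uminus poly_over_0)
  have hb: "poly h b = 0" unfolding h_def \<theta>_def
    by (simp add: poly_pcompose minpoly_root[OF E(1) algA])
  have gF: "poly_over F (minpoly E b)" using poly_over_mono[OF minpoly_over[OF E(1) algB] F(2)] .
  have dg: "?\<mu> dvd minpoly E b" using minpoly_dvd[OF F(1) algBF gF minpoly_root[OF E(1) algB]] .
  have dh: "?\<mu> dvd h" using minpoly_dvd[OF F(1) algBF hF hb] .
  have "{x. poly ?\<mu> x = 0} = {b}"
  proof (intro equalityI subsetI)
    fix y assume "y \<in> {x. poly ?\<mu> x = 0}"
    then have gy: "poly (minpoly E b) y = 0" and "poly h y = 0"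
      using dg dh poly_root_dvd by auto
    then have fy: "poly (minpoly E a) (\<theta> - c * y) = 0" unfolding h_def
      by (simp add: poly_pcompose mult.commute)
    show "y \<in> {b}"
    proof (rule ccontr)
      assume "y \<notin> {b}"
      then have "b - y \<noteq> 0" by simp
      then have "c = ((\<theta> - c * y) - a) / (b - y)" unfolding \<theta>_def by (simp add: field_simps)
      then show False using c_good[OF fy gy] \<open>y \<notin> {b}\<close> by simp
    qed
  qed (use minpoly_root[OF F(1) algBF] in simp)
  then have "?\<mu> = [:-b, 1:]"
    using monic_single_root_eq[OF rsquarefree_minpoly[OF F(1) KF] minpoly_monic[OF F(1) algBF]]
      by blast
  then have "- b \<in> F" using poly_over_coeff[OF minpoly_over[OF F(1) algBF], of 0] by simp
  then show ?thesis using is_subfield_uminus[OF F(1)] unfolding F_def \<theta>_def by fastforce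
qed

lemma primitive_element_pair:
  assumes E: "is_subfield E" "K \<subseteq> E" and inf: "infinite E"
  shows "\<exists>c\<in>E. a \<in> adjoin E (a + c * b) \<and> b \<in> adjoin E (a + c * b)"
proof -
  have algA: "algebraic_over E a" and algB: "algebraic_over E b" using algebraic_over_ext[OF E]
    by auto
  let ?Ra = "{x. poly (minpoly E a) x = 0}" and ?Rb = "{x. poly (minpoly E b) x = 0}"
  define bad where "bad = (\<lambda>(\<alpha>, \<beta>). (\<alpha> - a) / (b - \<beta>)) ` (?Ra \<times> ?Rb)"
  have "finite bad" unfolding bad_def
    using poly_roots_finite[OF minpoly_nonzero[OF E(1) algA]]
      poly_roots_finite[OF minpoly_nonzero[OF E(1) algB]]
    by simp
  then obtain c where c: "c \<in> E" "c \<notin> bad" using inf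
    by (metis ex_in_conv finite_Diff2 infinite_remove
        Diff_iff finite.emptyI infinite_imp_nonempty subsetI finite_subset)
  have "b \<in> adjoin E (a + c * b)"
    by (rule second_generator_mem_adjoin[OF E c(1)]) (use c(2) in \<open>auto simp: bad_def\<close>)
  moreover have "a = (a + c * b) - c * b" by simp
  then have "a \<in> adjoin E (a + c * b)"
    using calculation c(1) adjoin_base[of E] adjoin_gen[of "a + c * b" E]
      is_subfield_diff[OF adjoin_is_subfield] is_subfield_mult[OF adjoin_is_subfield]
        by (metis subsetD)
  ultimately show ?thesis using c(1) by blast
qed

lemma finite_field_generator:
  assumes M: "is_subfield M" and fin: "finite M"
  shows "\<exists>g\<in>M. \<forall>x\<in>M. x \<noteq> 0 \<longrightarrow> (\<exists>i::nat. x = g ^ i)"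
proof -
  have sf: "subfield M ambient_ring" using is_subfield_imp_subfield[OF M] .
  interpret F: field "ambient_ring\<lparr>carrier := M\<rparr>" using R.subfield_iff(2)[OF sf] .
  have pw: "x [^]\<^bsub>ambient_ring\<lparr>carrier := M\<rparr>\<^esub> i = x ^ i" for x and i :: nat
    by (induction i) (auto simp: ambient_ring_def)
  have fc: "finite (carrier (ambient_ring\<lparr>carrier := M\<rparr>))" using fin by simp
  from F.finite_field_mult_group_has_gen[OF fc]
  obtain g where g: "g \<in> carrier (mult_of (ambient_ring\<lparr>carrier := M\<rparr>))"
    "carrier (mult_of (ambient_ring\<lparr>carrier := M\<rparr>)) = {g [^]\<^bsub>ambient_ring\<lparr>carrier := M\<rparr>\<^esub> i | i::nat.
      i \<in> UNIV}"
    by (rule bexE)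
  have "g \<in> M" using g(1) by (simp add: mult_of_def ambient_ring_def)
  moreover have "\<forall>x\<in>M. x \<noteq> 0 \<longrightarrow> (\<exists>i::nat. x = g ^ i)"
  proof (intro ballI impI)
    fix x assume "x \<in> M" "x \<noteq> 0"
    then have "x \<in> carrier (mult_of (ambient_ring\<lparr>carrier := M\<rparr>))"
      by (simp add: mult_of_def ambient_ring_def)
    then show "\<exists>i::nat. x = g ^ i" using g(2) pw by auto
  qed
  ultimately show ?thesis by blast
qed

lemma primitive_element_finite:
  assumes M: "is_subfield M" "finite M" and EM: "E \<subseteq> M"
  shows "\<exists>\<theta>\<in>M. adjoin E \<theta> = M"
proof -
  obtain g where g: "g \<in> M" "\<forall>x\<in>M. x \<noteq> 0 \<longrightarrow> (\<exists>i::nat. x = g ^ i)"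
    using finite_field_generator[OF M] by blast
  have "M \<subseteq> adjoin E g"
  proof
    fix x assume "x \<in> M"
    show "x \<in> adjoin E g"
    proof (cases "x = 0")
      case True then show ?thesis using is_subfield_zero[OF adjoin_is_subfield] by simp
    next
      case False
      then obtain i where "x = g ^ i" using g \<open>x \<in> M\<close> by blast
      then show ?thesis using is_subfield_power[OF adjoin_is_subfield adjoin_gen] by simp
    qed
  qed
  moreover have "adjoin E g \<subseteq> M" using adjoin_least[OF M(1) EM g(1)] .
  ultimately show ?thesis using g(1) by blast
qed

lemma finite_subset_simple_ext:
  assumes E: "is_subfield E" "K \<subseteq> E" "infinite E" and M: "is_subfield M" "E \<subseteq> M"
    and S: "finite S" "S \<subseteq> M"
  shows "\<exists>\<theta>\<in>M. S \<subseteq> adjoin E \<theta>"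
  using S
proof (induction S rule: finite_induct)
  case empty then show ?case using is_subfield_zero[OF M(1)] by blast
next
  case (insert x S)
  then obtain \<theta> where th: "\<theta> \<in> M" "S \<subseteq> adjoin E \<theta>" by auto
  obtain c where c: "c \<in> E" "\<theta> \<in> adjoin E (\<theta> + c * x)" "x \<in> adjoin E (\<theta> + c * x)"
    using primitive_element_pair[OF E] by blast
  have th': "\<theta> + c * x \<in> M"
    using th insert c M is_subfield_add[OF M(1)] is_subfield_mult[OF M(1)] by auto
  have "adjoin E \<theta> \<subseteq> adjoin E (\<theta> + c * x)"
    using adjoin_least[OF adjoin_is_subfield adjoin_base c(2)] .
  then show ?case using th' th c by blast
qed

theorem primitive_element:
  assumes fe: "finite_ext E M" and KE: "K \<subseteq> E"
  shows "\<exists>\<theta>\<in>M. adjoin E \<theta> = M"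
proof -
  have E: "is_subfield E" and M: "is_subfield M" and EM: "E \<subseteq> M" using fe unfolding finite_ext_def
    by auto
  show ?thesis
  proof (cases "finite E")
    case True
    then show ?thesis using primitive_element_finite[OF M finite_ext_finite[OF fe] EM] by simp
  next
    case False
    obtain B where B: "basis_over E M B" using fe unfolding finite_ext_def by blast
    then obtain \<theta> where th: "\<theta> \<in> M" "B \<subseteq> adjoin E \<theta>"
      using finite_subset_simple_ext[OF E KE False M EM] unfolding basis_over_def by blast
    have "span_over E B \<subseteq> adjoin E \<theta>"
      unfolding span_over_def using th(2) adjoin_base[of E \<theta>]
      by (auto intro!: is_subfield_sum[OF adjoin_is_subfield]
          is_subfield_mult[OF adjoin_is_subfield])
    then have "M \<subseteq> adjoin E \<theta>" using B unfolding basis_over_def by simp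
    moreover have "adjoin E \<theta> \<subseteq> M" using adjoin_least[OF M EM th(1)] .
    ultimately show ?thesis using th(1) by blast
  qed
qed

end

lemma aut_bij: "\<sigma> \<in> aut M E \<Longrightarrow> bij_betw \<sigma> M M" by (simp add: aut_def)
lemma aut_add: "\<sigma> \<in> aut M E \<Longrightarrow> x \<in> M \<Longrightarrow> y \<in> M \<Longrightarrow> \<sigma> (x + y) = \<sigma> x + \<sigma> y" by (simp add: aut_def)
lemma aut_mult: "\<sigma> \<in> aut M E \<Longrightarrow> x \<in> M \<Longrightarrow> y \<in> M \<Longrightarrow> \<sigma> (x * y) = \<sigma> x * \<sigma> y" by (simp add: aut_def)
lemma aut_fix: "\<sigma> \<in> aut M E \<Longrightarrow> x \<in> E \<Longrightarrow> \<sigma> x = x" by (simp add: aut_def)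
lemma aut_out: "\<sigma> \<in> aut M E \<Longrightarrow> x \<notin> M \<Longrightarrow> \<sigma> x = x" by (simp add: aut_def)
lemma aut_in: "\<sigma> \<in> aut M E \<Longrightarrow> x \<in> M \<Longrightarrow> \<sigma> x \<in> M"
  by (meson aut_bij bij_betw_apply)
lemma aut_inj: "\<sigma> \<in> aut M E \<Longrightarrow> inj_on \<sigma> M"
  by (simp add: aut_def bij_betw_def)
lemma aut_image: "\<sigma> \<in> aut M E \<Longrightarrow> \<sigma> ` M = M"
  by (simp add: aut_def bij_betw_def)

lemma aut_0: assumes "\<sigma> \<in> aut M E" "is_subfield M" shows "\<sigma> 0 = 0"
proof -
  have "\<sigma> (0 + 0) = \<sigma> 0 + \<sigma> 0" using aut_add[OF assms(1)] is_subfield_zero[OF assms(2)] by blast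
  then have "\<sigma> 0 + 0 = \<sigma> 0 + \<sigma> 0" by simp
  then show ?thesis by (metis add_left_cancel)
qed

lemma aut_1: assumes "\<sigma> \<in> aut M E" "is_subfield M" shows "\<sigma> 1 = 1"
proof -
  have "\<sigma> (1 * 1) = \<sigma> 1 * \<sigma> 1" using aut_mult[OF assms(1)] is_subfield_one[OF assms(2)] by blast
  moreover have "\<sigma> 1 \<noteq> 0"
  proof
    assume "\<sigma> 1 = 0"
    then have "\<sigma> 1 = \<sigma> 0" using aut_0[OF assms] by simp
    then show False
      using aut_inj[OF assms(1)] is_subfield_zero[OF assms(2)] is_subfield_one[OF assms(2)]
      by (metis inj_onD one_neq_zero)
  qed
  ultimately show ?thesis by (metis mult_cancel_left2 mult_1_right)
qed

lemma aut_uminus: assumes "\<sigma> \<in> aut M E" "is_subfield M" "x \<in> M" shows "\<sigma> (- x) = - \<sigma> x"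
proof -
  have "\<sigma> (x + - x) = \<sigma> x + \<sigma> (- x)"
    using aut_add[OF assms(1) assms(3) is_subfield_uminus[OF assms(2,3)]] .
  then show ?thesis using aut_0[OF assms(1,2)] by (simp add: eq_neg_iff_add_eq_0 add.commute)
qed

lemma aut_diff: assumes "\<sigma> \<in> aut M E" "is_subfield M" "x \<in> M" "y \<in> M" shows "\<sigma> (x - y) = \<sigma> x - \<sigma> y"
  using aut_add[OF assms(1,3) is_subfield_uminus[OF assms(2,4)]] aut_uminus[OF assms(1,2,4)] by simp

lemma aut_inverse: assumes "\<sigma> \<in> aut M E" "is_subfield M" "x \<in> M"
  shows "\<sigma> (inverse x) = inverse (\<sigma> x)"
proof (cases "x = 0")
  case True then show ?thesis using aut_0[OF assms(1,2)] by simp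
next
  case False
  have "\<sigma> (x * inverse x) = \<sigma> x * \<sigma> (inverse x)"
    using aut_mult[OF assms(1,3) is_subfield_inverse[OF assms(2,3)]] .
  then have "\<sigma> x * \<sigma> (inverse x) = 1" using False aut_1[OF assms(1,2)] by simp
  then show ?thesis by (metis inverse_unique)
qed

lemma aut_sum: assumes "\<sigma> \<in> aut M E" "is_subfield M" "\<And>i. i \<in> A \<Longrightarrow> f i \<in> M"
  shows "\<sigma> (sum f A) = (\<Sum>i\<in>A. \<sigma> (f i))"
  using assms(3)
proof (induction A rule: infinite_finite_induct)
  case (infinite A) then show ?case using aut_0[OF assms(1,2)] by simp
next
  case empty then show ?case using aut_0[OF assms(1,2)] by simp
next
  case (insert x F)
  have "f x \<in> M" using insert.prems by auto
  have "sum f F \<in> M" by (rule is_subfield_sum[OF assms(2)]) (use insert.prems in auto)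
  have "\<sigma> (f x + sum f F) = \<sigma> (f x) + \<sigma> (sum f F)"
    by (rule aut_add[OF assms(1) \<open>f x \<in> M\<close> \<open>sum f F \<in> M\<close>])
  then show ?case using insert.IH insert.prems insert.hyps by simp
qed

lemma aut_power: assumes "\<sigma> \<in> aut M E" "is_subfield M" "x \<in> M" shows "\<sigma> (x ^ n) = \<sigma> x ^ n"
  by (induction n)
    (auto simp: aut_1[OF assms(1,2)]
      aut_mult[OF assms(1) assms(3) is_subfield_power[OF assms(2,3)]])

lemma aut_poly:
  assumes s: "\<sigma> \<in> aut M E" and M: "is_subfield M" and EM: "E \<subseteq> M" and f: "poly_over E f"
    and x: "x \<in> M"
  shows "\<sigma> (poly f x) = poly f (\<sigma> x)"
proof -
  have c: "coeff f i \<in> M" for i using poly_over_coeff[OF f] EM by blast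
  have "\<sigma> (poly f x) = (\<Sum>i\<le>degree f. \<sigma> (coeff f i * x ^ i))"
    unfolding poly_altdef using c x M
      by (intro aut_sum[OF s M]) (auto intro: is_subfield_mult is_subfield_power)
  also have "\<dots> = (\<Sum>i\<le>degree f. coeff f i * \<sigma> x ^ i)"
    using c x M aut_mult[OF s] aut_power[OF s M x] aut_fix[OF s] poly_over_coeff[OF f]
    by (intro sum.cong) (auto simp: is_subfield_power)
  finally show ?thesis unfolding poly_altdef .
qed

lemma id_aut: "id \<in> aut M E"
  unfolding aut_def by auto

lemma aut_comp: assumes "\<sigma> \<in> aut M E" "\<tau> \<in> aut M E" shows "\<sigma> \<circ> \<tau> \<in> aut M E"
  using assms unfolding aut_def by (auto intro: bij_betw_trans simp: bij_betw_apply)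

definition aut_inv :: "'a set \<Rightarrow> ('a \<Rightarrow> 'a) \<Rightarrow> 'a \<Rightarrow> 'a" where
  "aut_inv M \<sigma> = (\<lambda>x. if x \<in> M then inv_into M \<sigma> x else x)"

lemma aut_inv_left: assumes "\<sigma> \<in> aut M E" shows "aut_inv M \<sigma> \<circ> \<sigma> = id"
proof
  fix x show "(aut_inv M \<sigma> \<circ> \<sigma>) x = id x"
  proof (cases "x \<in> M")
    case True then show ?thesis
      using aut_in[OF assms] aut_inj[OF assms] by (simp add: aut_inv_def inv_into_f_f)
  next
    case False then show ?thesis using aut_out[OF assms] by (simp add: aut_inv_def)
  qed
qed

lemma aut_inv_right: assumes "\<sigma> \<in> aut M E" shows "\<sigma> \<circ> aut_inv M \<sigma> = id"
proof
  fix x show "(\<sigma> \<circ> aut_inv M \<sigma>) x = id x"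
  proof (cases "x \<in> M")
    case True then show ?thesis
      using aut_image[OF assms] by (simp add: aut_inv_def f_inv_into_f)
  next
    case False then show ?thesis using aut_out[OF assms] by (simp add: aut_inv_def)
  qed
qed

lemma aut_inv_aut: assumes s: "\<sigma> \<in> aut M E" and M: "is_subfield M" shows "aut_inv M \<sigma> \<in> aut M E"
proof -
  let ?t = "aut_inv M \<sigma>"
  have tM: "?t x \<in> M" if "x \<in> M" for x
    using that aut_image[OF s] by (simp add: aut_inv_def inv_into_into)
  have st: "\<sigma> (?t x) = x" for x using aut_inv_right[OF s] by (metis comp_apply id_apply)
  have inj: "inj_on \<sigma> M" using aut_inj[OF s] .
  have bij: "bij_betw ?t M M"
  proof -
    have "bij_betw (inv_into M \<sigma>) M M" using bij_betw_inv_into[OF aut_bij[OF s]] .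
    then show ?thesis by (rule bij_betw_cong[THEN iffD1, rotated]) (simp add: aut_inv_def)
  qed
  have hom: "?t (x + y) = ?t x + ?t y \<and> ?t (x * y) = ?t x * ?t y" if "x \<in> M" "y \<in> M" for x y
  proof -
    have "\<sigma> (?t x + ?t y) = x + y" using aut_add[OF s tM[OF that(1)] tM[OF that(2)]] st by simp
    moreover have "\<sigma> (?t x * ?t y) = x * y" using aut_mult[OF s tM[OF that(1)] tM[OF that(2)]] st
      by simp
    moreover have "?t x + ?t y \<in> M" "?t x * ?t y \<in> M" "?t (x + y) \<in> M" "?t (x * y) \<in> M"
      using tM that is_subfield_add[OF M] is_subfield_mult[OF M] by auto
    ultimately show ?thesis using st inj by (metis inj_onD)
  qed
  have fixE: "?t x = x" if "x \<in> E" for x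
  proof (cases "x \<in> M")
    case True
    have "\<sigma> x = x" using aut_fix[OF s that] .
    then show ?thesis using True inj by (simp add: aut_inv_def inv_into_f_eq)
  next
    case False then show ?thesis by (simp add: aut_inv_def)
  qed
  show ?thesis unfolding aut_def using bij hom fixE by (auto simp: aut_inv_def)
qed

lemma galgrp_carrier[simp]: "carrier (galgrp M E) = aut M E" by (simp add: galgrp_def)
lemma galgrp_mult[simp]: "\<sigma> \<otimes>\<^bsub>galgrp M E\<^esub> \<tau> = \<sigma> \<circ> \<tau>" by (simp add: galgrp_def)
lemma galgrp_one[simp]: "\<one>\<^bsub>galgrp M E\<^esub> = id" by (simp add: galgrp_def)

lemma galgrp_group: assumes M: "is_subfield M" shows "group (galgrp M E)"
proof (rule groupI)
  show "\<one>\<^bsub>galgrp M E\<^esub> \<in> carrier (galgrp M E)" using id_aut by simp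
  fix x assume x: "x \<in> carrier (galgrp M E)"
  show "\<one>\<^bsub>galgrp M E\<^esub> \<otimes>\<^bsub>galgrp M E\<^esub> x = x" by simp
  show "\<exists>y\<in>carrier (galgrp M E). y \<otimes>\<^bsub>galgrp M E\<^esub> x = \<one>\<^bsub>galgrp M E\<^esub>"
    using x aut_inv_aut[OF _ M] aut_inv_left by fastforce
next
  fix x y assume "x \<in> carrier (galgrp M E)" "y \<in> carrier (galgrp M E)"
  then show "x \<otimes>\<^bsub>galgrp M E\<^esub> y \<in> carrier (galgrp M E)" using aut_comp by simp
next
  fix x y z
  show "x \<otimes>\<^bsub>galgrp M E\<^esub> y \<otimes>\<^bsub>galgrp M E\<^esub> z = x \<otimes>\<^bsub>galgrp M E\<^esub> (y \<otimes>\<^bsub>galgrp M E\<^esub> z)"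
    by (simp add: comp_assoc)
qed

lemma galgrp_inv: "is_subfield M \<Longrightarrow> \<sigma> \<in> aut M E \<Longrightarrow> inv\<^bsub>galgrp M E\<^esub> \<sigma> = aut_inv M \<sigma>"
  by (rule group.inv_equality[OF galgrp_group]) (simp_all add: aut_inv_left aut_inv_aut)

lemma aut_mono: "E \<subseteq> N \<Longrightarrow> aut M N \<subseteq> aut M E"
  unfolding aut_def by auto

lemma aut_subgroup: assumes "E \<subseteq> N" and M: "is_subfield M" shows "subgroup (aut M N) (galgrp M E)"
proof (rule group.subgroupI[OF galgrp_group[OF M]])
  show "aut M N \<subseteq> carrier (galgrp M E)" using aut_mono[OF assms(1)] by simp
  show "aut M N \<noteq> {}" using id_aut by blast
  fix a assume a: "a \<in> aut M N"
  then have "a \<in> aut M E" using aut_mono[OF assms(1)] by blast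
  then have "inv\<^bsub>galgrp M E\<^esub> a = aut_inv M a" using galgrp_inv[OF M] by blast
  then show "inv\<^bsub>galgrp M E\<^esub> a \<in> aut M N" using aut_inv_aut[OF a M] by simp
next
  fix a b assume "a \<in> aut M N" "b \<in> aut M N"
  then show "a \<otimes>\<^bsub>galgrp M E\<^esub> b \<in> aut M N" using aut_comp by simp
qed

lemma galgrp_update: "(galgrp M E)\<lparr>carrier := aut M N\<rparr> = galgrp M N"
  by (simp add: galgrp_def)

lemma aut_map_poly_mult:
  assumes s: "\<sigma> \<in> aut M E" and M: "is_subfield M" and p: "poly_over M p" and q: "poly_over M q"
  shows "map_poly \<sigma> (p * q) = map_poly \<sigma> p * map_poly \<sigma> q"
proof (rule poly_eqI)
  fix n
  have s0: "\<sigma> 0 = 0" using aut_0[OF s M] .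
  have "coeff (map_poly \<sigma> (p * q)) n = \<sigma> (\<Sum>i\<le>n. coeff p i * coeff q (n - i))"
    by (simp add: coeff_map_poly s0 coeff_mult)
  also have "\<dots> = (\<Sum>i\<le>n. \<sigma> (coeff p i) * \<sigma> (coeff q (n - i)))"
    using poly_over_coeff[OF p] poly_over_coeff[OF q] aut_mult[OF s]
    by (subst aut_sum[OF s M]) (auto intro: is_subfield_mult[OF M])
  also have "\<dots> = coeff (map_poly \<sigma> p * map_poly \<sigma> q) n"
    by (simp add: coeff_map_poly s0 coeff_mult)
  finally show "coeff (map_poly \<sigma> (p * q)) n = coeff (map_poly \<sigma> p * map_poly \<sigma> q) n" .
qed

lemma aut_map_prod:
  assumes s: "\<sigma> \<in> aut M E" and M: "is_subfield M" and Y: "finite Y" "Y \<subseteq> M"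
  shows "map_poly \<sigma> (\<Prod>y\<in>Y. [:-y, 1:]) = (\<Prod>y\<in>Y. [:- \<sigma> y, 1:])"
  using Y
proof (induction Y rule: finite_induct)
  case empty
  then show ?case using aut_0[OF s M] aut_1[OF s M] by (simp add: one_pCons map_poly_pCons)
next
  case (insert y Y)
  have py: "poly_over M [:-y, 1:]" using insert M by (simp add: poly_over_linear is_subfield_uminus)
  have pY: "poly_over M (\<Prod>y\<in>Y. [:-y, 1:])" using insert M
    by (intro poly_over_prod) (auto simp: poly_over_linear is_subfield_uminus)
  have "map_poly \<sigma> [:-y, 1:] = [:- \<sigma> y, 1:]"
    using aut_0[OF s M] aut_1[OF s M] aut_uminus[OF s M] insert by (simp add: map_poly_pCons)
  then show ?case using insert aut_map_poly_mult[OF s M py pY] by simp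
qed

lemma orbit_image_eq:
  assumes M: "is_subfield M" and S: "subgroup S (galgrp M E)" and t: "\<tau> \<in> S"
  shows "\<tau> ` ((\<lambda>\<sigma>. \<sigma> x) ` S) = (\<lambda>\<sigma>. \<sigma> x) ` S"
proof
  have SA: "S \<subseteq> aut M E" using subgroup.subset[OF S] by simp
  show "\<tau> ` ((\<lambda>\<sigma>. \<sigma> x) ` S) \<subseteq> (\<lambda>\<sigma>. \<sigma> x) ` S"
  proof
    fix z assume "z \<in> \<tau> ` ((\<lambda>\<sigma>. \<sigma> x) ` S)"
    then obtain \<sigma> where \<sigma>: "\<sigma> \<in> S" "z = \<tau> (\<sigma> x)" by blast
    have "\<tau> \<circ> \<sigma> \<in> S" using subgroup.m_closed[OF S t \<sigma>(1)] by simp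
    then show "z \<in> (\<lambda>\<sigma>. \<sigma> x) ` S" using \<sigma>(2) by (metis comp_apply image_eqI)
  qed
  show "(\<lambda>\<sigma>. \<sigma> x) ` S \<subseteq> \<tau> ` ((\<lambda>\<sigma>. \<sigma> x) ` S)"
  proof
    fix y assume "y \<in> (\<lambda>\<sigma>. \<sigma> x) ` S"
    then obtain \<sigma> where \<sigma>: "\<sigma> \<in> S" "y = \<sigma> x" by blast
    let ?r = "aut_inv M \<tau> \<circ> \<sigma>"
    have "aut_inv M \<tau> \<in> S" using subgroup.m_inv_closed[OF S t] galgrp_inv[OF M] SA t by auto
    then have "?r \<in> S" using subgroup.m_closed[OF S _ \<sigma>(1)] by simp
    moreover have "\<tau> (?r x) = y" using aut_inv_right[of \<tau> M E] SA t \<sigma>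
      by (metis comp_apply id_apply subsetD)
    ultimately show "y \<in> \<tau> ` ((\<lambda>\<sigma>. \<sigma> x) ` S)" by blast
  qed
qed

lemma orbit_poly:
  assumes M: "is_subfield M" and S: "subgroup S (galgrp M E)" and fS: "finite S" and x: "x \<in> M"
  defines "Y \<equiv> (\<lambda>\<sigma>. \<sigma> x) ` S"
  defines "Q \<equiv> \<Prod>y\<in>Y. [:-y, 1:]"
  shows "poly_over (fix_field M S) Q" "poly Q x = 0" "\<And>z. poly Q z = 0 \<longleftrightarrow> z \<in> Y" "Q \<noteq> 0"
    "Y \<subseteq> M"
proof -
  have SA: "S \<subseteq> aut M E" using subgroup.subset[OF S] by simp
  have fY: "finite Y" unfolding Y_def using fS by simp
  show YM: "Y \<subseteq> M" unfolding Y_def using SA aut_in x by blast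
  have QM: "poly_over M Q" unfolding Q_def using YM M
    by (intro poly_over_prod) (auto simp: poly_over_linear is_subfield_uminus)
  have perm: "\<tau> ` Y = Y" if "\<tau> \<in> S" for \<tau>
    unfolding Y_def using orbit_image_eq[OF M S that] .
  have fixQ: "map_poly \<tau> Q = Q" if t: "\<tau> \<in> S" for \<tau>
  proof -
    have ta: "\<tau> \<in> aut M E" using t SA by blast
    have "map_poly \<tau> Q = (\<Prod>y\<in>Y. [:- \<tau> y, 1:])"
      unfolding Q_def using aut_map_prod[OF ta M fY YM] .
    also have "\<dots> = (\<Prod>y\<in>\<tau> ` Y. [:- y, 1:])"
      using aut_inj[OF ta] YM by (subst prod.reindex) (auto intro: inj_on_subset)
    also have "\<dots> = Q" unfolding Q_def perm[OF t] ..
    finally show ?thesis .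
  qed
  show "poly_over (fix_field M S) Q"
    unfolding poly_over_def fix_field_def
  proof (intro allI CollectI conjI ballI)
    fix i show "coeff Q i \<in> M" using poly_over_coeff[OF QM] .
    fix \<tau> assume t: "\<tau> \<in> S"
    have "coeff (map_poly \<tau> Q) i = \<tau> (coeff Q i)"
      using aut_0[OF _ M] t SA by (intro coeff_map_poly) blast
    then show "\<tau> (coeff Q i) = coeff Q i" using fixQ[OF t] by simp
  qed
  show roots: "poly Q z = 0 \<longleftrightarrow> z \<in> Y" for z
    unfolding Q_def poly_prod using fY by simp
  have "id \<in> S" using subgroup.one_closed[OF S] by simp
  then have "x \<in> Y" unfolding Y_def by (metis id_apply image_eqI)
  then show "poly Q x = 0" using roots by blast
  show "Q \<noteq> 0" unfolding Q_def using fY by simp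
qed

context perfect_base_field
begin

lemma aut_eq_on_generator:
  assumes E: "is_subfield E" "K \<subseteq> E" and M: "M = adjoin E \<theta>"
    and s: "\<sigma> \<in> aut M E" and t: "\<tau> \<in> aut M E" and eq: "\<sigma> \<theta> = \<tau> \<theta>"
  shows "\<sigma> = \<tau>"
proof
  fix x
  have Msf: "is_subfield M" and EM: "E \<subseteq> M" and thM: "\<theta> \<in> M"
    using M adjoin_is_subfield[of E \<theta>] adjoin_base[of E \<theta>] adjoin_gen[of \<theta> E] by auto
  show "\<sigma> x = \<tau> x"
  proof (cases "x \<in> M")
    case True
    then obtain f where f: "poly_over E f" "x = poly f \<theta>" using adjoin_iff_poly[OF E] M by blast
    then show ?thesis using aut_poly[OF s Msf EM f(1) thM] aut_poly[OF t Msf EM f(1) thM] eq by simp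
  next
    case False then show ?thesis using aut_out s t by metis
  qed
qed

lemma aut_minpoly_root:
  assumes E: "is_subfield E" "K \<subseteq> E" and s: "\<sigma> \<in> aut M E" and Msf: "is_subfield M" and EM: "E \<subseteq> M"
    and thM: "\<theta> \<in> M"
  shows "poly (minpoly E \<theta>) (\<sigma> \<theta>) = 0"
proof -
  have alg: "algebraic_over E \<theta>" using algebraic_over_ext[OF E] .
  have "\<sigma> (poly (minpoly E \<theta>) \<theta>) = poly (minpoly E \<theta>) (\<sigma> \<theta>)"
    using aut_poly[OF s Msf EM minpoly_over[OF E(1) alg] thM] .
  then show ?thesis using minpoly_root[OF E(1) alg] aut_0[OF s Msf] by simp
qed

lemma substitution_map_exists:
  assumes E: "is_subfield E" "K \<subseteq> E" and \<beta>: "poly (minpoly E \<theta>) \<beta> = 0"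
  shows "\<exists>\<sigma>. \<forall>f. poly_over E f \<longrightarrow> \<sigma> (poly f \<theta>) = poly f \<beta>"
proof -
  have alg: "algebraic_over E \<theta>" using algebraic_over_ext[OF E] .
  define \<sigma> where "\<sigma> x = poly (SOME f. poly_over E f \<and> x = poly f \<theta>) \<beta>" for x
  have "\<sigma> (poly f \<theta>) = poly f \<beta>" if f: "poly_over E f" for f
  proof -
    have ex: "\<exists>g. poly_over E g \<and> poly f \<theta> = poly g \<theta>" using f by blast
    define g where "g = (SOME g. poly_over E g \<and> poly f \<theta> = poly g \<theta>)"
    have g: "poly_over E g" "poly f \<theta> = poly g \<theta>" using someI_ex[OF ex] unfolding g_def by auto
    have "poly (f - g) \<theta> = 0" using g by simp
    then have "minpoly E \<theta> dvd (f - g)"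
      using minpoly_dvd[OF E(1) alg poly_over_diff[OF E(1) f g(1)]] by blast
    then have "poly (f - g) \<beta> = 0" using \<beta> by (rule poly_root_dvd)
    then show ?thesis unfolding \<sigma>_def g_def[symmetric] by simp
  qed
  then show ?thesis by blast
qed

lemma adjoin_conjugate_eq:
  assumes E: "is_subfield E" "K \<subseteq> E"
    and \<beta>: "\<beta> \<in> adjoin E \<theta>" "poly (minpoly E \<theta>) \<beta> = 0"
  shows "adjoin E \<beta> = adjoin E \<theta>"
proof (rule ext_degree_eq_imp_eq)
  show "finite_ext E (adjoin E \<theta>)" using simple_ext_degree[OF E] by simp
  show "is_subfield (adjoin E \<beta>)" "E \<subseteq> adjoin E \<beta>" by (auto simp: adjoin_is_subfield adjoin_base)
  show "adjoin E \<beta> \<subseteq> adjoin E \<theta>" using adjoin_least[OF adjoin_is_subfield adjoin_base \<beta>(1)] .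
  show "ext_degree E (adjoin E \<beta>) = ext_degree E (adjoin E \<theta>)"
    using simple_ext_degree[OF E] minpoly_root_eq[OF E(1) algebraic_over_ext[OF E] \<beta>(2)] by simp
qed

lemma substitution_image:
  assumes E: "is_subfield E" "K \<subseteq> E" and \<sigma>: "\<And>f. poly_over E f \<Longrightarrow> \<sigma> (poly f \<theta>) = poly f \<beta>"
  shows "\<sigma> ` adjoin E \<theta> = adjoin E \<beta>"
proof
  show "\<sigma> ` adjoin E \<theta> \<subseteq> adjoin E \<beta>"
  proof
    fix z assume "z \<in> \<sigma> ` adjoin E \<theta>"
    then obtain x where x: "x \<in> adjoin E \<theta>" "z = \<sigma> x" by blast
    then obtain f where "poly_over E f" "z = \<sigma> (poly f \<theta>)" using adjoin_iff_poly[OF E, of x \<theta>]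
      by auto
    then show "z \<in> adjoin E \<beta>" using \<sigma> adjoin_iff_poly[OF E] by auto
  qed
  show "adjoin E \<beta> \<subseteq> \<sigma> ` adjoin E \<theta>"
  proof
    fix z assume "z \<in> adjoin E \<beta>"
    then obtain f where f: "poly_over E f" "z = poly f \<beta>" using adjoin_iff_poly[OF E] by blast
    then have "z = \<sigma> (poly f \<theta>)" using \<sigma> by simp
    moreover have "poly f \<theta> \<in> adjoin E \<theta>" using f(1) adjoin_iff_poly[OF E] by blast
    ultimately show "z \<in> \<sigma> ` adjoin E \<theta>" by blast
  qed
qed

lemma substitution_inj:
  assumes E: "is_subfield E" "K \<subseteq> E" and \<sigma>: "\<And>f. poly_over E f \<Longrightarrow> \<sigma> (poly f \<theta>) = poly f \<beta>"
    and \<beta>: "poly (minpoly E \<theta>) \<beta> = 0"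
  shows "inj_on \<sigma> (adjoin E \<theta>)"
proof (rule inj_onI)
  have alg: "algebraic_over E \<theta>" and algb: "algebraic_over E \<beta>" using algebraic_over_ext[OF E]
    by auto
  fix x y assume xy: "x \<in> adjoin E \<theta>" "y \<in> adjoin E \<theta>" "\<sigma> x = \<sigma> y"
  obtain f f' where ff: "poly_over E f" "x = poly f \<theta>" "poly_over E f'" "y = poly f' \<theta>"
    using adjoin_iff_poly[OF E] xy by blast
  have "poly (f - f') \<beta> = 0" using \<sigma> ff xy by simp
  then have "minpoly E \<theta> dvd (f - f')"
    using minpoly_dvd[OF E(1) algb poly_over_diff[OF E(1) ff(1,3)]] minpoly_root_eq[OF E(1) alg \<beta>]
    by simp
  then have "poly (f - f') \<theta> = 0" using minpoly_root[OF E(1) alg] by (rule poly_root_dvd)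
  then show "x = y" using ff by simp
qed

lemma aut_extend_root:
  assumes E: "is_subfield E" "K \<subseteq> E" and M: "M = adjoin E \<theta>"
    and \<beta>: "\<beta> \<in> M" "poly (minpoly E \<theta>) \<beta> = 0"
  shows "\<exists>\<sigma>\<in>aut M E. \<sigma> \<theta> = \<beta>"
proof -
  have Msf: "is_subfield M" and EM: "E \<subseteq> M" and thM: "\<theta> \<in> M"
    using M adjoin_is_subfield[of E \<theta>] adjoin_base[of E \<theta>] adjoin_gen[of \<theta> E] by auto
  obtain \<sigma>0 where \<sigma>0: "\<And>f. poly_over E f \<Longrightarrow> \<sigma>0 (poly f \<theta>) = poly f \<beta>"
    using substitution_map_exists[OF E \<beta>(2)] by blast
  define \<sigma> where "\<sigma> x = (if x \<in> M then \<sigma>0 x else x)" for x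
  have sf: "\<sigma> (poly f \<theta>) = poly f \<beta>" if "poly_over E f" for f
    using \<sigma>0[OF that] poly_over_poly_mem[OF Msf poly_over_mono[OF that EM] thM] unfolding \<sigma>_def
      by simp
  have hom: "\<sigma> (x + y) = \<sigma> x + \<sigma> y \<and> \<sigma> (x * y) = \<sigma> x * \<sigma> y" if xy: "x \<in> M" "y \<in> M" for x y
  proof -
    obtain f f' where "poly_over E f" "x = poly f \<theta>" "poly_over E f'" "y = poly f' \<theta>"
      using adjoin_iff_poly[OF E] M xy by blast
    then show ?thesis using sf poly_over_add[OF E(1)] poly_over_mult[OF E(1)]
      by (metis poly_add poly_mult)
  qed
  have fixE: "\<sigma> x = x" if "x \<in> E" for x
    using sf[OF poly_over_const[OF E(1) that]] by simp
  have "bij_betw \<sigma> M M"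
    unfolding bij_betw_def M
    using substitution_inj[OF E sf \<beta>(2)] substitution_image[OF E sf]
      adjoin_conjugate_eq[OF E, of \<beta> \<theta>] \<beta> M
    by simp
  then have "\<sigma> \<in> aut M E" unfolding aut_def using hom fixE by (auto simp: \<sigma>_def)
  moreover have "\<sigma> \<theta> = \<beta>"
    using sf[OF poly_over_linear[OF E(1), THEN iffD2, OF is_subfield_zero[OF E(1)]]] by simp
  ultimately show ?thesis by blast
qed

lemma aut_roots_bij:
  assumes E: "is_subfield E" "K \<subseteq> E" and M: "M = adjoin E \<theta>"
  shows "bij_betw (\<lambda>\<sigma>. \<sigma> \<theta>) (aut M E) {\<beta> \<in> M. poly (minpoly E \<theta>) \<beta> = 0}"
proof -
  have Msf: "is_subfield M" and EM: "E \<subseteq> M" and thM: "\<theta> \<in> M"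
    using M adjoin_is_subfield[of E \<theta>] adjoin_base[of E \<theta>] adjoin_gen[of \<theta> E] by auto
  show ?thesis unfolding bij_betw_def
  proof
    show "inj_on (\<lambda>\<sigma>. \<sigma> \<theta>) (aut M E)" using aut_eq_on_generator[OF E M] by (auto intro: inj_onI)
    show "(\<lambda>\<sigma>. \<sigma> \<theta>) ` aut M E = {\<beta> \<in> M. poly (minpoly E \<theta>) \<beta> = 0}"
      using aut_in thM aut_minpoly_root[OF E _ Msf EM thM] aut_extend_root[OF E M] by fastforce
  qed
qed

lemma aut_finite_card_le:
  assumes fe: "finite_ext E M" and KE: "K \<subseteq> E"
  shows "finite (aut M E) \<and> card (aut M E) \<le> ext_degree E M"
proof -
  have E: "is_subfield E" using fe unfolding finite_ext_def by auto
  obtain \<theta> where th: "\<theta> \<in> M" "adjoin E \<theta> = M" using primitive_element[OF fe KE] by blast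
  have alg: "algebraic_over E \<theta>" using algebraic_over_ext[OF E KE] .
  have b: "bij_betw (\<lambda>\<sigma>. \<sigma> \<theta>) (aut M E) {\<beta> \<in> M. poly (minpoly E \<theta>) \<beta> = 0}"
    using aut_roots_bij[OF E KE th(2)[symmetric]] .
  have fin: "finite {\<beta> \<in> M. poly (minpoly E \<theta>) \<beta> = 0}"
    using poly_roots_finite[OF minpoly_nonzero[OF E alg]] by (rule finite_subset[rotated]) auto
  have "card {\<beta> \<in> M. poly (minpoly E \<theta>) \<beta> = 0} \<le> card {\<beta>. poly (minpoly E \<theta>) \<beta> = 0}"
    using poly_roots_finite[OF minpoly_nonzero[OF E alg]] by (rule card_mono) auto
  also have "\<dots> \<le> degree (minpoly E \<theta>)" using card_poly_roots_bound[OF minpoly_nonzero[OF E alg]] .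
  also have "\<dots> = ext_degree E M" using simple_ext_degree[OF E KE, of \<theta>] th by simp
  finally have le: "card {\<beta> \<in> M. poly (minpoly E \<theta>) \<beta> = 0} \<le> ext_degree E M" .
  have "card (aut M E) = card {\<beta> \<in> M. poly (minpoly E \<theta>) \<beta> = 0}" using bij_betw_same_card[OF b] .
  moreover have "finite (aut M E)" using bij_betw_finite[OF b] fin by simp
  ultimately show ?thesis using le by simp
qed

section \<open>Artin's theorem\<close>

lemma fix_field_is_subfield:
  assumes M: "is_subfield M" and S: "S \<subseteq> aut M E"
  shows "is_subfield (fix_field M S)"
proof -
  let ?F = "fix_field M S"
  have s: "\<sigma> \<in> aut M E" if "\<sigma> \<in> S" for \<sigma> using S that by blast
  have z: "0 \<in> ?F" "1 \<in> ?F" unfolding fix_field_def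
    using aut_0[OF s M] aut_1[OF s M] is_subfield_zero[OF M] is_subfield_one[OF M] by auto
  have a: "x + y \<in> ?F \<and> x - y \<in> ?F \<and> x * y \<in> ?F" if "x \<in> ?F" "y \<in> ?F" for x y
    using that unfolding fix_field_def
    by (auto simp: is_subfield_add[OF M] is_subfield_diff[OF M] is_subfield_mult[OF M] aut_add[OF s]
      aut_diff[OF s M] aut_mult[OF s])
  have i: "inverse x \<in> ?F" if "x \<in> ?F" for x
    using that unfolding fix_field_def by (auto simp: is_subfield_inverse[OF M] aut_inverse[OF s M])
  show ?thesis unfolding is_subfield_def using z a i by blast
qed

theorem artin:
  assumes fe: "finite_ext E M" and KE: "K \<subseteq> E" and S: "subgroup S (galgrp M E)"
  shows "aut M (fix_field M S) = S \<and> ext_degree (fix_field M S) M = card S \<and>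
         finite_ext (fix_field M S) M \<and> E \<subseteq> fix_field M S \<and> fix_field M S \<subseteq> M \<and>
         is_subfield (fix_field M S)"
proof -
  have E: "is_subfield E" and Msf: "is_subfield M" and EM: "E \<subseteq> M" using fe unfolding finite_ext_def
    by auto
  let ?F = "fix_field M S"
  have SA: "S \<subseteq> aut M E" using subgroup.subset[OF S] by simp
  have F: "is_subfield ?F" using fix_field_is_subfield[OF Msf SA] .
  have EF: "E \<subseteq> ?F" unfolding fix_field_def using EM SA aut_fix by fastforce
  have FM: "?F \<subseteq> M" unfolding fix_field_def by auto
  have KF: "K \<subseteq> ?F" using KE EF by auto
  have feF: "finite_ext ?F M" using finite_ext_intermediate[OF fe F EF FM] by blast
  obtain \<theta> where th: "\<theta> \<in> M" "adjoin E \<theta> = M" using primitive_element[OF fe KE] by blast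
  have thF: "adjoin ?F \<theta> = M"
  proof
    show "adjoin ?F \<theta> \<subseteq> M" using adjoin_least[OF Msf FM th(1)] .
    show "M \<subseteq> adjoin ?F \<theta>"
      using th(2) adjoin_least[OF adjoin_is_subfield, of E ?F \<theta> \<theta>] EF adjoin_base adjoin_gen
      by blast
  qed
  have fA: "finite (aut M E)" using aut_finite_card_le[OF fe KE] by blast
  have fS: "finite S" using finite_subset[OF SA fA] .
  note op = orbit_poly[OF Msf S fS th(1)]
  let ?Y = "(\<lambda>\<sigma>. \<sigma> \<theta>) ` S"
  let ?Q = "\<Prod>y\<in>?Y. [:-y, 1:]"
  have algF: "algebraic_over ?F \<theta>" using algebraic_over_ext[OF F KF] .
  have "ext_degree ?F M = degree (minpoly ?F \<theta>)" using simple_ext_degree[OF F KF, of \<theta>] thF by simp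
  also have "\<dots> \<le> degree ?Q" using minpoly_degree_le[OF F algF op(1) op(4) op(2)] .
  also have "degree ?Q = card ?Y" by (subst degree_prod_eq_sum_degree) auto
  also have "\<dots> \<le> card S" using card_image_le[OF fS] .
  finally have le1: "ext_degree ?F M \<le> card S" .
  have SF: "S \<subseteq> aut M ?F" unfolding aut_def fix_field_def using SA unfolding aut_def by auto
  have afF: "finite (aut M ?F) \<and> card (aut M ?F) \<le> ext_degree ?F M"
    using aut_finite_card_le[OF feF KF] .
  have le2: "card S \<le> card (aut M ?F)" using card_mono[OF _ SF] afF by blast
  have eq: "card S = card (aut M ?F)" using le1 le2 afF by linarith
  have "S = aut M ?F" using card_subset_eq[OF _ SF eq] afF by blast
  then show ?thesis using eq le1 le2 afF feF EF FM F by auto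
qed

lemma galois_card_aut:
  assumes g: "galois_ext E M" and KE: "K \<subseteq> E"
  shows "card (aut M E) = ext_degree E M"
proof -
  have fe: "finite_ext E M" using g unfolding galois_ext_def by auto
  have E: "is_subfield E" using fe unfolding finite_ext_def by auto
  obtain \<theta> where th: "\<theta> \<in> M" "adjoin E \<theta> = M" using primitive_element[OF fe KE] by blast
  have b: "bij_betw (\<lambda>\<sigma>. \<sigma> \<theta>) (aut M E) {\<beta> \<in> M. poly (minpoly E \<theta>) \<beta> = 0}"
    using aut_roots_bij[OF E KE th(2)[symmetric]] .
  have "{\<beta> \<in> M. poly (minpoly E \<theta>) \<beta> = 0} = {\<beta>. poly (minpoly E \<theta>) \<beta> = 0}"
    using g th(1) unfolding galois_ext_def normal_ext_def by auto
  then have "card (aut M E) = card {\<beta>. poly (minpoly E \<theta>) \<beta> = 0}" using b bij_betw_same_card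
    by metis
  also have "\<dots> = degree (minpoly E \<theta>)"
    using card_roots_rsquarefree[OF rsquarefree_minpoly[OF E KE]] .
  also have "\<dots> = ext_degree E M" using simple_ext_degree[OF E KE, of \<theta>] th by simp
  finally show ?thesis .
qed

lemma card_aut_imp_fix_field:
  assumes fe: "finite_ext E M" and KE: "K \<subseteq> E" and c: "card (aut M E) = ext_degree E M"
  shows "fix_field M (aut M E) = E"
proof -
  have Msf: "is_subfield M" using fe unfolding finite_ext_def by auto
  have S: "subgroup (aut M E) (galgrp M E)" using group.subgroup_self[OF galgrp_group[OF Msf], of E]
    by simp
  note A = artin[OF fe KE S]
  let ?F = "fix_field M (aut M E)"
  have i: "finite_ext E ?F" using finite_ext_intermediate[OF fe] A by blast
  have "ext_degree E M = ext_degree E ?F * ext_degree ?F M" using ext_degree_tower[OF i] A by blast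
  moreover have "ext_degree ?F M = ext_degree E M" using A c by simp
  ultimately have "ext_degree E M = ext_degree E ?F * ext_degree E M" by simp
  then have "ext_degree E ?F = 1" using ext_degree_pos[OF fe] by simp
  then show ?thesis using ext_degree_eq_1[OF i] by simp
qed

lemma fix_field_imp_galois:
  assumes fe: "finite_ext E M" and KE: "K \<subseteq> E" and f: "fix_field M (aut M E) = E"
  shows "galois_ext E M"
proof -
  have E: "is_subfield E" and Msf: "is_subfield M" using fe unfolding finite_ext_def by auto
  have S: "subgroup (aut M E) (galgrp M E)" using group.subgroup_self[OF galgrp_group[OF Msf], of E]
    by simp
  have fA: "finite (aut M E)" using aut_finite_card_le[OF fe KE] by blast
  have "normal_ext E M" unfolding normal_ext_def
  proof (intro ballI allI impI)
    fix x y assume x: "x \<in> M" and y: "poly (minpoly E x) y = 0"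
    note op = orbit_poly[OF Msf S fA x]
    let ?Q = "\<Prod>y\<in>(\<lambda>\<sigma>. \<sigma> x) ` aut M E. [:-y, 1:]"
    have alg: "algebraic_over E x" using algebraic_over_ext[OF E KE] .
    have "minpoly E x dvd ?Q" using minpoly_dvd[OF E alg _ op(2)] op(1) f by simp
    then have "poly ?Q y = 0" using y by (rule poly_root_dvd)
    then show "y \<in> M" using op(3) op(5) by blast
  qed
  then show ?thesis unfolding galois_ext_def separable_ext_def using fe rsquarefree_minpoly[OF E KE]
    by blast
qed

lemma galois_fix_field: "galois_ext E M \<Longrightarrow> K \<subseteq> E \<Longrightarrow> fix_field M (aut M E) = E"
  using galois_card_aut card_aut_imp_fix_field galois_ext_def by metis

lemma galois_iff_card_aut:
  "finite_ext E M \<Longrightarrow> K \<subseteq> E \<Longrightarrow> galois_ext E M \<longleftrightarrow> card (aut M E) = ext_degree E M"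
  using galois_card_aut card_aut_imp_fix_field fix_field_imp_galois by metis

lemma galois_ext_upper:
  assumes g: "galois_ext E M" and KE: "K \<subseteq> E" and N: "is_subfield N" "E \<subseteq> N" "N \<subseteq> M"
  shows "galois_ext N M"
proof -
  have fe: "finite_ext E M" using g unfolding galois_ext_def by auto
  have E: "is_subfield E" using fe unfolding finite_ext_def by auto
  have fN: "finite_ext N M" using finite_ext_intermediate[OF fe N] by blast
  have "normal_ext N M" unfolding normal_ext_def
  proof (intro ballI allI impI)
    fix x y assume x: "x \<in> M" and y: "poly (minpoly N x) y = 0"
    have "minpoly N x dvd minpoly E x"
      using minpoly_mono_dvd[OF E N(1,2) algebraic_over_ext[OF E KE]] .
    then have "poly (minpoly E x) y = 0" using y by (rule poly_root_dvd)
    then show "y \<in> M" using g x unfolding galois_ext_def normal_ext_def by blast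
  qed
  moreover have "separable_ext N M" unfolding separable_ext_def
    using rsquarefree_minpoly[OF N(1)] KE N by auto
  ultimately show ?thesis using fN unfolding galois_ext_def by blast
qed

lemma galois_fix_field_aut:
  assumes g: "galois_ext E M" and KE: "K \<subseteq> E" and N: "is_subfield N" "E \<subseteq> N" "N \<subseteq> M"
  shows "fix_field M (aut M N) = N"
  using galois_fix_field[OF galois_ext_upper[OF assms]] KE N by auto

end

lemma ncl_props:
  assumes G: "group G" and H: "subgroup H G"
  shows "ncl G H \<lhd> G" "H \<subseteq> ncl G H" "\<And>N. N \<lhd> G \<Longrightarrow> H \<subseteq> N \<Longrightarrow> ncl G H \<subseteq> N"
    "ncl G H \<subseteq> carrier G"
proof -
  let ?A = "{N. N \<lhd> G \<and> H \<subseteq> N}"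
  have cA: "carrier G \<in> ?A" using group.normal_self[OF G] subgroup.subset[OF H] by blast
  have sub: "subgroup (\<Inter>?A) G"
    by (rule group.subgroups_Inter[OF G]) (use cA normal_imp_subgroup in auto)
  have "\<forall>x\<in>carrier G. \<forall>h\<in>\<Inter>?A. x \<otimes>\<^bsub>G\<^esub> h \<otimes>\<^bsub>G\<^esub> inv\<^bsub>G\<^esub> x \<in> \<Inter>?A"
    using group.normal_inv_iff[OF G] by blast
  then show "ncl G H \<lhd> G" unfolding ncl_def using group.normal_inv_iff[OF G] sub by blast
  show "H \<subseteq> ncl G H" unfolding ncl_def by blast
  show "\<And>N. N \<lhd> G \<Longrightarrow> H \<subseteq> N \<Longrightarrow> ncl G H \<subseteq> N" unfolding ncl_def by blast
  show "ncl G H \<subseteq> carrier G" unfolding ncl_def using cA by blast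
qed

lemma ncl_normal_eq: "group G \<Longrightarrow> H \<lhd> G \<Longrightarrow> ncl G H = H"
  using ncl_props[of G H] normal_imp_subgroup by blast

lemma aut_fixI: "\<sigma> \<in> aut M E \<Longrightarrow> (\<And>x. x \<in> N \<Longrightarrow> \<sigma> x = x) \<Longrightarrow> \<sigma> \<in> aut M N"
  unfolding aut_def by auto

lemma fix_field_anti: "S \<subseteq> T \<Longrightarrow> fix_field M T \<subseteq> fix_field M S"
  unfolding fix_field_def by auto

definition max_galois_sub :: "'a::field set \<Rightarrow> 'a set \<Rightarrow> 'a set \<Rightarrow> bool" where
  "max_galois_sub E L F \<longleftrightarrow> E \<subseteq> F \<and> F \<subseteq> L \<and> galois_ext E F \<and>
     (\<forall>E'. E \<subseteq> E' \<and> E' \<subseteq> L \<and> galois_ext E E' \<longrightarrow> E' \<subseteq> F)"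

lemma max_galois_subD:
  assumes "max_galois_sub E L F"
  shows "E \<subseteq> F" "F \<subseteq> L" "galois_ext E F" "\<And>E'. E \<subseteq> E' \<Longrightarrow> E' \<subseteq> L \<Longrightarrow> galois_ext E E' \<Longrightarrow> E' \<subseteq> F"
  using assms unfolding max_galois_sub_def by blast+

lemma max_galois_sub_unique:
  assumes F: "max_galois_sub E L F" and F': "max_galois_sub E L F'"
  shows "F = F'"
proof
  show "F \<subseteq> F'" using max_galois_subD(4)[OF F' max_galois_subD(1-3)[OF F]] .
  show "F' \<subseteq> F" using max_galois_subD(4)[OF F max_galois_subD(1-3)[OF F']] .
qed

lemma max_galois_sub_ext_degree_le:
  assumes F: "max_galois_sub E L F" and E': "E \<subseteq> E'" "E' \<subseteq> L" "galois_ext E E'"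
  shows "ext_degree E E' \<le> ext_degree E F"
proof -
  have "E' \<subseteq> F" using max_galois_subD(4)[OF F E'] .
  moreover have "is_subfield E'" using E'(3) unfolding galois_ext_def finite_ext_def by blast
  moreover have "finite_ext E F" using max_galois_subD(3)[OF F] unfolding galois_ext_def by blast
  ultimately show ?thesis using ext_degree_mono(1) E'(1) by blast
qed

lemma max_galois_sub_ext_degree_eq:
  assumes F: "max_galois_sub E L F" and E': "E \<subseteq> E'" "E' \<subseteq> L" "galois_ext E E'"
    and eq: "ext_degree E E' = ext_degree E F"
  shows "E' = F"
proof -
  have "E' \<subseteq> F" using max_galois_subD(4)[OF F E'] .
  moreover have "is_subfield E'" using E'(3) unfolding galois_ext_def finite_ext_def by blast
  moreover have "finite_ext E F" using max_galois_subD(3)[OF F] unfolding galois_ext_def by blast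
  ultimately show ?thesis using ext_degree_eq_imp_eq E'(1) eq by blast
qed

lemma aut_self: "aut M M = {id}"
proof
  show "aut M M \<subseteq> {id}"
  proof
    fix \<sigma> assume s: "\<sigma> \<in> aut M M"
    have "\<sigma> x = x" for x by (cases "x \<in> M") (use s in \<open>auto simp: aut_def\<close>)
    then show "\<sigma> \<in> {id}" by auto
  qed
  show "{id} \<subseteq> aut M M" using id_aut by auto
qed

lemma fix_field_id: "fix_field M {id} = M"
  unfolding fix_field_def by auto

context perfect_base_field
begin

lemma conjugate_exists_aut:
  assumes g: "galois_ext E M" and KE: "K \<subseteq> E" and x: "x \<in> M" and y: "poly (minpoly E x) y = 0"
  shows "\<exists>\<sigma>\<in>aut M E. \<sigma> x = y"
proof -
  have fe: "finite_ext E M" using g unfolding galois_ext_def by auto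
  have E: "is_subfield E" and Msf: "is_subfield M" using fe unfolding finite_ext_def by auto
  have S: "subgroup (aut M E) (galgrp M E)" using group.subgroup_self[OF galgrp_group[OF Msf], of E]
    by simp
  have fA: "finite (aut M E)" using aut_finite_card_le[OF fe KE] by blast
  note op = orbit_poly[OF Msf S fA x]
  have f: "fix_field M (aut M E) = E" using galois_fix_field[OF g KE] .
  have alg: "algebraic_over E x" using algebraic_over_ext[OF E KE] .
  have "minpoly E x dvd (\<Prod>y\<in>(\<lambda>\<sigma>. \<sigma> x) ` aut M E. [:-y, 1:])"
    using minpoly_dvd[OF E alg _ op(2)] op(1) f by simp
  then have "poly (\<Prod>y\<in>(\<lambda>\<sigma>. \<sigma> x) ` aut M E. [:-y, 1:]) y = 0"
    using y by (rule poly_root_dvd)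
  then have "y \<in> (\<lambda>\<sigma>. \<sigma> x) ` aut M E" using op(3)[of y] by simp
  then show ?thesis by auto
qed

lemma aut_preserves_normal_subext:
  assumes gE': "galois_ext E E'" and KE: "K \<subseteq> E" and s: "\<sigma> \<in> aut M E" and Msf: "is_subfield M"
    and EM: "E \<subseteq> M" and E'M: "E' \<subseteq> M" and x: "x \<in> E'"
  shows "\<sigma> x \<in> E'"
proof -
  have E: "is_subfield E" using gE' unfolding galois_ext_def finite_ext_def by auto
  have "poly (minpoly E x) (\<sigma> x) = 0" using aut_minpoly_root[OF E KE s Msf EM] x E'M by blast
  then show ?thesis using gE' x unfolding galois_ext_def normal_ext_def by blast
qed

lemma fix_field_normal_galois:
  assumes gM: "galois_ext E M" and KE: "K \<subseteq> E" and Nn: "N \<lhd> galgrp M E"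
  shows "galois_ext E (fix_field M N)"
proof -
  let ?F = "fix_field M N"
  have fe: "finite_ext E M" using gM unfolding galois_ext_def by auto
  have E: "is_subfield E" and Msf: "is_subfield M" using fe unfolding finite_ext_def by auto
  have G: "group (galgrp M E)" using galgrp_group[OF Msf] .
  have fEF: "finite_ext E ?F"
    using artin[OF fe KE normal_imp_subgroup[OF Nn]] finite_ext_intermediate[OF fe] by blast
  have "normal_ext E ?F" unfolding normal_ext_def
  proof (intro ballI allI impI)
    fix x y assume x: "x \<in> ?F" and y: "poly (minpoly E x) y = 0"
    have xM: "x \<in> M" using x unfolding fix_field_def by blast
    obtain \<sigma> where \<sigma>: "\<sigma> \<in> aut M E" "\<sigma> x = y" using conjugate_exists_aut[OF gM KE xM y] by blast
    have "\<tau> y = y" if t: "\<tau> \<in> N" for \<tau>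
    proof -
      have ia: "aut_inv M \<sigma> \<in> aut M E" using aut_inv_aut[OF \<sigma>(1) Msf] .
      have "inv\<^bsub>galgrp M E\<^esub> (aut_inv M \<sigma>) = \<sigma>"
        using group.inv_inv[OF G, of \<sigma>] \<sigma>(1) galgrp_inv[OF Msf \<sigma>(1)] by simp
      then have "aut_inv M \<sigma> \<circ> \<tau> \<circ> \<sigma> \<in> N"
        using group.normal_inv_iff[OF G, of N] Nn ia t by fastforce
      then have "(aut_inv M \<sigma> \<circ> \<tau> \<circ> \<sigma>) x = x" using x unfolding fix_field_def by blast
      then have "\<sigma> ((aut_inv M \<sigma> \<circ> \<tau> \<circ> \<sigma>) x) = \<sigma> x" by simp
      then show ?thesis using aut_inv_right[OF \<sigma>(1)] \<sigma>(2) by (metis comp_apply id_apply)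
    qed
    then show "y \<in> ?F" unfolding fix_field_def using aut_in[OF \<sigma>(1) xM] \<sigma>(2) by blast
  qed
  then show ?thesis
    unfolding galois_ext_def separable_ext_def using fEF rsquarefree_minpoly[OF E KE] by blast
qed

lemma aut_normal_if_galois:
  assumes gM: "galois_ext E M" and KE: "K \<subseteq> E"
    and E': "E \<subseteq> E'" "E' \<subseteq> M" "galois_ext E E'"
  shows "aut M E' \<lhd> galgrp M E"
proof -
  have Msf: "is_subfield M" and EM: "E \<subseteq> M" using gM unfolding galois_ext_def finite_ext_def by auto
  have G: "group (galgrp M E)" using galgrp_group[OF Msf] .
  show ?thesis unfolding group.normal_inv_iff[OF G]
  proof (intro conjI ballI)
    show "subgroup (aut M E') (galgrp M E)" using aut_subgroup[OF E'(1) Msf] .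
    fix \<sigma> \<tau> assume \<sigma>: "\<sigma> \<in> carrier (galgrp M E)" and \<tau>: "\<tau> \<in> aut M E'"
    have s: "\<sigma> \<in> aut M E" using \<sigma> by simp
    have ia: "aut_inv M \<sigma> \<in> aut M E" using aut_inv_aut[OF s Msf] .
    have tE: "\<tau> \<in> aut M E" using \<tau> aut_mono[OF E'(1)] by blast
    have comp: "\<sigma> \<circ> \<tau> \<circ> aut_inv M \<sigma> \<in> aut M E" using aut_comp[OF aut_comp[OF s tE] ia] .
    have "(\<sigma> \<circ> \<tau> \<circ> aut_inv M \<sigma>) e = e" if e: "e \<in> E'" for e
    proof -
      have "aut_inv M \<sigma> e \<in> E'" using aut_preserves_normal_subext[OF E'(3) KE ia Msf EM E'(2) e] .
      then have "\<tau> (aut_inv M \<sigma> e) = aut_inv M \<sigma> e" using aut_fix[OF \<tau>] by blast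
      then show ?thesis using aut_inv_right[OF s] by (metis comp_apply id_apply)
    qed
    then have "\<sigma> \<circ> \<tau> \<circ> aut_inv M \<sigma> \<in> aut M E'" using aut_fixI[OF comp] by blast
    then show "\<sigma> \<otimes>\<^bsub>galgrp M E\<^esub> \<tau> \<otimes>\<^bsub>galgrp M E\<^esub> inv\<^bsub>galgrp M E\<^esub> \<sigma> \<in> aut M E'"
      using galgrp_inv[OF Msf s] by simp
  qed
qed

theorem fix_ncl_max_galois_sub:
  assumes gM: "galois_ext E M" and KE: "K \<subseteq> E" and L: "is_subfield L" "E \<subseteq> L" "L \<subseteq> M"
  shows "max_galois_sub E L (fix_field M (ncl (galgrp M E) (aut M L)))"
proof -
  let ?N = "ncl (galgrp M E) (aut M L)"
  let ?F = "fix_field M ?N"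
  have Msf: "is_subfield M" using gM unfolding galois_ext_def finite_ext_def by auto
  note np = ncl_props[OF galgrp_group[OF Msf] aut_subgroup[OF L(2) Msf]]
  have EF: "E \<subseteq> ?F" using np(4) L aut_fix unfolding fix_field_def by fastforce
  have FL: "?F \<subseteq> L" using fix_field_anti[OF np(2)] galois_fix_field_aut[OF gM KE L] by blast
  have maxi: "E' \<subseteq> ?F" if E': "E \<subseteq> E'" "E' \<subseteq> L" "galois_ext E E'" for E'
  proof -
    have E'sf: "is_subfield E'" using E'(3) unfolding galois_ext_def finite_ext_def by auto
    have "aut M E' \<lhd> galgrp M E" using aut_normal_if_galois[OF gM KE E'(1) _ E'(3)] E'(2) L(3)
      by blast
    moreover have "aut M L \<subseteq> aut M E'" using aut_mono[OF E'(2)] .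
    ultimately have "?N \<subseteq> aut M E'" using np(3) by blast
    then have "fix_field M (aut M E') \<subseteq> ?F" by (rule fix_field_anti)
    moreover have "fix_field M (aut M E') = E'"
      using galois_fix_field_aut[OF gM KE E'sf E'(1)] E'(2) L(3) by blast
    ultimately show ?thesis by simp
  qed
  show ?thesis
    unfolding max_galois_sub_def using EF FL fix_field_normal_galois[OF gM KE np(1)] maxi by blast
qed

lemma aut_fix_ncl:
  assumes gM: "galois_ext E M" and KE: "K \<subseteq> E" and EL: "E \<subseteq> L"
  shows "aut M (fix_field M (ncl (galgrp M E) (aut M L))) = ncl (galgrp M E) (aut M L)"
proof -
  have fe: "finite_ext E M" using gM unfolding galois_ext_def by auto
  have Msf: "is_subfield M" using fe unfolding finite_ext_def by auto
  note np = ncl_props[OF galgrp_group[OF Msf] aut_subgroup[OF EL Msf]]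
  show ?thesis using artin[OF fe KE normal_imp_subgroup[OF np(1)]] by blast
qed

lemma ext_degree_fix_field_idx:
  assumes gM: "galois_ext E M" and KE: "K \<subseteq> E" and S: "subgroup S (galgrp M E)"
  shows "ext_degree E (fix_field M S) = idx (galgrp M E) S"
proof -
  let ?F = "fix_field M S"
  have fe: "finite_ext E M" using gM unfolding galois_ext_def by auto
  have Msf: "is_subfield M" using fe unfolding finite_ext_def by auto
  note A = artin[OF fe KE S]
  have fEF: "finite_ext E ?F" using finite_ext_intermediate[OF fe] A by blast
  have "finite S"
    using aut_finite_card_le[OF fe KE] subgroup.subset[OF S] finite_subset by fastforce
  then have cS: "card S > 0" using subgroup.one_closed[OF S] by (auto simp: card_gt_0_iff)
  have "ext_degree E ?F * card S = card (aut M E)"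
    using ext_degree_tower[OF fEF] A galois_card_aut[OF gM KE] by simp
  moreover have "card (rcosets\<^bsub>galgrp M E\<^esub> S) * card S = card (aut M E)"
    using group.lagrange[OF galgrp_group[OF Msf] S] by (simp add: Coset.order_def)
  ultimately show ?thesis unfolding idx_def using cS by (metis mult_right_cancel not_gr0)
qed

lemma ext_degree_fix_fields_idx:
  assumes gM: "galois_ext E M" and KE: "K \<subseteq> E"
    and N: "subgroup N (galgrp M E)" and H: "subgroup H (galgrp M E)" "H \<subseteq> N"
  shows "ext_degree (fix_field M N) (fix_field M H) = idx ((galgrp M E)\<lparr>carrier := N\<rparr>) H"
proof -
  let ?F = "fix_field M N"
  have fe: "finite_ext E M" using gM unfolding galois_ext_def by auto
  have Msf: "is_subfield M" using fe unfolding finite_ext_def by auto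
  note A = artin[OF fe KE N]
  have gF: "galois_ext ?F M" using galois_ext_upper[OF gM KE] A by blast
  have KF: "K \<subseteq> ?F" using KE A by blast
  have up: "(galgrp M E)\<lparr>carrier := N\<rparr> = galgrp M ?F" using A galgrp_update by metis
  have "subgroup H (galgrp M ?F)"
    using group.subgroup_incl[OF galgrp_group[OF Msf] H(1) N H(2)] up by simp
  from ext_degree_fix_field_idx[OF gF KF this] show ?thesis using up by simp
qed

section \<open>Galois closures\<close>

lemma finitely_generated_ext_exists:
  assumes E: "is_subfield E" "K \<subseteq> E" and R: "finite R"
  shows "\<exists>N. is_subfield N \<and> E \<subseteq> N \<and> R \<subseteq> N \<and> finite_ext E N \<and>
             (\<forall>M. is_subfield M \<and> E \<subseteq> M \<and> R \<subseteq> M \<longrightarrow> N \<subseteq> M)"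
  using R
proof (induction R rule: finite_induct)
  case empty
  then show ?case using E ext_degree_self[OF E(1)] by blast
next
  case (insert r R)
  then obtain N where N: "is_subfield N" "E \<subseteq> N" "R \<subseteq> N" "finite_ext E N"
    "\<forall>M. is_subfield M \<and> E \<subseteq> M \<and> R \<subseteq> M \<longrightarrow> N \<subseteq> M" by blast
  let ?N' = "adjoin N r"
  have KN: "K \<subseteq> N" using N E by blast
  have "finite_ext N ?N'" using simple_ext_degree[OF N(1) KN] by blast
  then have f: "finite_ext E ?N'" using ext_degree_tower[OF N(4)] by blast
  have NN: "N \<subseteq> ?N'" using adjoin_base .
  have rN: "r \<in> ?N'" using adjoin_gen .
  have mini: "\<forall>M. is_subfield M \<and> E \<subseteq> M \<and> insert r R \<subseteq> M \<longrightarrow> ?N' \<subseteq> M"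
  proof (intro allI impI)
    fix M assume M: "is_subfield M \<and> E \<subseteq> M \<and> insert r R \<subseteq> M"
    then have "R \<subseteq> M" "r \<in> M" by auto
    then have "N \<subseteq> M" using N(5) M by blast
    then show "?N' \<subseteq> M" using adjoin_least[of M N r] M \<open>r \<in> M\<close> by blast
  qed
  have sfN': "is_subfield ?N'" by (rule adjoin_is_subfield)
  have EN': "E \<subseteq> ?N'" using N(2) NN by (rule subset_trans)
  have RN': "insert r R \<subseteq> ?N'" using N(3) NN rN by blast
  show ?case using sfN' EN' RN' f mini by blast
qed

lemma is_subfield_hom_preimage:
  assumes N: "is_subfield N" and one: "\<sigma> 1 = 1"
    and hom: "\<And>x y. x \<in> N \<Longrightarrow> y \<in> N \<Longrightarrow>
      \<sigma> (x + y) = \<sigma> x + \<sigma> y \<and> \<sigma> (x * y) = \<sigma> x * \<sigma> y \<and> \<sigma> (x - y) = \<sigma> x - \<sigma> y"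
  shows "is_subfield {x \<in> N. \<sigma> x \<in> N}"
  unfolding is_subfield_def
proof (intro conjI ballI impI)
  have "\<sigma> 0 = 0" using hom[OF is_subfield_one[OF N] is_subfield_one[OF N]] by simp
  then show "0 \<in> {x \<in> N. \<sigma> x \<in> N}" using is_subfield_zero[OF N] by simp
  show "1 \<in> {x \<in> N. \<sigma> x \<in> N}" using one is_subfield_one[OF N] by simp
  fix x y assume x: "x \<in> {x \<in> N. \<sigma> x \<in> N}" and y: "y \<in> {x \<in> N. \<sigma> x \<in> N}"
  then show "x + y \<in> {x \<in> N. \<sigma> x \<in> N}" "x - y \<in> {x \<in> N. \<sigma> x \<in> N}" "x * y \<in> {x \<in> N. \<sigma> x \<in> N}"
    using hom[of x y] is_subfield_add[OF N] is_subfield_diff[OF N] is_subfield_mult[OF N] by auto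
next
  fix x assume x: "x \<in> {x \<in> N. \<sigma> x \<in> N}" and x0: "x \<noteq> 0"
  have iN: "inverse x \<in> N" using x is_subfield_inverse[OF N] by blast
  have "\<sigma> x * \<sigma> (inverse x) = 1" using hom[of x "inverse x"] x iN x0 one by auto
  then have "\<sigma> (inverse x) = inverse (\<sigma> x)" by (metis inverse_unique)
  then show "inverse x \<in> {x \<in> N. \<sigma> x \<in> N}" using iN x is_subfield_inverse[OF N] by auto
qed

text \<open>Substituting a conjugate for a primitive element maps the roots of \<open>f\<close> to roots of \<open>f\<close>,
  hence maps the field they generate into itself.\<close>

lemma root_field_conjugate_mem:
  assumes E: "is_subfield E" "K \<subseteq> E" and f: "poly_over E f"
    and N: "is_subfield N" "E \<subseteq> N" "{x. poly f x = 0} \<subseteq> N"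
    and N_least: "\<And>M. is_subfield M \<Longrightarrow> E \<subseteq> M \<Longrightarrow> {x. poly f x = 0} \<subseteq> M \<Longrightarrow> N \<subseteq> M"
    and \<eta>: "adjoin E \<eta> = N" and \<eta>': "poly (minpoly E \<eta>) \<eta>' = 0"
  shows "\<eta>' \<in> N"
proof -
  obtain \<sigma> where \<sigma>: "\<And>h. poly_over E h \<Longrightarrow> \<sigma> (poly h \<eta>) = poly h \<eta>'"
    using substitution_map_exists[OF E \<eta>'] by blast
  have rep: "\<exists>h. poly_over E h \<and> x = poly h \<eta>" if "x \<in> N" for x
    using adjoin_iff_poly[OF E] \<eta> that by blast
  have hom: "\<sigma> (x + y) = \<sigma> x + \<sigma> y \<and> \<sigma> (x * y) = \<sigma> x * \<sigma> y \<and> \<sigma> (x - y) = \<sigma> x - \<sigma> y"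
    if xy: "x \<in> N" "y \<in> N" for x y
  proof -
    obtain h h' where hh: "poly_over E h" "x = poly h \<eta>" "poly_over E h'" "y = poly h' \<eta>"
      using rep xy by blast
    show ?thesis
      using \<sigma>[OF poly_over_add[OF E(1) hh(1,3)]] \<sigma>[OF poly_over_mult[OF E(1) hh(1,3)]]
        \<sigma>[OF poly_over_diff[OF E(1) hh(1,3)]] \<sigma>[OF hh(1)] \<sigma>[OF hh(3)] hh by simp
  qed
  have const: "\<sigma> c = c" if "c \<in> E" for c using \<sigma>[OF poly_over_const[OF E(1) that]] by simp
  have roots: "\<sigma> r \<in> N" if r: "poly f r = 0" for r
  proof -
    obtain h where h: "poly_over E h" "r = poly h \<eta>" using rep N(3) r by blast
    have "poly (pcompose f h) \<eta> = 0" using r h(2) by (simp add: poly_pcompose)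
    then have "poly (pcompose f h) \<eta>' = 0"
      using \<sigma>[OF poly_over_pcompose[OF E(1) f h(1)]] const[OF is_subfield_zero[OF E(1)]] by simp
    then show ?thesis using \<sigma>[OF h(1)] h(2) N(3) by (auto simp: poly_pcompose)
  qed
  have "is_subfield {x \<in> N. \<sigma> x \<in> N}"
    by (rule is_subfield_hom_preimage[OF N(1) const[OF is_subfield_one[OF E(1)]] hom])
  moreover have "E \<subseteq> {x \<in> N. \<sigma> x \<in> N}" using N(2) const by auto
  moreover have "{x. poly f x = 0} \<subseteq> {x \<in> N. \<sigma> x \<in> N}" using N(3) roots by auto
  ultimately have "N \<subseteq> {x \<in> N. \<sigma> x \<in> N}" by (rule N_least)
  moreover have "\<eta> \<in> N" using \<eta> adjoin_gen by blast
  moreover have "\<sigma> \<eta> = \<eta>'"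
    using \<sigma>[OF poly_over_linear[OF E(1), THEN iffD2, OF is_subfield_zero[OF E(1)]]] by simp
  ultimately show ?thesis by blast
qed

theorem galois_ext_superset_exists:
  assumes fe: "finite_ext E L" and KE: "K \<subseteq> E"
  shows "\<exists>N. L \<subseteq> N \<and> galois_ext E N"
proof -
  have E: "is_subfield E" using fe unfolding finite_ext_def by auto
  obtain \<theta> where th: "\<theta> \<in> L" "adjoin E \<theta> = L" using primitive_element[OF fe KE] by blast
  have alg: "algebraic_over E \<theta>" using algebraic_over_ext[OF E KE] .
  let ?f = "minpoly E \<theta>"
  have fR: "finite {x. poly ?f x = 0}" using poly_roots_finite[OF minpoly_nonzero[OF E alg]] .
  obtain N where N: "is_subfield N" "E \<subseteq> N" "{x. poly ?f x = 0} \<subseteq> N" "finite_ext E N"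
    "\<forall>M. is_subfield M \<and> E \<subseteq> M \<and> {x. poly ?f x = 0} \<subseteq> M \<longrightarrow> N \<subseteq> M"
    using finitely_generated_ext_exists[OF E KE fR] by blast
  have LN: "L \<subseteq> N" using adjoin_least[OF N(1) N(2)] N(3) minpoly_root[OF E alg] th by blast
  obtain \<eta> where \<eta>: "\<eta> \<in> N" "adjoin E \<eta> = N" using primitive_element[OF N(4) KE] by blast
  let ?g = "minpoly E \<eta>"
  have N_least: "N \<subseteq> M" if "is_subfield M" "E \<subseteq> M" "{x. poly ?f x = 0} \<subseteq> M" for M
    using N(5) that by blast
  have "{\<beta> \<in> N. poly ?g \<beta> = 0} = {\<beta>. poly ?g \<beta> = 0}"
    using root_field_conjugate_mem[OF E KE minpoly_over[OF E alg] N(1-3) N_least \<eta>(2)] by blast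
  then have "card (aut N E) = card {\<beta>. poly ?g \<beta> = 0}"
    using bij_betw_same_card[OF aut_roots_bij[OF E KE \<eta>(2)[symmetric]]] by simp
  also have "\<dots> = degree ?g" using card_roots_rsquarefree[OF rsquarefree_minpoly[OF E KE]] .
  also have "\<dots> = ext_degree E N" using simple_ext_degree[OF E KE, of \<eta>] \<eta> by simp
  finally have "galois_ext E N" using galois_iff_card_aut[OF N(4) KE] by simp
  then show ?thesis using LN by blast
qed

theorem gal_closure_galois:
  assumes fe: "finite_ext E L" and KE: "K \<subseteq> E"
  shows "galois_ext E (gal_closure E L)" "L \<subseteq> gal_closure E L"
    "\<And>M. L \<subseteq> M \<Longrightarrow> galois_ext E M \<Longrightarrow> gal_closure E L \<subseteq> M"
proof -
  have E: "is_subfield E" and EL: "E \<subseteq> L" using fe unfolding finite_ext_def by auto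
  obtain N0 where N0: "L \<subseteq> N0" "galois_ext E N0" using galois_ext_superset_exists[OF fe KE] by blast
  let ?A = "{M. L \<subseteq> M \<and> galois_ext E M}"
  let ?Lt = "gal_closure E L"
  have Lt: "?Lt = \<Inter>?A" unfolding gal_closure_def ..
  show LLt: "L \<subseteq> ?Lt" unfolding Lt by blast
  show min: "\<And>M. L \<subseteq> M \<Longrightarrow> galois_ext E M \<Longrightarrow> ?Lt \<subseteq> M" unfolding Lt by blast
  have sf: "is_subfield ?Lt" unfolding Lt
    by (rule is_subfield_Inter) (auto simp: galois_ext_def finite_ext_def)
  have fN0: "finite_ext E N0" using N0 unfolding galois_ext_def by auto
  have "finite_ext E ?Lt" using finite_ext_intermediate[OF fN0 sf] LLt EL min[OF N0] by blast
  moreover have "normal_ext E ?Lt" unfolding normal_ext_def Lt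
    by (auto simp: galois_ext_def normal_ext_def)
  moreover have "separable_ext E ?Lt" unfolding separable_ext_def using rsquarefree_minpoly[OF E KE]
    by blast
  ultimately show "galois_ext E (gal_closure E L)" unfolding galois_ext_def by blast
qed

theorem asc_field_max_galois_sub:
  assumes fe: "finite_ext E L" and KE: "K \<subseteq> E"
  shows "max_galois_sub E L (asc_field E L)"
proof -
  have L: "is_subfield L" "E \<subseteq> L" using fe unfolding finite_ext_def by auto
  note C = gal_closure_galois[OF fe KE]
  show ?thesis using fix_ncl_max_galois_sub[OF C(1) KE L C(2)] unfolding asc_field_def Let_def .
qed

lemma cluster_size_card_aut:
  assumes fe: "finite_ext E L" and KE: "K \<subseteq> E"
  shows "cluster_size E L = card (aut L E)"
proof -
  have E: "is_subfield E" using fe unfolding finite_ext_def by auto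
  have ex: "\<exists>a. a \<in> L \<and> adjoin E a = L" using primitive_element[OF fe KE] by blast
  define a where "a = (SOME a. a \<in> L \<and> adjoin E a = L)"
  have a: "a \<in> L" "adjoin E a = L" using someI_ex[OF ex] unfolding a_def by auto
  have "card (aut L E) = card {y \<in> L. poly (minpoly E a) y = 0}"
    using bij_betw_same_card[OF aut_roots_bij[OF E KE a(2)[symmetric]]] .
  then show ?thesis unfolding cluster_size_def Let_def a_def[symmetric] by simp
qed

end

lemma card_fibers:
  assumes fA: "finite A" and k: "\<And>a. a \<in> A \<Longrightarrow> card {b \<in> A. f b = f a} = k"
  shows "card A = card (f ` A) * k"
proof -
  have A: "A = (\<Union>y\<in>f ` A. {b \<in> A. f b = y})" by auto
  have "card A = (\<Sum>y\<in>f ` A. card {b \<in> A. f b = y})"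
    by (subst A, rule card_UN_disjoint) (use fA in auto)
  also have "\<dots> = (\<Sum>y\<in>f ` A. k)" using k by (intro sum.cong) auto
  finally show ?thesis by simp
qed

definition aut_restrict :: "'a set \<Rightarrow> ('a \<Rightarrow> 'a) \<Rightarrow> 'a \<Rightarrow> 'a" where
  "aut_restrict F \<sigma> = (\<lambda>x. if x \<in> F then \<sigma> x else x)"

lemma aut_restrict_eq_id_iff:
  assumes "\<sigma> \<in> aut L E"
  shows "aut_restrict F \<sigma> = id \<longleftrightarrow> \<sigma> \<in> aut L F"
proof
  assume r: "aut_restrict F \<sigma> = id"
  have "\<sigma> x = x" if "x \<in> F" for x
    using fun_cong[OF r, of x] that unfolding aut_restrict_def by simp
  then show "\<sigma> \<in> aut L F" using aut_fixI[OF assms] by blast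
next
  assume "\<sigma> \<in> aut L F"
  then show "aut_restrict F \<sigma> = id"
    unfolding aut_restrict_def fun_eq_iff using aut_fix by fastforce
qed

context perfect_base_field
begin

context
  fixes E F L :: "'a set"
  assumes fe: "finite_ext E L" and KE: "K \<subseteq> E" and gF: "galois_ext E F" and FL: "F \<subseteq> L"
begin

lemma aut_maps_galois_sub:
  assumes "\<sigma> \<in> aut L E" "x \<in> F"
  shows "\<sigma> x \<in> F"
proof -
  have "is_subfield L" "E \<subseteq> L" using fe unfolding finite_ext_def by auto
  then show ?thesis using aut_preserves_normal_subext[OF gF KE assms(1) _ _ FL assms(2)] by blast
qed

lemma aut_restrict_comp:
  "\<sigma> \<in> aut L E \<Longrightarrow> \<tau> \<in> aut L E \<Longrightarrow> aut_restrict F (\<sigma> \<circ> \<tau>) = aut_restrict F \<sigma> \<circ> aut_restrict F \<tau>"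
  using aut_maps_galois_sub unfolding aut_restrict_def by (auto simp: fun_eq_iff)

lemma aut_restrict_inv_comp:
  assumes s: "\<sigma> \<in> aut L E"
  shows "aut_restrict F (aut_inv L \<sigma>) \<circ> aut_restrict F \<sigma> = id"
proof -
  have Lsf: "is_subfield L" using fe unfolding finite_ext_def by auto
  have "aut_restrict F (aut_inv L \<sigma>) \<circ> aut_restrict F \<sigma> = aut_restrict F (aut_inv L \<sigma> \<circ> \<sigma>)"
    using aut_restrict_comp[OF aut_inv_aut[OF s Lsf] s] by simp
  also have "\<dots> = id" using aut_inv_left[OF s] unfolding aut_restrict_def by (simp add: fun_eq_iff)
  finally show ?thesis .
qed

lemma aut_restrict_aut:
  assumes s: "\<sigma> \<in> aut L E"
  shows "aut_restrict F \<sigma> \<in> aut F E"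
proof -
  have Lsf: "is_subfield L" using fe unfolding finite_ext_def by auto
  have Fsf: "is_subfield F" and EF: "E \<subseteq> F" using gF unfolding galois_ext_def finite_ext_def by auto
  have "F \<subseteq> aut_restrict F \<sigma> ` F"
  proof
    fix y assume y: "y \<in> F"
    have "aut_inv L \<sigma> y \<in> F" using aut_maps_galois_sub[OF aut_inv_aut[OF s Lsf] y] .
    moreover have "\<sigma> (aut_inv L \<sigma> y) = y" using aut_inv_right[OF s] by (metis comp_apply id_apply)
    ultimately show "y \<in> aut_restrict F \<sigma> ` F" unfolding aut_restrict_def by force
  qed
  moreover have "inj_on (aut_restrict F \<sigma>) F"
    using aut_inj[OF s] FL unfolding aut_restrict_def by (auto simp: inj_on_def)
  ultimately show ?thesis unfolding aut_def
    using aut_maps_galois_sub[OF s] aut_add[OF s] aut_mult[OF s] aut_fix[OF s] EF FL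
      is_subfield_add[OF Fsf] is_subfield_mult[OF Fsf]
    by (auto simp: bij_betw_def aut_restrict_def subset_iff)
qed

lemma aut_restrict_fiber:
  assumes a: "a \<in> aut L E"
  shows "{b \<in> aut L E. aut_restrict F b = aut_restrict F a} = (\<lambda>\<tau>. a \<circ> \<tau>) ` aut L F"
proof -
  have Lsf: "is_subfield L" using fe unfolding finite_ext_def by auto
  have EF: "E \<subseteq> F" using gF unfolding galois_ext_def finite_ext_def by auto
  have ia: "aut_inv L a \<in> aut L E" using aut_inv_aut[OF a Lsf] .
  note restrict_inv = aut_restrict_inv_comp[OF a]
  show ?thesis
  proof
    show "{b \<in> aut L E. aut_restrict F b = aut_restrict F a} \<subseteq> (\<lambda>\<tau>. a \<circ> \<tau>) ` aut L F"
    proof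
      fix b assume b: "b \<in> {b \<in> aut L E. aut_restrict F b = aut_restrict F a}"
      let ?t = "aut_inv L a \<circ> b"
      have tE: "?t \<in> aut L E" using aut_comp[OF ia] b by blast
      have "aut_restrict F ?t = id" using aut_restrict_comp[OF ia] b restrict_inv by auto
      then have "?t \<in> aut L F" using aut_restrict_eq_id_iff[OF tE] by blast
      moreover have "b = a \<circ> ?t" using aut_inv_right[OF a] by (simp add: comp_assoc[symmetric])
      ultimately show "b \<in> (\<lambda>\<tau>. a \<circ> \<tau>) ` aut L F" by blast
    qed
    show "(\<lambda>\<tau>. a \<circ> \<tau>) ` aut L F \<subseteq> {b \<in> aut L E. aut_restrict F b = aut_restrict F a}"
    proof
      fix b assume "b \<in> (\<lambda>\<tau>. a \<circ> \<tau>) ` aut L F"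
      then obtain \<tau> where t: "\<tau> \<in> aut L F" "b = a \<circ> \<tau>" by blast
      have tE: "\<tau> \<in> aut L E" using t(1) aut_mono[OF EF] by blast
      have "aut_restrict F \<tau> = id" using aut_restrict_eq_id_iff[OF tE] t(1) by blast
      then have "aut_restrict F b = aut_restrict F a" using aut_restrict_comp[OF a tE] t(2) by simp
      then show "b \<in> {b \<in> aut L E. aut_restrict F b = aut_restrict F a}"
        using aut_comp[OF a tE] t(2) by simp
    qed
  qed
qed

lemma card_aut_restrict_fiber:
  assumes a: "a \<in> aut L E"
  shows "card {b \<in> aut L E. aut_restrict F b = aut_restrict F a} = card (aut L F)"
proof -
  have "inj_on (\<lambda>\<tau>. a \<circ> \<tau>) (aut L F)"
  proof (rule inj_onI)
    fix t1 t2 :: "'a \<Rightarrow> 'a" assume "a \<circ> t1 = a \<circ> t2"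
    then have "aut_inv L a \<circ> (a \<circ> t1) = aut_inv L a \<circ> (a \<circ> t2)" by simp
    then show "t1 = t2" using aut_inv_left[OF a] by (simp add: comp_assoc[symmetric])
  qed
  then show ?thesis unfolding aut_restrict_fiber[OF a] by (simp add: card_image)
qed

lemma aut_restrict_image_subgroup: "subgroup (aut_restrict F ` aut L E) (galgrp F E)"
proof -
  have Lsf: "is_subfield L" using fe unfolding finite_ext_def by auto
  have G: "group (galgrp F E)"
    using galgrp_group gF unfolding galois_ext_def finite_ext_def by blast
  show ?thesis
  proof (rule group.subgroupI[OF G])
    show "aut_restrict F ` aut L E \<subseteq> carrier (galgrp F E)" using aut_restrict_aut by auto
    show "aut_restrict F ` aut L E \<noteq> {}" using id_aut by blast
    fix a assume "a \<in> aut_restrict F ` aut L E"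
    then obtain \<sigma> where s: "\<sigma> \<in> aut L E" "a = aut_restrict F \<sigma>" by blast
    have ia: "aut_inv L \<sigma> \<in> aut L E" using aut_inv_aut[OF s(1) Lsf] .
    have "inv\<^bsub>galgrp F E\<^esub> (aut_restrict F \<sigma>) = aut_restrict F (aut_inv L \<sigma>)"
      by (rule group.inv_equality[OF G])
        (use aut_restrict_inv_comp[OF s(1)] aut_restrict_aut[OF s(1)] aut_restrict_aut[OF ia]
          in simp_all)
    then show "inv\<^bsub>galgrp F E\<^esub> a \<in> aut_restrict F ` aut L E" using ia unfolding s(2) by blast
  next
    fix a b assume "a \<in> aut_restrict F ` aut L E" "b \<in> aut_restrict F ` aut L E"
    then obtain \<sigma> \<tau> where st: "\<sigma> \<in> aut L E" "\<tau> \<in> aut L E"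
      and ab: "a = aut_restrict F \<sigma>" "b = aut_restrict F \<tau>" by blast
    have "a \<otimes>\<^bsub>galgrp F E\<^esub> b = aut_restrict F (\<sigma> \<circ> \<tau>)"
      unfolding ab using aut_restrict_comp[OF st] by simp
    then show "a \<otimes>\<^bsub>galgrp F E\<^esub> b \<in> aut_restrict F ` aut L E" using aut_comp[OF st] by blast
  qed
qed

theorem card_aut_dvd:
  "card (aut L E) dvd ext_degree E F * card (aut L F)"
proof -
  have Fsf: "is_subfield F" using gF unfolding galois_ext_def finite_ext_def by auto
  have "finite (aut L E)" using aut_finite_card_le[OF fe KE] by blast
  then have "card (aut L E) = card (aut_restrict F ` aut L E) * card (aut L F)"
    by (rule card_fibers[OF _ card_aut_restrict_fiber])
  moreover have
    "card (rcosets\<^bsub>galgrp F E\<^esub> (aut_restrict F ` aut L E)) * card (aut_restrict F ` aut L E)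
      = ext_degree E F"
    using group.lagrange[OF galgrp_group[OF Fsf] aut_restrict_image_subgroup]
      galois_card_aut[OF gF KE]
    by (simp add: Coset.order_def)
  then have "card (aut_restrict F ` aut L E) dvd ext_degree E F" by (metis dvd_triv_right)
  ultimately show ?thesis by (simp add: mult_dvd_mono)
qed

end

end

section \<open>The chain of normal closures\<close>

primrec ncl_chain :: "('g, 'b) monoid_scheme \<Rightarrow> 'g set \<Rightarrow> nat \<Rightarrow> 'g set" where
  "ncl_chain G H 0 = carrier G"
| "ncl_chain G H (Suc i) = ncl (G\<lparr>carrier := ncl_chain G H i\<rparr>) H"

locale perfect_base_field_ext = perfect_base_field +
  fixes L :: "'a::field set"
  assumes ext: "finite_ext K L"
begin

abbreviation "Lt \<equiv> gal_closure K L"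
abbreviation "\<G> \<equiv> galgrp Lt K"
abbreviation "\<H> \<equiv> aut Lt L"
abbreviation "grp_chain \<equiv> ncl_chain \<G> \<H>"
abbreviation "fld_chain i \<equiv> fix_field Lt (grp_chain i)"

lemma L_subfield: "is_subfield L" and K_subset_L: "K \<subseteq> L"
  using ext unfolding finite_ext_def by auto

lemma galois_Lt: "galois_ext K Lt" and L_subset_Lt: "L \<subseteq> Lt"
  using gal_closure_galois[OF ext order_refl] by blast+

lemma Lt_subfield: "is_subfield Lt"
  using galois_Lt unfolding galois_ext_def finite_ext_def by auto

lemma fix_field_aut_L: "fix_field Lt \<H> = L"
  using galois_fix_field_aut[OF galois_Lt order_refl L_subfield K_subset_L L_subset_Lt] .

lemma fld_chain_0: "fld_chain 0 = K"
  using galois_fix_field[OF galois_Lt order_refl] by simp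

lemma ncl_eq_grp_chain_1: "ncl \<G> \<H> = grp_chain (Suc 0)"
  by (simp add: galgrp_def)

lemma fld_chain_props:
  "K \<subseteq> fld_chain i \<and> fld_chain i \<subseteq> L \<and> is_subfield (fld_chain i) \<and>
   grp_chain i = aut Lt (fld_chain i) \<and> galois_ext (fld_chain i) Lt"
proof (induction i)
  case 0
  then show ?case using galois_fix_field[OF galois_Lt order_refl] K_subset_L K_subfield galois_Lt
    by simp
next
  case (Suc i)
  let ?F = "fld_chain i"
  have Fi: "K \<subseteq> ?F" "?F \<subseteq> L" "is_subfield ?F" "grp_chain i = aut Lt ?F" "galois_ext ?F Lt"
    using Suc by auto
  have eq: "grp_chain (Suc i) = ncl (galgrp Lt ?F) \<H>"
    using Fi(4) galgrp_update by (metis ncl_chain.simps(2))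
  have m: "max_galois_sub ?F L (fld_chain (Suc i))"
    unfolding eq using fix_ncl_max_galois_sub[OF Fi(5) Fi(1) L_subfield Fi(2) L_subset_Lt] .
  have "grp_chain (Suc i) = aut Lt (fld_chain (Suc i))"
    unfolding eq using aut_fix_ncl[OF Fi(5) Fi(1) Fi(2)] by simp
  moreover have "is_subfield (fld_chain (Suc i))"
    using max_galois_subD(3)[OF m] unfolding galois_ext_def finite_ext_def by blast
  moreover have "K \<subseteq> fld_chain (Suc i)" "fld_chain (Suc i) \<subseteq> L"
    using Fi(1) max_galois_subD(1,2)[OF m] by auto
  ultimately show ?case
    using galois_ext_upper[OF galois_Lt order_refl] L_subset_Lt by blast
qed

lemma grp_chain_Suc: "grp_chain (Suc i) = ncl (galgrp Lt (fld_chain i)) \<H>"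
  using fld_chain_props[of i] galgrp_update by (metis ncl_chain.simps(2))

lemma max_galois_sub_fld_chain: "max_galois_sub (fld_chain i) L (fld_chain (Suc i))"
  unfolding grp_chain_Suc
  by (rule fix_ncl_max_galois_sub) (use fld_chain_props[of i] L_subfield L_subset_Lt in auto)

lemma asc_field_fld_chain: "asc_field (fld_chain i) L = fld_chain (Suc i)"
proof -
  have "finite_ext (fld_chain i) L"
    using fld_chain_props[of i] finite_ext_intermediate[OF ext] by blast
  then have "max_galois_sub (fld_chain i) L (asc_field (fld_chain i) L)"
    using asc_field_max_galois_sub fld_chain_props[of i] by blast
  then show ?thesis using max_galois_sub_unique max_galois_sub_fld_chain by blast
qed

lemma grp_chain_subgroup: "subgroup (grp_chain i) \<G>"
  using fld_chain_props[of i] aut_subgroup[OF _ Lt_subfield] by metis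

lemma aut_L_subset_grp_chain: "\<H> \<subseteq> grp_chain i"
  using fld_chain_props[of i] aut_mono by metis

lemma grp_chain_Suc_subset: "grp_chain (Suc i) \<subseteq> grp_chain i"
  using fld_chain_props[of i] fld_chain_props[of "Suc i"]
    max_galois_subD(1)[OF max_galois_sub_fld_chain]
    aut_mono by metis

lemma grp_chain_Suc_normal: "grp_chain (Suc i) \<lhd> \<G>\<lparr>carrier := grp_chain i\<rparr>"
proof -
  have FL: "fld_chain i \<subseteq> L" and eq: "grp_chain i = aut Lt (fld_chain i)"
    using fld_chain_props by auto
  have up: "\<G>\<lparr>carrier := grp_chain i\<rparr> = galgrp Lt (fld_chain i)" using galgrp_update eq by metis
  show ?thesis unfolding grp_chain_Suc up
    using ncl_props(1)[OF galgrp_group[OF Lt_subfield] aut_subgroup[OF FL Lt_subfield]] .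
qed

lemma grp_chain_eq_iff: "grp_chain i = grp_chain j \<longleftrightarrow> fld_chain i = fld_chain j"
  using fld_chain_props[of i] fld_chain_props[of j] by metis

lemma t_idx_fld_chain:
  "t_idx (fld_chain i) L = idx (\<G>\<lparr>carrier := grp_chain i\<rparr>) (grp_chain (Suc i))"
  unfolding t_idx_def asc_field_fld_chain
  by (rule ext_degree_fix_fields_idx[OF galois_Lt order_refl grp_chain_subgroup grp_chain_subgroup
        grp_chain_Suc_subset])

lemma u_idx_fld_chain:
  "u_idx (fld_chain i) L = idx (\<G>\<lparr>carrier := grp_chain (Suc i)\<rparr>) \<H>"
  using ext_degree_fix_fields_idx[OF galois_Lt order_refl grp_chain_subgroup[of "Suc i"]
      aut_subgroup[OF K_subset_L Lt_subfield] aut_L_subset_grp_chain[of "Suc i"]] fix_field_aut_L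
  unfolding u_idx_def asc_field_fld_chain by simp

lemma grp_chain_stabilizes: "\<exists>j. grp_chain (Suc j) = grp_chain j"
proof (rule ccontr)
  assume "\<not> (\<exists>j. grp_chain (Suc j) = grp_chain j)"
  then have strict: "grp_chain (Suc j) \<subset> grp_chain j" for j using grp_chain_Suc_subset by blast
  have "finite (aut Lt K)"
    using aut_finite_card_le[OF _ order_refl] galois_Lt unfolding galois_ext_def by blast
  then have fin: "finite (grp_chain j)" for j
    using fld_chain_props[of j] aut_mono by (metis finite_subset)
  have "card (grp_chain j) + j \<le> card (grp_chain 0)" for j
  proof (induction j)
    case (Suc j)
    then show ?case using psubset_card_mono[OF fin strict, of j] by simp
  qed simp
  from this[of "Suc (card (grp_chain 0))"] show False by simp
qed

definition chain_len :: nat where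
  "chain_len = (LEAST j. grp_chain (Suc j) = grp_chain j)"

lemma grp_chain_chain_len: "grp_chain (Suc chain_len) = grp_chain chain_len"
  unfolding chain_len_def using LeastI_ex[OF grp_chain_stabilizes] .

lemma grp_chain_Suc_neq: "j < chain_len \<Longrightarrow> grp_chain (Suc j) \<noteq> grp_chain j"
  unfolding chain_len_def using not_less_Least by blast

lemma chain_len_le: "grp_chain (Suc j) = grp_chain j \<Longrightarrow> chain_len \<le> j"
  unfolding chain_len_def by (rule Least_le)

lemma fld_chain_strict: "j < chain_len \<Longrightarrow> fld_chain j \<subset> fld_chain (Suc j)"
  using max_galois_subD(1)[OF max_galois_sub_fld_chain] grp_chain_Suc_neq grp_chain_eq_iff by blast

definition desc_list :: "('a \<Rightarrow> 'a) set list" where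
  "desc_list = map grp_chain [0..<Suc chain_len]"

definition asc_list :: "'a set list" where
  "asc_list = map fld_chain [0..<Suc chain_len]"

lemma length_desc_list: "length desc_list = Suc chain_len"
  and length_asc_list: "length asc_list = Suc chain_len"
  unfolding desc_list_def asc_list_def by simp_all

lemma nth_desc_list: "i < Suc chain_len \<Longrightarrow> desc_list ! i = grp_chain i"
  and nth_asc_list: "i < Suc chain_len \<Longrightarrow> asc_list ! i = fld_chain i"
  unfolding desc_list_def asc_list_def by (simp_all del: upt_Suc)

lemma last_desc_list: "last desc_list = grp_chain chain_len"
  and last_asc_list: "last asc_list = fld_chain chain_len"
  unfolding desc_list_def asc_list_def by simp_all

lemma desc_chain_desc_list: "desc_chain \<G> \<H> desc_list"
proof -
  have "desc_list ! Suc i = ncl (\<G>\<lparr>carrier := desc_list ! i\<rparr>) \<H> \<and> desc_list ! Suc i \<subset> desc_list ! i"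
    if "Suc i < length desc_list" for i
    using that length_desc_list nth_desc_list[of i] nth_desc_list[of "Suc i"]
      grp_chain_Suc_neq[of i] grp_chain_Suc_subset[of i] by (auto simp: psubset_eq)
  moreover have "desc_list \<noteq> []" "desc_list ! 0 = carrier \<G>"
    using length_desc_list nth_desc_list[of 0] by auto
  moreover have "ncl (\<G>\<lparr>carrier := last desc_list\<rparr>) \<H> = last desc_list"
    using last_desc_list grp_chain_chain_len by simp
  ultimately show ?thesis unfolding desc_chain_def by blast
qed

lemma desc_chain_unique:
  assumes d: "desc_chain \<G> \<H> gs"
  shows "gs = desc_list"
proof -
  have ne: "gs \<noteq> []" and g0: "gs ! 0 = carrier \<G>"
    and st: "\<And>i. Suc i < length gs \<Longrightarrow>
      gs ! Suc i = ncl (\<G>\<lparr>carrier := gs ! i\<rparr>) \<H> \<and> gs ! Suc i \<subset> gs ! i"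
    and la: "ncl (\<G>\<lparr>carrier := last gs\<rparr>) \<H> = last gs"
    using d unfolding desc_chain_def by auto
  have nth: "gs ! i = grp_chain i" if "i < length gs" for i
    using that by (induction i) (use g0 st in auto)
  obtain n where nl: "length gs = Suc n" using ne by (cases gs) auto
  have "grp_chain (Suc n) = grp_chain n"
    using la last_conv_nth[OF ne] nth[of n] nl by simp
  then have "chain_len \<le> n" by (rule chain_len_le)
  moreover have "\<not> chain_len < n"
  proof
    assume lt: "chain_len < n"
    then have "Suc chain_len < length gs" using nl by simp
    then have "gs ! Suc chain_len \<subset> gs ! chain_len" using st by blast
    then show False using nth[of chain_len] nth[of "Suc chain_len"] nl lt grp_chain_chain_len
      by simp
  qed
  ultimately have "n = chain_len" by simp
  then show ?thesis using nth nth_desc_list nl length_desc_list by (intro nth_equalityI) auto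
qed

lemma desc_chain_iff: "desc_chain \<G> \<H> gs \<longleftrightarrow> gs = desc_list"
  using desc_chain_desc_list desc_chain_unique by blast

lemma asc_chain_asc_list: "asc_chain K L asc_list"
proof -
  have "fld_chain (Suc chain_len) = fld_chain chain_len"
    using grp_chain_chain_len grp_chain_eq_iff by blast
  then have "t_idx (last asc_list) L = 1"
    unfolding last_asc_list t_idx_def asc_field_fld_chain
    using ext_degree_self fld_chain_props by metis
  moreover have "asc_list ! i \<subset> asc_list ! Suc i \<and> asc_list ! Suc i \<subseteq> L \<and>
      galois_ext (asc_list ! i) (asc_list ! Suc i) \<and>
      (\<forall>E. asc_list ! i \<subseteq> E \<and> E \<subseteq> L \<and> galois_ext (asc_list ! i) E \<longrightarrow>
            ext_degree (asc_list ! i) E \<le> ext_degree (asc_list ! i) (asc_list ! Suc i))"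
    if i: "Suc i < length asc_list" for i
  proof -
    have eq: "asc_list ! i = fld_chain i" "asc_list ! Suc i = fld_chain (Suc i)"
      using nth_asc_list i length_asc_list by auto
    note m = max_galois_sub_fld_chain[of i]
    show ?thesis unfolding eq
      using fld_chain_strict[of i] i length_asc_list max_galois_subD(2,3)[OF m]
        max_galois_sub_ext_degree_le[OF m] by auto
  qed
  ultimately show ?thesis
    unfolding asc_chain_def using length_asc_list nth_asc_list[of 0] fld_chain_0 by auto
qed

lemma asc_chain_nth:
  assumes a: "asc_chain K L cs" and i: "i < length cs"
  shows "cs ! i = fld_chain i"
  using i
proof (induction i)
  case 0 then show ?case using a fld_chain_0 unfolding asc_chain_def by simp
next
  case (Suc i)
  then have IH: "cs ! i = fld_chain i" by simp
  have s: "cs ! i \<subset> cs ! Suc i" "cs ! Suc i \<subseteq> L" "galois_ext (cs ! i) (cs ! Suc i)"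
    "\<forall>E. cs ! i \<subseteq> E \<and> E \<subseteq> L \<and> galois_ext (cs ! i) E \<longrightarrow>
       ext_degree (cs ! i) E \<le> ext_degree (cs ! i) (cs ! Suc i)"
    using a Suc.prems unfolding asc_chain_def by auto
  note m = max_galois_sub_fld_chain[of i]
  have E': "fld_chain i \<subseteq> cs ! Suc i" "cs ! Suc i \<subseteq> L" "galois_ext (fld_chain i) (cs ! Suc i)"
    using s(1-3) IH by auto
  have "ext_degree (fld_chain i) (fld_chain (Suc i)) \<le> ext_degree (fld_chain i) (cs ! Suc i)"
    using spec[OF s(4), of "fld_chain (Suc i)"] max_galois_subD(1-3)[OF m] IH by simp
  moreover have
    "ext_degree (fld_chain i) (cs ! Suc i) \<le> ext_degree (fld_chain i) (fld_chain (Suc i))"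
    using max_galois_sub_ext_degree_le[OF m E'] .
  ultimately show ?case using max_galois_sub_ext_degree_eq[OF m E'] by simp
qed

lemma asc_chain_unique:
  assumes a: "asc_chain K L cs"
  shows "cs = asc_list"
proof -
  have ne: "cs \<noteq> []"
    and st: "\<And>i. Suc i < length cs \<Longrightarrow> cs ! i \<subset> cs ! Suc i"
    and la: "t_idx (last cs) L = 1"
    using a unfolding asc_chain_def by auto
  note nth = asc_chain_nth[OF a]
  obtain n where nl: "length cs = Suc n" using ne by (cases cs) auto
  have "last cs = fld_chain n" using last_conv_nth[OF ne] nth[of n] nl by simp
  then have "ext_degree (fld_chain n) (fld_chain (Suc n)) = 1"
    using la asc_field_fld_chain[of n] unfolding t_idx_def by simp
  then have "grp_chain (Suc n) = grp_chain n"
    using ext_degree_eq_1 max_galois_subD(3)[OF max_galois_sub_fld_chain] grp_chain_eq_iff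
    unfolding galois_ext_def by metis
  then have "chain_len \<le> n" by (rule chain_len_le)
  moreover have "\<not> chain_len < n"
  proof
    assume lt: "chain_len < n"
    then have "Suc chain_len < length cs" using nl by simp
    then have "cs ! chain_len \<subset> cs ! Suc chain_len" using st by blast
    moreover have "fld_chain (Suc chain_len) = fld_chain chain_len"
      using grp_chain_chain_len grp_chain_eq_iff by blast
    ultimately show False using nth[of chain_len] nth[of "Suc chain_len"] nl lt by simp
  qed
  ultimately have "n = chain_len" by simp
  then show ?thesis using nth nth_asc_list nl length_asc_list by (intro nth_equalityI) auto
qed

lemma asc_chain_iff: "asc_chain K L cs \<longleftrightarrow> cs = asc_list"
  using asc_chain_asc_list asc_chain_unique by blast

abbreviation "HG \<equiv> ncl \<G> \<H>"
abbreviation "F \<equiv> fix_field Lt HG"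

lemma HG_normal: "HG \<lhd> \<G>" and aut_L_subset_HG: "\<H> \<subseteq> HG"
  using ncl_props(1,2)[OF galgrp_group[OF Lt_subfield] aut_subgroup[OF K_subset_L Lt_subfield]]
    by auto

lemma fld_chain_1: "fld_chain (Suc 0) = F"
  using ncl_eq_grp_chain_1 by simp

lemma max_galois_sub_F: "max_galois_sub K L F"
  using fix_ncl_max_galois_sub[OF galois_Lt order_refl L_subfield K_subset_L L_subset_Lt] .

lemma F_max_degree:
  "\<forall>E. K \<subseteq> E \<and> E \<subseteq> L \<and> galois_ext K E \<longrightarrow> ext_degree K E \<le> ext_degree K F"
  "\<forall>E. K \<subseteq> E \<and> E \<subseteq> L \<and> galois_ext K E \<and> ext_degree K E = ext_degree K F \<longrightarrow> E = F"
  using max_galois_sub_ext_degree_le[OF max_galois_sub_F]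
    max_galois_sub_ext_degree_eq[OF max_galois_sub_F]
  by blast+

lemma finite_ext_K_F: "finite_ext K F" and finite_ext_F_L: "finite_ext F L"
  using max_galois_subD(1-3)[OF max_galois_sub_F] finite_ext_intermediate[OF ext]
  unfolding galois_ext_def finite_ext_def by blast+

lemma t_idx_K: "t_idx K L = ext_degree K F" and u_idx_K: "u_idx K L = ext_degree F L"
  unfolding t_idx_def u_idx_def asc_field_def Let_def by simp_all

lemma t_idx_mult_u_idx: "t_idx K L * u_idx K L = ext_degree K L"
  using ext_degree_tower[OF finite_ext_K_F finite_ext_F_L] t_idx_K u_idx_K by simp

lemma t_idx_K_idx: "t_idx K L = idx \<G> HG"
  using ext_degree_fix_field_idx[OF galois_Lt order_refl normal_imp_subgroup[OF HG_normal]]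
  unfolding t_idx_K .

lemma u_idx_K_idx: "u_idx K L = idx (\<G>\<lparr>carrier := HG\<rparr>) \<H>"
  using u_idx_fld_chain[of 0] fld_chain_0 ncl_eq_grp_chain_1 by simp

lemma cluster_size_dvd: "cluster_size K L dvd t_idx K L * cluster_size F L"
proof -
  have KF: "K \<subseteq> F" and FL: "F \<subseteq> L" and gF: "galois_ext K F"
    using max_galois_subD(1-3)[OF max_galois_sub_F] by auto
  show ?thesis
    using card_aut_dvd[OF ext order_refl gF FL] cluster_size_card_aut[OF ext order_refl]
      cluster_size_card_aut[OF finite_ext_F_L KF] t_idx_K by simp
qed

lemma length_asc_list_desc_list: "length asc_list = length desc_list"
  using length_asc_list length_desc_list by simp

lemma nth_asc_list_desc_list:
  "\<forall>i < length asc_list. asc_list ! i = fix_field Lt (desc_list ! i) \<and>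
    t_idx (asc_list ! i) L =
      idx (\<G>\<lparr>carrier := desc_list ! i\<rparr>) (ncl (\<G>\<lparr>carrier := desc_list ! i\<rparr>) \<H>) \<and>
    u_idx (asc_list ! i) L = idx (\<G>\<lparr>carrier := ncl (\<G>\<lparr>carrier := desc_list ! i\<rparr>) \<H>\<rparr>) \<H>"
  using nth_asc_list nth_desc_list length_asc_list t_idx_fld_chain u_idx_fld_chain by simp

lemma last_asc_list_eq_L_iff:
  assumes "L \<noteq> K"
  shows "last asc_list = L \<longleftrightarrow> 2 \<le> length asc_list \<and> galois_ext (asc_list ! (length asc_list - 2)) L"
proof (cases chain_len)
  case 0
  then show ?thesis using assms last_asc_list fld_chain_0 length_asc_list by simp
next
  case (Suc j)
  have last: "asc_list ! (length asc_list - 2) = fld_chain j"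
    using nth_asc_list[of j] length_asc_list Suc by simp
  note m = max_galois_sub_fld_chain[of j]
  have "galois_ext (fld_chain j) L \<Longrightarrow> L \<subseteq> fld_chain (Suc j)"
    using max_galois_subD(4)[OF m, of L] fld_chain_props[of j] by blast
  then show ?thesis
    using last last_asc_list Suc length_asc_list max_galois_subD(2,3)[OF m] by auto
qed

lemma t_idx_eq_1_iff: "t_idx K L = 1 \<longleftrightarrow> HG = carrier \<G>"
proof -
  have "t_idx K L = 1 \<longleftrightarrow> F = K"
    using t_idx_K ext_degree_eq_1[OF finite_ext_K_F] ext_degree_self[OF K_subfield] by auto
  also have "\<dots> \<longleftrightarrow> grp_chain (Suc 0) = grp_chain 0"
    using grp_chain_eq_iff fld_chain_0 fld_chain_1 by metis
  finally show ?thesis using ncl_eq_grp_chain_1 by simp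
qed

lemma HG_eq_carrier_iff: "HG = carrier \<G> \<longleftrightarrow> asc_list = [K]"
proof -
  have "HG = carrier \<G> \<longleftrightarrow> grp_chain (Suc 0) = grp_chain 0"
    unfolding ncl_eq_grp_chain_1 ncl_chain.simps(1) ..
  also have "\<dots> \<longleftrightarrow> chain_len = 0"
    using chain_len_le[of 0] grp_chain_chain_len by (metis le_zero_eq)
  also have "\<dots> \<longleftrightarrow> asc_list = [K]"
  proof
    assume "chain_len = 0"
    then show "asc_list = [K]" using fld_chain_0 unfolding asc_list_def by simp
  next
    assume "asc_list = [K]"
    then show "chain_len = 0" using length_asc_list by simp
  qed
  finally show ?thesis .
qed

lemma galois_iff_HG_trivial: "galois_ext K L \<longleftrightarrow> HG = {\<one>\<^bsub>\<G>\<^esub>}"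
proof
  assume "galois_ext K L"
  then have "Lt = L" using gal_closure_galois(3)[OF ext order_refl order_refl] L_subset_Lt by blast
  then have "\<H> = {\<one>\<^bsub>\<G>\<^esub>}" using aut_self by simp
  then show "HG = {\<one>\<^bsub>\<G>\<^esub>}"
    using ncl_normal_eq[OF galgrp_group[OF Lt_subfield]
        group.one_is_normal[OF galgrp_group[OF Lt_subfield]]]
    by simp
next
  assume "HG = {\<one>\<^bsub>\<G>\<^esub>}"
  then have "F = Lt" using fix_field_id by simp
  then have "L = F" using max_galois_subD(2)[OF max_galois_sub_F] L_subset_Lt by blast
  then show "galois_ext K L" using max_galois_subD(3)[OF max_galois_sub_F] by simp
qed

lemma HG_trivial_iff: "HG = {\<one>\<^bsub>\<G>\<^esub>} \<longleftrightarrow> HG = \<H>"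
proof
  assume "HG = {\<one>\<^bsub>\<G>\<^esub>}"
  moreover have "\<one>\<^bsub>\<G>\<^esub> \<in> \<H>" using id_aut by simp
  ultimately show "HG = \<H>" using aut_L_subset_HG by auto
next
  assume "HG = \<H>"
  then have "L = F" using fix_field_aut_L by simp
  then show "HG = {\<one>\<^bsub>\<G>\<^esub>}" using galois_iff_HG_trivial max_galois_subD(3)[OF max_galois_sub_F]
    by simp
qed

lemma grp_chain_Suc_eq_aut_L: "\<H> \<lhd> \<G>\<lparr>carrier := grp_chain i\<rparr> \<Longrightarrow> grp_chain (Suc i) = \<H>"
  using ncl_normal_eq[OF group.subgroup_imp_group[OF galgrp_group[OF Lt_subfield]
      grp_chain_subgroup]]
  by simp

lemma grp_chain_stays_aut_L:
  assumes "grp_chain i = \<H>"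
  shows "grp_chain (Suc i) = \<H>"
proof (rule grp_chain_Suc_eq_aut_L)
  show "\<H> \<lhd> \<G>\<lparr>carrier := grp_chain i\<rparr>"
    unfolding assms
      using group.normal_self[OF group.subgroup_imp_group[OF galgrp_group[OF Lt_subfield]
        aut_subgroup[OF K_subset_L Lt_subfield]]] by simp
qed

lemma HG_eq_aut_L_iff:
  assumes "L \<noteq> K"
  shows "HG = \<H> \<longleftrightarrow> asc_list = [K, L]"
proof
  assume a: "HG = \<H>"
  then have "F = L" using fix_field_aut_L by simp
  then have "grp_chain (Suc 0) \<noteq> grp_chain 0"
    using grp_chain_eq_iff fld_chain_0 fld_chain_1 assms by metis
  then have "chain_len \<noteq> 0" using grp_chain_chain_len by auto
  moreover have "chain_len \<le> Suc 0"
    using chain_len_le[of "Suc 0"] grp_chain_stays_aut_L[of "Suc 0"] a ncl_eq_grp_chain_1 by simp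
  ultimately have "chain_len = Suc 0" by simp
  then show "asc_list = [K, L]"
    using fld_chain_0 fld_chain_1 \<open>F = L\<close> unfolding asc_list_def by simp
next
  assume a: "asc_list = [K, L]"
  then have "chain_len = Suc 0" using length_asc_list by simp
  then have "fld_chain (Suc 0) = L" using nth_asc_list[of "Suc 0"] a by simp
  then show "HG = \<H>" using fld_chain_props[of "Suc 0"] ncl_eq_grp_chain_1 by simp
qed

lemma aut_L_normal_in_HG_iff:
  "(\<H> \<lhd> \<G>\<lparr>carrier := HG\<rparr> \<and> \<H> \<noteq> HG) \<longleftrightarrow> (HG \<noteq> carrier \<G> \<and> HG \<noteq> \<H> \<and> \<H> \<lhd> \<G>\<lparr>carrier := HG\<rparr>)"
proof -
  have "HG \<noteq> carrier \<G>" if "\<H> \<lhd> \<G>\<lparr>carrier := HG\<rparr>" "\<H> \<noteq> HG"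
  proof
    assume "HG = carrier \<G>"
    then have "\<H> \<lhd> \<G>" using that(1) by (simp add: galgrp_def)
    then show False
      using ncl_props(3)[OF galgrp_group[OF Lt_subfield] aut_subgroup[OF K_subset_L Lt_subfield]]
        aut_L_subset_HG that(2) by blast
  qed
  then show ?thesis by blast
qed

lemma aut_L_normal_in_HG_iff_asc_list:
  "(HG \<noteq> carrier \<G> \<and> HG \<noteq> \<H> \<and> \<H> \<lhd> \<G>\<lparr>carrier := HG\<rparr>) \<longleftrightarrow> asc_list = [K, F, L]"
proof
  assume a: "HG \<noteq> carrier \<G> \<and> HG \<noteq> \<H> \<and> \<H> \<lhd> \<G>\<lparr>carrier := HG\<rparr>"
  then have g2: "grp_chain (Suc (Suc 0)) = \<H>"
    using grp_chain_Suc_eq_aut_L[of "Suc 0"] ncl_eq_grp_chain_1 by simp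
  have "chain_len \<noteq> 0" using a ncl_eq_grp_chain_1 grp_chain_chain_len by auto
  moreover have "chain_len \<noteq> Suc 0" using a g2 ncl_eq_grp_chain_1 grp_chain_chain_len by auto
  moreover have "chain_len \<le> Suc (Suc 0)" using chain_len_le grp_chain_stays_aut_L[OF g2] g2 by simp
  ultimately have "chain_len = Suc (Suc 0)" by simp
  then show "asc_list = [K, F, L]"
    using fld_chain_0 fld_chain_1 g2 fix_field_aut_L unfolding asc_list_def by simp
next
  assume a: "asc_list = [K, F, L]"
  then have k2: "chain_len = Suc (Suc 0)" using length_asc_list by simp
  then have "fld_chain (Suc (Suc 0)) = L" using nth_asc_list[of "Suc (Suc 0)"] a by simp
  then have g2: "grp_chain (Suc (Suc 0)) = \<H>" using fld_chain_props[of "Suc (Suc 0)"] by simp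
  have "grp_chain (Suc 0) \<noteq> grp_chain 0" using grp_chain_Suc_neq[of 0] k2 by simp
  moreover have "grp_chain (Suc (Suc 0)) \<noteq> grp_chain (Suc 0)" using grp_chain_Suc_neq[of "Suc 0"] k2
    by simp
  ultimately show "HG \<noteq> carrier \<G> \<and> HG \<noteq> \<H> \<and> \<H> \<lhd> \<G>\<lparr>carrier := HG\<rparr>"
    using grp_chain_Suc_normal[of "Suc 0"] g2 ncl_eq_grp_chain_1 ncl_chain.simps(1) by metis
qed

end

theorem theorem7p5:
  fixes K L :: "'a::field set"
  assumes perfect: "perfect_subfield K"
    and closure: "is_alg_closure_of K"
    and ext: "finite_ext K L"
    and nontriv: "L \<noteq> K"
  defines "Lt \<equiv> gal_closure K L"
    and "G \<equiv> galgrp (gal_closure K L) K"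
    and "H \<equiv> aut (gal_closure K L) L"
    and "HG \<equiv> ncl (galgrp (gal_closure K L) K) (aut (gal_closure K L) L)"
    and "F \<equiv> fix_field (gal_closure K L) (ncl (galgrp (gal_closure K L) K) (aut (gal_closure K L) L))"
  shows
    \<comment> \<open>(1)\<close>
    "K \<subseteq> F \<and> F \<subseteq> L \<and> galois_ext K F \<and>
     (\<forall>E. K \<subseteq> E \<and> E \<subseteq> L \<and> galois_ext K E \<longrightarrow> ext_degree K E \<le> ext_degree K F) \<and>
     (\<forall>E. K \<subseteq> E \<and> E \<subseteq> L \<and> galois_ext K E \<and> ext_degree K E = ext_degree K F \<longrightarrow> E = F)
   \<and> \<comment> \<open>(2)\<close>
     t_idx K L = ext_degree K F \<and> u_idx K L = ext_degree F L \<and>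
     t_idx K L * u_idx K L = ext_degree K L \<and>
     t_idx K L = idx G HG \<and> u_idx K L = idx (G\<lparr>carrier := HG\<rparr>) H \<and>
     cluster_size K L dvd t_idx K L * cluster_size F L
   \<and> \<comment> \<open>(3)--(7)\<close>
     (\<exists>cs gs.
        asc_chain K L cs \<and> (\<forall>cs'. asc_chain K L cs' \<longrightarrow> cs' = cs) \<and>
        desc_chain G H gs \<and> (\<forall>gs'. desc_chain G H gs' \<longrightarrow> gs' = gs) \<and>
        length cs = length gs \<and>
        (\<forall>i < length cs. cs ! i = fix_field Lt (gs ! i) \<and>
            t_idx (cs ! i) L = idx (G\<lparr>carrier := gs ! i\<rparr>) (ncl (G\<lparr>carrier := gs ! i\<rparr>) H) \<and>
            u_idx (cs ! i) L = idx (G\<lparr>carrier := ncl (G\<lparr>carrier := gs ! i\<rparr>) H\<rparr>) H) \<and>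
        \<comment> \<open>(4)\<close>
        (last cs = L \<longleftrightarrow> (2 \<le> length cs \<and> galois_ext (cs ! (length cs - 2)) L)) \<and>
        \<comment> \<open>(5)\<close>
        (t_idx K L = 1 \<longleftrightarrow> HG = carrier G) \<and> (HG = carrier G \<longleftrightarrow> cs = [K]) \<and>
        \<comment> \<open>(6)\<close>
        (galois_ext K L \<longleftrightarrow> HG = {\<one>\<^bsub>G\<^esub>}) \<and> (HG = {\<one>\<^bsub>G\<^esub>} \<longleftrightarrow> HG = H) \<and>
        (HG = H \<longleftrightarrow> cs = [K, L]) \<and>
        \<comment> \<open>(7)\<close>
        ((H \<lhd> G\<lparr>carrier := HG\<rparr> \<and> H \<noteq> HG) \<longleftrightarrow>
           (HG \<noteq> carrier G \<and> HG \<noteq> H \<and> H \<lhd> G\<lparr>carrier := HG\<rparr>)) \<and>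
        ((HG \<noteq> carrier G \<and> HG \<noteq> H \<and> H \<lhd> G\<lparr>carrier := HG\<rparr>) \<longleftrightarrow> cs = [K, F, L]))"
proof -
  interpret perfect_base_field_ext K L
    using perfect closure ext by unfold_locales (auto simp: perfect_base_field_def)
  show ?thesis
    unfolding Lt_def G_def H_def HG_def F_def
    by (intro conjI exI[of _ asc_list] exI[of _ desc_list])
      (fact max_galois_subD(1-3)[OF max_galois_sub_F] F_max_degree t_idx_K u_idx_K t_idx_mult_u_idx
        t_idx_K_idx u_idx_K_idx cluster_size_dvd asc_chain_asc_list desc_chain_desc_list
        length_asc_list_desc_list nth_asc_list_desc_list last_asc_list_eq_L_iff[OF nontriv]
        t_idx_eq_1_iff HG_eq_carrier_iff galois_iff_HG_trivial HG_trivial_iff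
        HG_eq_aut_L_iff[OF nontriv] aut_L_normal_in_HG_iff aut_L_normal_in_HG_iff_asc_list
      | simp add: asc_chain_iff desc_chain_iff)+
qed

end
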